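(* Fix integers $m \geq 1$ and $n \geq 0$, and let $\mathsf{G3Ldm}_{n}^{m}$ be the labelled sequent calculus described in the context. Then: (1) every sequent of the form $\mathcal{R}, w:\phi, w:\overline{\phi}, \Gamma$ (with $\phi \in \mathcal{L}^m$ arbitrary) is derivable in $\mathsf{G3Ldm}_{n}^{m}$; (2) substitution of labels is height-preserving admissible: if $\Lambda$ is derivable with height at most $h$, then the sequent $\Lambda(y/x)$ obtained by replacing every occurrence of the label $x$ by the label $y$ is derivable with height at most $h$; (3) every inference rule of $\mathsf{G3Ldm}_{n}^{m}$ is height-preserving invertible: if the conclusion of an instance of a rule is derivable with height at most $h$, then each premise of that instance is derivable with height at most $h$; (4) the following weakening and contraction rules are height-preserving admissible: $$\frac{\mathcal{R},\Gamma}{\mathcal{R},\mathcal{R}',\Gamma',\Gamma}\,(\mathsf{wk}) \qquad \frac{\mathcal{R},\mathcal{R}',\mathcal{R}',\Gamma}{\mathcal{R},\mathcal{R}',\Gamma}\,(\mathsf{ctr})_{\mathsf{R}} \qquad \frac{\mathcal{R},\Gamma',\Gamma',\Gamma}{\mathcal{R},\Gamma',\Gamma}\,(\mathsf{ctr})_{\mathsf{F}}$$ (i.e., whenever the premise is derivable with height at most $h$, so is the conclusion); (5) the cut rule $$\frac{\mathcal{R},x:\phi,\Gamma \qquad \mathcal{R},x:\overline{\phi},\Gamma}{\mathcal{R},\Gamma}\,(\mathsf{cut})$$ is admissible (whenever both premises are derivable, so is the conclusion); (6) for every formula $\phi \in \mathcal{L}^m$ and label $w$, the sequent $w:\phi$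 is derivable in $\mathsf{G3Ldm}_{n}^{m}$ if and only if $\phi$ is a theorem of the Hilbert calculus $\mathsf{Ldm}_{n}^{m}$.
   Context: Language. Let $Ag=\{1,\dots,m\}$ be a set of agents and $Var$ a countable set of propositional variables. Formulas of $\mathcal{L}^m$ (negation normal form) are given by $\phi ::= p \mid \overline{p} \mid (\phi\wedge\phi) \mid (\phi\vee\phi) \mid \Box\phi \mid \Diamond\phi \mid [i]\phi \mid \langle i\rangle\phi$ with $p\in Var$, $i \in Ag$. The negation $\overline{\phi}$ of a formula is obtained by swapping $p$ and $\overline{p}$, $\wedge$ and $\vee$, $\Box$ and $\Diamond$, and $[i]$ and $\langle i\rangle$. Write $\phi\rightarrow\psi$ for $\overline{\phi}\vee\psi$, and $\phi \leftrightarrow\psi$ for $(\phi\to\psi)\wedge(\psi\to\phi)$. Hilbert calculus $\mathsf{Ldm}_{n}^{m}$. Axioms: all instances of $\phi \to (\psi\to\phi)$, $(\overline{\psi}\to\overline{\phi})\to(\phi\to\psi)$, $(\phi\to(\psi\to\chi))\to((\phi\to\psi)\to(\phi\to\chi))$; for $\Box$ and for each $[i]$ the S5 axioms $\Box(\phi\to\psi)\to(\Box\phi\to\Box\psi)$, $\Box\phi\to\phi$, $\Diamond\phi\to\Box\Diamond\phi$, $\Box\phi\vee\Diamond\overline{\phi}$ and $[i](\phi\to\psi)\to([i]\phi\to[i]\psi)$, $[i]\phi\to\phi$, $\langle i\rangle\phi\to[i]\langle i\rangle\phi$, $[i]\phi\vee\langle i\rangle\overline{\phi}$; (Bridge) $\Box\phi\to[i]\phi$;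 (IOA) $\bigwedge_{i\in Ag}\Diamond[i]\phi_i \to \Diamond(\bigwedge_{i\in Ag}[i]\phi_i)$; and, only when $n>0$, for each $i\in Ag$, $(\mathsf{APC}^i_n)$: $\Diamond[i]\phi_1 \wedge \Diamond(\overline{\phi}_1\wedge[i]\phi_2)\wedge\cdots\wedge\Diamond(\overline{\phi}_1\wedge\cdots\wedge\overline{\phi}_{n-1}\wedge[i]\phi_n)\to \phi_1\vee\cdots\vee\phi_n$. Rules: modus ponens and $\Box$-necessitation (from $\phi$ infer $\Box\phi$). A theorem is a formula derivable from no premises. Labelled sequents. Fix a denumerable set of labels $x,y,z,w,u,v,\dots$. A labelled sequent $\mathcal{R},\Gamma$ consists of a multiset $\mathcal{R}$ of relational atoms $\mathcal{R}_i xy$ ($i\in Ag$) and a multiset $\Gamma$ of labelled formulas $x:\phi$ ($\phi\in\mathcal{L}^m$). Derivations are finite trees of rule instances whose leaves are instances of $(\mathsf{id})$; height is the length of the longest branch. Rules of $\mathsf{G3Ldm}_{n}^{m}$ (written premise(s) / conclusion): $(\mathsf{id})$: no premise / $\mathcal{R}, w:p, w:\overline{p},\Gamma$. $(\wedge)$: $\mathcal{R}, w:\phi\wedge\psi, w:\phi,\Gamma$ and $\mathcal{R}, w:\phi\wedge\psi, w:\psi,\Gamma$ / $\mathcal{R}, w:\phi\wedge\psi,\Gamma$. $(\vee)$: $\mathcal{R}, w:\phi\vee\psi, w:\phi, w:\psi,\Gamma$ / $\mathcal{R}, w:\phi\vee\psi,\Gamma$. $([i])$: $\mathcal{R},\mathcal{R}_iwv,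 v:\phi,\Gamma$ / $\mathcal{R}, w:[i]\phi,\Gamma$, with $v$ not occurring in the conclusion. $(\Box)$: $\mathcal{R}, w:\Box\phi, v:\phi,\Gamma$ / $\mathcal{R}, w:\Box\phi,\Gamma$, with $v$ not occurring in the conclusion. $(\Diamond)$: $\mathcal{R}, w:\Diamond\phi, u:\phi,\Gamma$ / $\mathcal{R}, w:\Diamond\phi,\Gamma$ ($u$ any label). $(\mathsf{IOA})$: $\mathcal{R},\mathcal{R}_1u_1v,\dots,\mathcal{R}_mu_mv,\Gamma$ / $\mathcal{R},\Gamma$, with $v$ not occurring in the conclusion ($u_1,\dots,u_m$ any labels). $(\langle i\rangle)$: $\mathcal{R},\mathcal{R}_iwu, w:\langle i\rangle\phi, u:\phi,\Gamma$ / $\mathcal{R},\mathcal{R}_iwu, w:\langle i\rangle\phi,\Gamma$. $(\mathsf{refl}_i)$: $\mathcal{R},\mathcal{R}_iww,\Gamma$ / $\mathcal{R},\Gamma$. $(\mathsf{eucl}_i)$: $\mathcal{R},\mathcal{R}_iwu,\mathcal{R}_iwv,\mathcal{R}_iuv,\Gamma$ / $\mathcal{R},\mathcal{R}_iwu,\mathcal{R}_iwv,\Gamma$. $(\mathsf{APC}^i_n)$ (only when $n>0$): for any labels $w_0,\dots,w_n$, the premises $\mathcal{R},\mathcal{R}_iw_kw_j,\Gamma$ for all $0\le k\le n-1$, $k+1\le j\le n$ / $\mathcal{R},\Gamma$. There is a copy of $([i])$, $(\langle i\rangle)$, $(\mathsf{refl}_i)$, $(\mathsf{eucl}_i)$,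 $(\mathsf{APC}^i_n)$ for each $i\in Ag$. *)

theory Defs
  imports Main "HOL-Library.Multiset"
begin

datatype fm =
    At nat
  | NAt nat
  | Conj fm fm
  | Disj fm fm
  | Box fm
  | Dia fm
  | Stit nat fm
  | Cstit nat fm

fun neg :: "fm \<Rightarrow> fm" where
  "neg (At p) = NAt p"
| "neg (NAt p) = At p"
| "neg (Conj a b) = Disj (neg a) (neg b)"
| "neg (Disj a b) = Conj (neg a) (neg b)"
| "neg (Box a) = Dia (neg a)"
| "neg (Dia a) = Box (neg a)"
| "neg (Stit i a) = Cstit i (neg a)"
| "neg (Cstit i a) = Stit i (neg a)"

definition imp :: "fm \<Rightarrow> fm \<Rightarrow> fm" where
  "imp a b = Disj (neg a) b"

definition iff :: "fm \<Rightarrow> fm \<Rightarrow> fm" where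
  "iff a b = Conj (imp a b) (imp b a)"

fun agents :: "fm \<Rightarrow> nat set" where
  "agents (At p) = {}"
| "agents (NAt p) = {}"
| "agents (Conj a b) = agents a \<union> agents b"
| "agents (Disj a b) = agents a \<union> agents b"
| "agents (Box a) = agents a"
| "agents (Dia a) = agents a"
| "agents (Stit i a) = insert i (agents a)"
| "agents (Cstit i a) = insert i (agents a)"

definition wf_fm :: "nat \<Rightarrow> fm \<Rightarrow> bool" where
  "wf_fm m a \<longleftrightarrow> agents a \<subseteq> {1..m}"

text \<open>Finite right-nested conjunctions/disjunctions (only used on nonempty lists;
  the empty cases are set to a tautology resp. contradiction and never arise).\<close>
fun Conjs :: "fm list \<Rightarrow> fm" where
  "Conjs [] = Disj (At 0) (NAt 0)"
| "Conjs [a] = a"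
| "Conjs (a # as) = Conj a (Conjs as)"

fun Disjs :: "fm list \<Rightarrow> fm" where
  "Disjs [] = Conj (At 0) (NAt 0)"
| "Disjs [a] = a"
| "Disjs (a # as) = Disj a (Disjs as)"

inductive Ldm :: "nat \<Rightarrow> nat \<Rightarrow> fm \<Rightarrow> bool" for m n where
  A1: "wf_fm m a \<Longrightarrow> wf_fm m b \<Longrightarrow> Ldm m n (imp a (imp b a))"
| A2: "wf_fm m a \<Longrightarrow> wf_fm m b \<Longrightarrow>
      Ldm m n (imp (imp (neg b) (neg a)) (imp a b))"
| A3: "wf_fm m a \<Longrightarrow> wf_fm m b \<Longrightarrow> wf_fm m c \<Longrightarrow>
      Ldm m n (imp (imp a (imp b c)) (imp (imp a b) (imp a c)))"
| BoxK: "wf_fm m a \<Longrightarrow> wf_fm m b \<Longrightarrow>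
      Ldm m n (imp (Box (imp a b)) (imp (Box a) (Box b)))"
| BoxT: "wf_fm m a \<Longrightarrow> Ldm m n (imp (Box a) a)"
| Box5: "wf_fm m a \<Longrightarrow> Ldm m n (imp (Dia a) (Box (Dia a)))"
| BoxD: "wf_fm m a \<Longrightarrow> Ldm m n (Disj (Box a) (Dia (neg a)))"
| StitK: "i \<in> {1..m} \<Longrightarrow> wf_fm m a \<Longrightarrow> wf_fm m b \<Longrightarrow>
      Ldm m n (imp (Stit i (imp a b)) (imp (Stit i a) (Stit i b)))"
| StitT: "i \<in> {1..m} \<Longrightarrow> wf_fm m a \<Longrightarrow> Ldm m n (imp (Stit i a) a)"
| Stit5: "i \<in> {1..m} \<Longrightarrow> wf_fm m a \<Longrightarrow>
      Ldm m n (imp (Cstit i a) (Stit i (Cstit i a)))"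
| StitD: "i \<in> {1..m} \<Longrightarrow> wf_fm m a \<Longrightarrow>
      Ldm m n (Disj (Stit i a) (Cstit i (neg a)))"
| Bridge: "i \<in> {1..m} \<Longrightarrow> wf_fm m a \<Longrightarrow> Ldm m n (imp (Box a) (Stit i a))"
| IOA: "(\<forall>i\<in>{1..m}. wf_fm m (as i)) \<Longrightarrow>
      Ldm m n (imp (Conjs (map (\<lambda>i. Dia (Stit i (as i))) [1..<Suc m]))
                   (Dia (Conjs (map (\<lambda>i. Stit i (as i)) [1..<Suc m]))))"
| APC: "n > 0 \<Longrightarrow> i \<in> {1..m} \<Longrightarrow> length as = n \<Longrightarrow> (\<forall>a\<in>set as. wf_fm m a) \<Longrightarrow>
      Ldm m n (imp (Conjs (map (\<lambda>k. Dia (Conjs (map neg (take k as) @ [Stit i (as ! k)])))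
                               [0..<n]))
                   (Disjs as))"
| MP: "Ldm m n (imp a b) \<Longrightarrow> Ldm m n a \<Longrightarrow> Ldm m n b"
| Nec: "Ldm m n a \<Longrightarrow> Ldm m n (Box a)"

text \<open>A relational atom R_i x y is the triple (i, x, y); a labelled formula x:phi
  is the pair (x, phi). A sequent is a pair of multisets.\<close>
type_synonym ratom = "nat \<times> nat \<times> nat"
type_synonym lfm = "nat \<times> fm"
type_synonym sequent = "ratom multiset \<times> lfm multiset"

definition labels :: "sequent \<Rightarrow> nat set" where
  "labels S = (\<Union>(i,x,y)\<in>set_mset (fst S). {x, y}) \<union> (\<Union>(x,a)\<in>set_mset (snd S). {x})"

definition wf_seq :: "nat \<Rightarrow> sequent \<Rightarrow> bool" where
  "wf_seq m S \<longleftrightarrow> (\<forall>(i,x,y)\<in>set_mset (fst S). i \<in> {1..m})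
                 \<and> (\<forall>(x,a)\<in>set_mset (snd S). wf_fm m a)"

inductive rule :: "nat \<Rightarrow> nat \<Rightarrow> sequent list \<Rightarrow> sequent \<Rightarrow> bool" for m n where
  conj: "rule m n [(R, add_mset (w, Conj a b) (add_mset (w, a) G)),
                   (R, add_mset (w, Conj a b) (add_mset (w, b) G))]
                  (R, add_mset (w, Conj a b) G)"
| disj: "rule m n [(R, add_mset (w, Disj a b) (add_mset (w, a) (add_mset (w, b) G)))]
                  (R, add_mset (w, Disj a b) G)"
| stit: "i \<in> {1..m} \<Longrightarrow> v \<notin> labels (R, add_mset (w, Stit i a) G) \<Longrightarrow>
         rule m n [(add_mset (i, w, v) R, add_mset (v, a) G)]
                  (R, add_mset (w, Stit i a) G)"
| box: "v \<notin> labels (R, add_mset (w, Box a) G) \<Longrightarrow>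
         rule m n [(R, add_mset (w, Box a) (add_mset (v, a) G))]
                  (R, add_mset (w, Box a) G)"
| dia: "rule m n [(R, add_mset (w, Dia a) (add_mset (u, a) G))]
                  (R, add_mset (w, Dia a) G)"
| ioa: "v \<notin> labels (R, G) \<Longrightarrow>
         rule m n [(R + image_mset (\<lambda>i. (i, u i, v)) (mset [1..<Suc m]), G)] (R, G)"
| cstit: "i \<in> {1..m} \<Longrightarrow>
         rule m n [(add_mset (i, w, u) R, add_mset (w, Cstit i a) (add_mset (u, a) G))]
                  (add_mset (i, w, u) R, add_mset (w, Cstit i a) G)"
| refl: "i \<in> {1..m} \<Longrightarrow> rule m n [(add_mset (i, w, w) R, G)] (R, G)"
| eucl: "i \<in> {1..m} \<Longrightarrow>
         rule m n [(add_mset (i, w, u) (add_mset (i, w, v) (add_mset (i, u, v) R)), G)]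
                  (add_mset (i, w, u) (add_mset (i, w, v) R), G)"
| apc: "n > 0 \<Longrightarrow> i \<in> {1..m} \<Longrightarrow>
         rule m n [(add_mset (i, ws k, ws j) R, G). k \<leftarrow> [0..<n], j \<leftarrow> [Suc k..<Suc n]]
                  (R, G)"

text \<open>deriv m n h S: S is derivable in G3Ldm^m_n with height at most h
  (height = length of the longest branch; an (id) leaf has height 0).\<close>
inductive deriv :: "nat \<Rightarrow> nat \<Rightarrow> nat \<Rightarrow> sequent \<Rightarrow> bool" for m n where
  id: "deriv m n h (R, add_mset (w, At p) (add_mset (w, NAt p) G))"
| step: "rule m n ps S \<Longrightarrow> (\<forall>P\<in>set ps. deriv m n h P) \<Longrightarrow> deriv m n (Suc h) S"

definition derivable :: "nat \<Rightarrow> nat \<Rightarrow> sequent \<Rightarrow> bool" where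
  "derivable m n S \<longleftrightarrow> (\<exists>h. deriv m n h S)"

definition subst_seq :: "nat \<Rightarrow> nat \<Rightarrow> sequent \<Rightarrow> sequent" where
  "subst_seq y x S =
     (let s = (\<lambda>z. if z = x then y else z) in
      (image_mset (\<lambda>(i, a, b). (i, s a, s b)) (fst S),
       image_mset (\<lambda>(z, a). (s z, a)) (snd S)))"

end

theory Submission
  imports Defs "HOL-Library.Product_Plus"
begin

(* Every rule of G3Ldm is a fixed principal part plus an arbitrary context, and its side conditions
   only ask the eigenlabel of the principal part to be fresh. Renaming labels and adding context
   therefore commute with every rule once the eigenlabel is moved to a fresh label, which gives
   height-preserving substitution and weakening at once. Invertibility and contraction follow by
   induction on the height, cut by induction on the cut formula and, inside, on the height of the
   derivation of its negation.
   A derivable labelled formula is valid on all Ldm frames, and the canonical model of the Hilbert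
   calculus (one moment: the maximal consistent sets sharing the boxed formulas of a root) is such
   a frame, so derivable formulas are theorems. Conversely every axiom of Ldm is derivable, modus
   ponens is an instance of cut, and necessitation is the rule for the box. *)

section \<open>Sequents and relabelling\<close>

lemma finite_labels [simp]: "finite (labels S)"
  by (cases S) (auto simp: labels_def)

lemma labels_empty [simp]: "labels ({#}, {#}) = {}"
  by (simp add: labels_def)

lemma labels_add_mset_rel [simp]: "labels (add_mset (i, x, y) R, G) = insert x (insert y (labels (R, G)))"
  by (auto simp: labels_def)

lemma labels_add_mset_fm [simp]: "labels (R, add_mset \<phi> G) = insert (fst \<phi>) (labels (R, G))"
  by (auto simp: labels_def)

lemma labels_Pair_add [simp]: "labels (R1 + R2, G1 + G2) = labels (R1, G1) \<union> labels (R2, G2)"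
  by (auto simp: labels_def)

lemma labels_add: "labels (S + T) = labels S \<union> labels T"
  by (cases S; cases T) simp

lemma labels_mono: "set_mset R \<subseteq> set_mset R' \<Longrightarrow> set_mset G \<subseteq> set_mset G' \<Longrightarrow> labels (R, G) \<subseteq> labels (R', G')"
  by (auto simp: labels_def)

lemma fresh_label_exists: "finite L \<Longrightarrow> \<exists>v. v \<notin> labels S \<union> L"
  using ex_new_if_finite[OF infinite_UNIV_nat, of "labels S \<union> L"] by simp

lemma ex_fresh_label: "\<exists>v. v \<notin> labels S"
  using fresh_label_exists[of "{}" S] by simp

definition relabel :: "(nat \<Rightarrow> nat) \<Rightarrow> sequent \<Rightarrow> sequent" where
  "relabel f S = (image_mset (\<lambda>(i, x, y). (i, f x, f y)) (fst S), image_mset (\<lambda>(x, a). (f x, a)) (snd S))"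

lemma relabel_Pair [simp]:
  "relabel f (R, G) = (image_mset (\<lambda>(i, x, y). (i, f x, f y)) R, image_mset (\<lambda>(x, a). (f x, a)) G)"
  by (simp add: relabel_def)

lemma relabel_add: "relabel f (S + T) = relabel f S + relabel f T"
  by (cases S; cases T) simp

lemma labels_relabel: "labels (relabel f S) = f ` labels S"
  by (cases S) (auto simp: labels_def image_iff)

lemma relabel_cong: "(\<And>z. z \<in> labels S \<Longrightarrow> f z = g z) \<Longrightarrow> relabel f S = relabel g S"
  by (cases S) (auto simp: labels_def intro!: multiset.map_cong0)

lemma relabel_eq_self: "(\<And>z. z \<in> labels S \<Longrightarrow> f z = z) \<Longrightarrow> relabel f S = S"
  using relabel_cong[of S f id] by (cases S) (simp add: case_prod_unfold)

lemma subst_seq_eq_relabel: "subst_seq y x S = relabel (\<lambda>z. if z = x then y else z) S"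
  unfolding subst_seq_def relabel_def Let_def by simp

definition initial :: "sequent \<Rightarrow> bool" where
  "initial S \<longleftrightarrow> (\<exists>w p. (w, At p) \<in># snd S \<and> (w, NAt p) \<in># snd S)"

lemma initial_mono: "initial (R, G) \<Longrightarrow> set_mset G \<subseteq> set_mset G' \<Longrightarrow> initial (R', G')"
  by (auto simp: initial_def)

lemma deriv_initial: "initial S \<Longrightarrow> deriv m n h S"
proof -
  assume "initial S"
  then obtain w p where at: "(w, At p) \<in># snd S" and nat: "(w, NAt p) \<in># snd S"
    unfolding initial_def by blast
  from at obtain G1 where G1: "snd S = add_mset (w, At p) G1" by (metis multi_member_split)
  with nat obtain G where "G1 = add_mset (w, NAt p) G" by (metis fm.distinct(1) insert_iff
      multi_member_split prod.inject set_mset_add_mset_insert)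
  with G1 have "S = (fst S, add_mset (w, At p) (add_mset (w, NAt p) G))" by (simp add: prod_eq_iff)
  then show ?thesis by (metis deriv.id)
qed

lemma deriv_mono: "deriv m n h S \<Longrightarrow> h \<le> h' \<Longrightarrow> deriv m n h' S"
proof (induction h S arbitrary: h' rule: deriv.induct)
  case (id h R w p G)
  show ?case by (rule deriv.id)
next
  case (step ps S h)
  then obtain h'' where "h' = Suc h''" "h \<le> h''" by (cases h') auto
  then show ?case using step by (auto intro: deriv.step)
qed

lemma derivable_common_height: "\<forall>P\<in>set ps. derivable m n P \<Longrightarrow> \<exists>h. \<forall>P\<in>set ps. deriv m n h P"
proof (induction ps)
  case (Cons P ps)
  then obtain h1 h2 where "\<forall>P\<in>set ps. deriv m n h1 P" "deriv m n h2 P" by (auto simp: derivable_def)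
  then have "\<forall>Q\<in>set (P # ps). deriv m n (max h1 h2) Q" using deriv_mono[of m n _ _ "max h1 h2"] by auto
  then show ?case by blast
qed simp

section \<open>Rules as principal part plus context\<close>

text \<open>The instances of each rule of G3Ldm with the context \<open>(R, \<Gamma>)\<close> deleted. The last argument
  is the set of eigenlabels; the side conditions of the rules say exactly that these are fresh
  for the whole conclusion.\<close>

inductive core_rule :: "nat \<Rightarrow> nat \<Rightarrow> sequent list \<Rightarrow> sequent \<Rightarrow> nat set \<Rightarrow> bool" for m n where
  core_conj: "core_rule m n [({#}, {#(w, Conj a b), (w, a)#}), ({#}, {#(w, Conj a b), (w, b)#})]
    ({#}, {#(w, Conj a b)#}) {}"
| core_disj: "core_rule m n [({#}, {#(w, Disj a b), (w, a), (w, b)#})] ({#}, {#(w, Disj a b)#}) {}"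
| core_stit: "i \<in> {1..m} \<Longrightarrow> v \<noteq> w \<Longrightarrow>
    core_rule m n [({#(i, w, v)#}, {#(v, a)#})] ({#}, {#(w, Stit i a)#}) {v}"
| core_box: "v \<noteq> w \<Longrightarrow> core_rule m n [({#}, {#(w, Box a), (v, a)#})] ({#}, {#(w, Box a)#}) {v}"
| core_dia: "core_rule m n [({#}, {#(w, Dia a), (u, a)#})] ({#}, {#(w, Dia a)#}) {}"
| core_ioa: "core_rule m n [(image_mset (\<lambda>i. (i, u i, v)) (mset [1..<Suc m]), {#})] ({#}, {#}) {v}"
| core_cstit: "i \<in> {1..m} \<Longrightarrow>
    core_rule m n [({#(i, w, u)#}, {#(w, Cstit i a), (u, a)#})] ({#(i, w, u)#}, {#(w, Cstit i a)#}) {}"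
| core_refl: "i \<in> {1..m} \<Longrightarrow> core_rule m n [({#(i, w, w)#}, {#})] ({#}, {#}) {}"
| core_eucl: "i \<in> {1..m} \<Longrightarrow>
    core_rule m n [({#(i, w, u), (i, w, v), (i, u, v)#}, {#})] ({#(i, w, u), (i, w, v)#}, {#}) {}"
| core_apc: "n > 0 \<Longrightarrow> i \<in> {1..m} \<Longrightarrow>
    core_rule m n [({#(i, ws k, ws j)#}, {#}). k \<leftarrow> [0..<n], j \<leftarrow> [Suc k..<Suc n]] ({#}, {#}) {}"

lemma rule_of_core_rule:
  assumes "core_rule m n ps0 S0 E" and "E \<inter> labels (S0 + C) = {}"
  shows "rule m n (map (\<lambda>P. P + C) ps0) (S0 + C)"
proof -
  obtain R G where C: "C = (R, G)" by fastforce
  from assms(1) show ?thesis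
  proof cases
    case (core_ioa u v)
    have "rule m n [(R + image_mset (\<lambda>i. (i, u i, v)) (mset [1..<Suc m]), G)] (R, G)"
      by (rule rule.ioa) (use assms(2) C core_ioa in simp)
    then show ?thesis using C core_ioa by (simp del: mset_upt add: add.commute)
  next
    case (core_apc i ws)
    have "rule m n [(add_mset (i, ws k, ws j) R, G). k \<leftarrow> [0..<n], j \<leftarrow> [Suc k..<Suc n]] (R, G)"
      by (rule rule.apc) (use core_apc in auto)
    then show ?thesis using C core_apc by (simp del: upt_Suc add: map_concat comp_def)
  qed (use assms(2) C in \<open>auto intro!: rule.intros\<close>)
qed

lemma core_rule_of_rule:
  assumes "rule m n ps S"
  obtains ps0 S0 E C where "core_rule m n ps0 S0 E" "E \<inter> labels S = {}" "S = S0 + C"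
    "ps = map (\<lambda>P. P + C) ps0"
  using assms
proof cases
  case (conj R w a b G)
  then show ?thesis using that[OF core_conj, where C="(R, G)"] by simp
next
  case (disj R w a b G)
  then show ?thesis using that[OF core_disj, where C="(R, G)"] by simp
next
  case (stit i v R w a G)
  then have c: "core_rule m n [({#(i, w, v)#}, {#(v, a)#})] ({#}, {#(w, Stit i a)#}) {v}"
    by (auto intro: core_stit)
  show ?thesis by (rule that[OF c, where C="(R, G)"]) (use stit in auto)
next
  case (box v R w a G)
  then have c: "core_rule m n [({#}, {#(w, Box a), (v, a)#})] ({#}, {#(w, Box a)#}) {v}"
    by (auto intro: core_box)
  show ?thesis by (rule that[OF c, where C="(R, G)"]) (use box in auto)
next
  case (dia R w a u G)
  then show ?thesis using that[OF core_dia, where C="(R, G)"] by simp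
next
  case (ioa v R G u)
  then show ?thesis using that[OF core_ioa, where C="(R, G)"] by (simp add: add.commute)
next
  case (cstit i w u R a G)
  then have c: "core_rule m n [({#(i, w, u)#}, {#(w, Cstit i a), (u, a)#})] ({#(i, w, u)#}, {#(w, Cstit i a)#}) {}"
    by (intro core_cstit)
  show ?thesis by (rule that[OF c, where C="(R, G)"]) (use cstit in auto)
next
  case (refl i w R G)
  then have c: "core_rule m n [({#(i, w, w)#}, {#})] ({#}, {#}) {}" by (intro core_refl)
  show ?thesis by (rule that[OF c, where C="(R, G)"]) (use refl in auto)
next
  case (eucl i w u v R G)
  then have c: "core_rule m n [({#(i, w, u), (i, w, v), (i, u, v)#}, {#})] ({#(i, w, u), (i, w, v)#}, {#}) {}"
    by (intro core_eucl)
  show ?thesis by (rule that[OF c, where C="(R, G)"]) (use eucl in auto)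
next
  case (apc i ws R G)
  then have c: "core_rule m n [({#(i, ws k, ws j)#}, {#}). k \<leftarrow> [0..<n], j \<leftarrow> [Suc k..<Suc n]] ({#}, {#}) {}"
    by (intro core_apc)
  show ?thesis by (rule that[OF c, where C="(R, G)"]) (use apc in \<open>auto simp: map_concat comp_def\<close>)
qed

lemma deriv_core_step:
  assumes "core_rule m n ps0 S0 E" and "E \<inter> labels (S0 + C) = {}"
    and "\<forall>P\<in>set ps0. deriv m n h (P + C)"
  shows "deriv m n (Suc h) (S0 + C)"
  using deriv.step[OF rule_of_core_rule[OF assms(1,2)]] assms(3) by simp

lemma deriv_cases_core:
  assumes "deriv m n h S"
  obtains "initial S"
  | h' ps0 S0 E C where "h = Suc h'" "core_rule m n ps0 S0 E" "E \<inter> labels S = {}" "S = S0 + C"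
      "\<forall>P\<in>set ps0. deriv m n h' (P + C)"
  using assms
proof cases
  case (id R w p G)
  then have "initial S" by (auto simp: initial_def)
  then show ?thesis by (rule that(1))
next
  case (step ps h')
  then show ?thesis using that(2) by (elim core_rule_of_rule) auto
qed

lemma core_rule_relabel:
  assumes "core_rule m n ps0 S0 E" and "\<forall>e\<in>E. \<forall>z\<in>labels S0. f e \<noteq> f z"
  shows "core_rule m n (map (relabel f) ps0) (relabel f S0) (f ` E)"
  using assms
proof (induction rule: core_rule.induct)
  case (core_ioa u v)
  then show ?case
    using core_rule.core_ioa[of m n "f \<circ> u" "f v"] by (simp add: multiset.map_comp comp_def del: mset_upt)
next
  case (core_apc i ws)
  then show ?case
    using core_rule.core_apc[of n i m "f \<circ> ws"] by (simp del: upt_Suc add: map_concat comp_def)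
qed (auto intro: core_rule.intros)

lemma core_rule_fst_le_premise: "core_rule m n ps0 S0 E \<Longrightarrow> P \<in> set ps0 \<Longrightarrow> fst S0 \<subseteq># fst P"
  by (induction rule: core_rule.induct) auto

lemma core_rule_snd_le_premise:
  "core_rule m n ps0 S0 E \<Longrightarrow> P \<in> set ps0 \<Longrightarrow> (\<And>w i a. snd S0 \<noteq> {#(w, Stit i a)#}) \<Longrightarrow> snd S0 \<subseteq># snd P"
  by (induction rule: core_rule.induct) auto

lemma core_rule_size_snd: "core_rule m n ps0 S0 E \<Longrightarrow> size (snd S0) \<le> 1"
  by (induction rule: core_rule.induct) auto

lemma core_rule_repeated_atom:
  assumes "core_rule m n ps0 S0 E" and "count (fst S0) \<rho> \<ge> 2"
  obtains i w u where "i \<in> {1..m}" "\<rho> = (i, w, u)" "S0 = ({#(i, w, u), (i, w, u)#}, {#})"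
    "ps0 = [({#(i, w, u), (i, w, u), (i, u, u)#}, {#})]"
  using assms by (induction rule: core_rule.induct) (auto split: if_splits)

section \<open>Height-preserving relabelling and weakening\<close>

lemma deriv_relabel_add: "deriv m n h S \<Longrightarrow> deriv m n h (relabel f S + W)"
proof (induction h S arbitrary: f W rule: deriv.induct)
  case (id h R w p G)
  have "initial (relabel f (R, add_mset (w, At p) (add_mset (w, NAt p) G)) + W)"
    by (cases W) (auto simp: initial_def)
  then show ?case by (rule deriv_initial)
next
  case (step ps S h)
  from step.hyps obtain ps0 S0 E C where core: "core_rule m n ps0 S0 E" and E: "E \<inter> labels S = {}"
    and S: "S = S0 + C" and ps: "ps = map (\<lambda>P. P + C) ps0" by (rule core_rule_of_rule)
  obtain v where v: "v \<notin> labels (relabel f S + W)" using ex_fresh_label by blast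
  define f' where "f' = (\<lambda>z. if z \<in> E then v else f z)"
  have f'_S: "relabel f' S = relabel f S"
    using E by (intro relabel_cong) (auto simp: f'_def)
  have "\<forall>e\<in>E. \<forall>z\<in>labels S0. f' e \<noteq> f' z"
    using E v S by (auto simp: f'_def labels_add labels_relabel)
  then have core': "core_rule m n (map (relabel f') ps0) (relabel f' S0) (f' ` E)"
    by (rule core_rule_relabel[OF core])
  have concl: "relabel f S + W = relabel f' S0 + (relabel f' C + W)"
    using f'_S S by (simp add: relabel_add add.assoc[symmetric])
  have "f' ` E \<inter> labels (relabel f' S0 + (relabel f' C + W)) = {}"
    using v concl by (auto simp: f'_def)
  moreover have "\<forall>P\<in>set (map (relabel f') ps0). deriv m n h (P + (relabel f' C + W))"
  proof
    fix P assume "P \<in> set (map (relabel f') ps0)"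
    then obtain P0 where "P0 + C \<in> set ps" "P = relabel f' P0" using ps by auto
    then show "deriv m n h (P + (relabel f' C + W))"
      using step.IH by (metis relabel_add add.assoc)
  qed
  ultimately show ?case unfolding concl by (rule deriv_core_step[OF core'])
qed

corollary deriv_relabel: "deriv m n h S \<Longrightarrow> deriv m n h (relabel f S)"
  using deriv_relabel_add[of m n h S f 0] by simp

corollary deriv_weaken: "deriv m n h S \<Longrightarrow> deriv m n h (S + W)"
  using deriv_relabel_add[of m n h S id W] by (simp add: relabel_eq_self)

corollary derivable_weaken: "derivable m n S \<Longrightarrow> derivable m n (S + W)"
  unfolding derivable_def using deriv_weaken by blast

lemma deriv_rename_fresh:
  assumes "deriv m n h (C + T)" and "v \<notin> labels C"
  shows "deriv m n h (C + relabel (id(v := u)) T)"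
proof -
  have "relabel (id(v := u)) C = C" using assms(2) by (intro relabel_eq_self) auto
  then show ?thesis using deriv_relabel[OF assms(1), of "id(v := u)"] by (simp add: relabel_add)
qed

section \<open>Height-preserving invertibility\<close>

lemma deriv_last_rule_avoiding:
  assumes "deriv m n (Suc h) S" and "\<not> initial S" and "finite L"
  obtains ps0 S0 E C where "core_rule m n ps0 S0 E" "E \<inter> (labels S \<union> L) = {}" "S = S0 + C"
    "\<forall>P\<in>set ps0. deriv m n h (P + C)"
proof -
  obtain ps0 S0 E C where core: "core_rule m n ps0 S0 E" and E: "E \<inter> labels S = {}"
    and S: "S = S0 + C" and prems: "\<forall>P\<in>set ps0. deriv m n h (P + C)"
    using assms(1,2) by (elim deriv_cases_core) auto
  obtain v where v: "v \<notin> labels S \<union> L" using fresh_label_exists[OF assms(3)] by blast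
  define f where "f = (\<lambda>z. if z \<in> E then v else z)"
  have fixed: "relabel f S0 = S0" "relabel f C = C"
    using E S by (auto intro!: relabel_eq_self simp: f_def labels_add)
  have "\<forall>e\<in>E. \<forall>z\<in>labels S0. f e \<noteq> f z" using E S v by (auto simp: f_def labels_add)
  then have "core_rule m n (map (relabel f) ps0) (relabel f S0) (f ` E)"
    by (rule core_rule_relabel[OF core])
  then have "core_rule m n (map (relabel f) ps0) S0 (f ` E)"
    unfolding fixed .
  moreover have "f ` E \<inter> (labels S \<union> L) = {}" using v by (auto simp: f_def)
  moreover have "\<forall>P\<in>set (map (relabel f) ps0). deriv m n h (P + C)"
  proof
    fix P assume "P \<in> set (map (relabel f) ps0)"
    then obtain P0 where "P0 \<in> set ps0" "P = relabel f P0" by auto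
    then show "deriv m n h (P + C)"
      using deriv_relabel[of m n h "P0 + C" f] prems fixed by (simp add: relabel_add)
  qed
  ultimately show ?thesis using S that by blast
qed

lemma deriv_last_rule_on:
  assumes "deriv m n (Suc h) (R, add_mset \<phi> G)" and "\<not> initial (R, add_mset \<phi> G)" and "finite L"
  obtains (principal) ps0 R0 E RC where "core_rule m n ps0 (R0, {#\<phi>#}) E"
      "E \<inter> (labels (R, add_mset \<phi> G) \<union> L) = {}" "R = R0 + RC" "\<forall>P\<in>set ps0. deriv m n h (P + (RC, G))"
  | (side) ps0 R0 G0 E RC G' where "core_rule m n ps0 (R0, G0) E"
      "E \<inter> (labels (R, add_mset \<phi> G) \<union> L) = {}" "R = R0 + RC" "G = G0 + G'"
      "\<forall>P\<in>set ps0. deriv m n h (P + (RC, add_mset \<phi> G'))"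
proof -
  obtain ps0 S0 E C where core: "core_rule m n ps0 S0 E" and E: "E \<inter> (labels (R, add_mset \<phi> G) \<union> L) = {}"
    and S: "(R, add_mset \<phi> G) = S0 + C" and prems: "\<forall>P\<in>set ps0. deriv m n h (P + C)"
    by (rule deriv_last_rule_avoiding[OF assms])
  obtain R0 G0 RC GC where S0: "S0 = (R0, G0)" and C: "C = (RC, GC)" by fastforce
  have R: "R = R0 + RC" and G: "add_mset \<phi> G = G0 + GC" using S S0 C by auto
  show ?thesis
  proof (cases "\<phi> \<in># G0")
    case True
    then obtain G0' where "G0 = add_mset \<phi> G0'" by (metis multi_member_split)
    moreover have "size G0 \<le> 1" using core_rule_size_snd[OF core] S0 by simp
    ultimately have "G0 = {#\<phi>#}" by simp
    then show ?thesis
      by (intro principal[of ps0 R0 E RC]) (use core E R G prems S0 C in simp_all)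
  next
    case False
    have "\<phi> \<in># G0 + GC" by (simp flip: G)
    then have "\<phi> \<in># GC" using False by simp
    then obtain G' where "GC = add_mset \<phi> G'" by (metis multi_member_split)
    then show ?thesis
      by (intro side[of ps0 R0 G0 E RC G']) (use core E R G prems S0 C in simp_all)
  qed
qed

lemma deriv_stit_inv:
  "deriv m n h (R, add_mset (w, Stit i a) G) \<Longrightarrow> deriv m n h (add_mset (i, w, u) R, add_mset (u, a) G)"
proof (induction h arbitrary: R G)
  case 0
  then have "initial (R, add_mset (w, Stit i a) G)" by (elim deriv_cases_core) auto
  then show ?case by (intro deriv_initial) (auto simp: initial_def)
next
  case (Suc h)
  show ?case
  proof (cases "initial (R, add_mset (w, Stit i a) G)")
    case True
    then show ?thesis by (intro deriv_initial) (auto simp: initial_def)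
  next
    case False
    from Suc.prems False finite.insertI[OF finite.emptyI, of u] show ?thesis
    proof (cases rule: deriv_last_rule_on)
      case (principal ps0 R0 E RC)
      from principal(1) obtain v where v: "v \<noteq> w" "E = {v}" "R0 = {#}"
        "ps0 = [({#(i, w, v)#}, {#(v, a)#})]" by cases auto
      then have "deriv m n h ((RC, G) + ({#(i, w, v)#}, {#(v, a)#}))" using principal(4) by simp
      moreover have "v \<notin> labels (RC, G)" using principal(2,3) v by auto
      ultimately have "deriv m n h ((RC, G) + relabel (id(v := u)) ({#(i, w, v)#}, {#(v, a)#}))"
        by (rule deriv_rename_fresh)
      then show ?thesis using principal(3) v by (auto elim: deriv_mono)
    next
      case (side ps0 R0 G0 E RC G')
      have "\<forall>P\<in>set ps0. deriv m n h (P + (add_mset (i, w, u) RC, add_mset (u, a) G'))"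
      proof
        fix P assume P: "P \<in> set ps0"
        obtain RP GP where PP: "P = (RP, GP)" by fastforce
        have "deriv m n h (RP + RC, add_mset (w, Stit i a) (GP + G'))" using side(5) P PP by auto
        then show "deriv m n h (P + (add_mset (i, w, u) RC, add_mset (u, a) G'))" using Suc.IH PP by simp
      qed
      moreover have "E \<inter> labels ((R0, G0) + (add_mset (i, w, u) RC, add_mset (u, a) G')) = {}"
        using side(2-4) by auto
      ultimately have "deriv m n (Suc h) ((R0, G0) + (add_mset (i, w, u) RC, add_mset (u, a) G'))"
        by (intro deriv_core_step[OF side(1)])
      then show ?thesis using side(3,4) by simp
    qed
  qed
qed

lemma deriv_core_inv:
  assumes core: "core_rule m n ps0 S0 E" and E: "E \<inter> labels (S0 + C) = {}"
    and d: "deriv m n h (S0 + C)" and P: "P \<in> set ps0"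
  shows "deriv m n h (P + C)"
proof (cases "\<exists>w i a. snd S0 = {#(w, Stit i a)#}")
  case True
  with core show ?thesis
  proof cases
    case (core_stit i v w a)
    obtain RC GC where C: "C = (RC, GC)" by fastforce
    have "deriv m n h (add_mset (i, w, v) RC, add_mset (v, a) GC)"
      using d C core_stit by (intro deriv_stit_inv) simp
    then show ?thesis using P C core_stit by simp
  qed auto
next
  case False
  have "fst S0 \<subseteq># fst P" "snd S0 \<subseteq># snd P"
    using core_rule_fst_le_premise[OF core P] core_rule_snd_le_premise[OF core P] False by auto
  then obtain RX GX where "fst P = fst S0 + RX" "snd P = snd S0 + GX"
    by (meson mset_subset_eq_exists_conv)
  then have "P + C = (S0 + C) + (RX, GX)" by (simp add: prod_eq_iff add_ac)
  then show ?thesis using deriv_weaken[OF d] by simp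
qed

theorem deriv_rule_inv: "rule m n ps S \<Longrightarrow> deriv m n h S \<Longrightarrow> P \<in> set ps \<Longrightarrow> deriv m n h P"
  by (elim core_rule_of_rule) (auto intro: deriv_core_inv)

section \<open>Height-preserving contraction\<close>

lemma core_rule_count_fst_le: "core_rule m n ps0 S0 E \<Longrightarrow> P \<in> set ps0 \<Longrightarrow> count (fst S0) \<rho> \<le> count (fst P) \<rho>"
  using core_rule_fst_le_premise by (blast intro: mset_subset_eq_count)

lemma core_rule_count_snd_le:
  assumes "core_rule m n ps0 S0 E" and "P \<in> set ps0"
  obtains "count (snd S0) \<phi> \<le> count (snd P) \<phi>"
  | i v w a where "\<phi> = (w, Stit i a)" "S0 = ({#}, {#\<phi>#})" "ps0 = [({#(i, w, v)#}, {#(v, a)#})]"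
      "E = {v}" "v \<noteq> w"
proof -
  from assms have "count (snd S0) \<phi> \<le> count (snd P) \<phi> \<or> (\<exists>i v w a. \<phi> = (w, Stit i a) \<and>
    S0 = ({#}, {#\<phi>#}) \<and> ps0 = [({#(i, w, v)#}, {#(v, a)#})] \<and> E = {v} \<and> v \<noteq> w)"
  proof (induction rule: core_rule.induct)
    case (core_stit i v w a)
    then show ?case by (cases "\<phi> = (w, Stit i a)") auto
  qed auto
  then show ?thesis using that by blast
qed

text \<open>The principal formula of \<open>[i]\<close> is not repeated in the premise; its second copy is removed by
  inverting it towards the eigenlabel of the first, which duplicates the premise's new atom and formula.\<close>

lemma contract_stit_premise:
  assumes IH_fm: "\<And>R G. deriv m n h (R, G) \<Longrightarrow> count G (v, a) \<ge> 2 \<Longrightarrow> deriv m n h (R, G - {#(v, a)#})"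
    and IH_rel: "\<And>R G. deriv m n h (R, G) \<Longrightarrow> count R (i, w, v) \<ge> 2 \<Longrightarrow> deriv m n h (R - {#(i, w, v)#}, G)"
    and d: "deriv m n h (add_mset (i, w, v) R, add_mset (v, a) (add_mset (w, Stit i a) G))"
  shows "deriv m n h (add_mset (i, w, v) R, add_mset (v, a) G)"
proof -
  have "deriv m n h (add_mset (i, w, v) (add_mset (i, w, v) R), add_mset (v, a) (add_mset (v, a) G))"
    using d by (intro deriv_stit_inv) (simp add: add_mset_commute)
  then have "deriv m n h (add_mset (i, w, v) R, add_mset (v, a) (add_mset (v, a) G))"
    using IH_rel by fastforce
  then show ?thesis using IH_fm by fastforce
qed

lemma initial_remove_duplicate: "initial (R, G) \<Longrightarrow> count G \<phi> \<ge> 2 \<Longrightarrow> initial (R', G - {#\<phi>#})"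
proof -
  assume init: "initial (R, G)" and two: "count G \<phi> \<ge> 2"
  have "set_mset G \<subseteq> set_mset (G - {#\<phi>#})"
  proof
    fix x assume "x \<in># G"
    then show "x \<in># G - {#\<phi>#}" using two by (cases "x = \<phi>") (simp_all add: in_diff_count)
  qed
  with init show ?thesis by (rule initial_mono)
qed

lemma contract_fm_step:
  assumes IH_fm: "\<And>R G \<phi>. deriv m n h (R, G) \<Longrightarrow> count G \<phi> \<ge> 2 \<Longrightarrow> deriv m n h (R, G - {#\<phi>#})"
    and IH_rel: "\<And>R G \<rho>. deriv m n h (R, G) \<Longrightarrow> count R \<rho> \<ge> 2 \<Longrightarrow> deriv m n h (R - {#\<rho>#}, G)"
    and d: "deriv m n (Suc h) (R, G)" and two: "count G \<phi> \<ge> 2"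
  shows "deriv m n (Suc h) (R, G - {#\<phi>#})"
proof (cases "initial (R, G)")
  case True
  then show ?thesis using two by (intro deriv_initial initial_remove_duplicate)
next
  case False
  obtain ps0 S0 E C where core: "core_rule m n ps0 S0 E" and E: "E \<inter> labels (R, G) = {}"
    and S: "(R, G) = S0 + C" and prems: "\<forall>P\<in>set ps0. deriv m n h (P + C)"
    using d False by (elim deriv_cases_core) auto
  have count_G: "count G \<phi> = count (snd S0) \<phi> + count (snd C) \<phi>" using arg_cong[OF S, of snd] by simp
  have "count (snd S0) \<phi> \<le> 1" using core_rule_size_snd[OF core] count_le_size[of "snd S0" \<phi>] by linarith
  then have "0 < count (snd C) \<phi>" using two count_G by linarith
  then have "\<phi> \<in># snd C" by simp
  define C' where "C' = (fst C, snd C - {#\<phi>#})"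
  have C: "C = C' + ({#}, {#\<phi>#})" using \<open>\<phi> \<in># snd C\<close> by (simp add: C'_def prod_eq_iff)
  have S': "S0 + C' = (R, G - {#\<phi>#})" using S by (simp add: C prod_eq_iff add.assoc[symmetric])
  have E': "E \<inter> labels (S0 + C') = {}"
    using E labels_mono[of R R "G - {#\<phi>#}" G] unfolding S' by (auto dest: in_diffD)
  have "\<forall>P\<in>set ps0. deriv m n h (P + C')"
  proof
    fix P assume P: "P \<in> set ps0"
    have PC: "P + C = (fst (P + C'), add_mset \<phi> (snd (P + C')))" by (simp add: C prod_eq_iff add.assoc)
    from core P show "deriv m n h (P + C')"
    proof (cases rule: core_rule_count_snd_le[where \<phi> = \<phi>])
      case 1
      then have "count (snd (P + C)) \<phi> \<ge> 2" using two count_G by simp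
      then have "count (add_mset \<phi> (snd (P + C'))) \<phi> \<ge> 2" using arg_cong[OF PC, of snd] by simp
      moreover have "deriv m n h (fst (P + C'), add_mset \<phi> (snd (P + C')))"
        using prems P unfolding PC[symmetric] by blast
      ultimately have "deriv m n h (fst (P + C'), snd (P + C'))" using IH_fm by fastforce
      then show ?thesis by (simp only: prod.collapse)
    next
      case (2 i v w a)
      obtain RC GC where C': "C' = (RC, GC)" by fastforce
      have "deriv m n h (add_mset (i, w, v) RC, add_mset (v, a) (add_mset (w, Stit i a) GC))"
        using prems P C C' 2 by (simp add: add_mset_commute)
      then show ?thesis using contract_stit_premise[OF IH_fm IH_rel] P C' 2 by simp
    qed
  qed
  then show ?thesis using deriv_core_step[OF core E'] S' by simp
qed

text \<open>A repeated relational atom is principal only in \<open>eucl\<close> with \<open>u = v\<close>, whose premise adds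
  the loop \<open>R_i u u\<close>; after contraction in the premise that loop is discharged by \<open>refl\<close>.\<close>

lemma contract_eucl_loop:
  assumes IH_rel: "\<And>R G \<rho>. deriv m n h (R, G) \<Longrightarrow> count R \<rho> \<ge> 2 \<Longrightarrow> deriv m n h (R - {#\<rho>#}, G)"
    and i: "i \<in> {1..m}" and d: "deriv m n h (add_mset \<rho> (add_mset \<rho> (add_mset (i, u, u) R)), G)"
  shows "deriv m n (Suc h) (add_mset \<rho> R, G)"
proof -
  have "deriv m n h (add_mset \<rho> (add_mset \<rho> (add_mset (i, u, u) R)) - {#\<rho>#}, G)"
    using d by (rule IH_rel) simp
  then have "deriv m n h (({#(i, u, u)#}, {#}) + (add_mset \<rho> R, G))" by (simp add: add_mset_commute)
  then have "deriv m n (Suc h) (({#}, {#}) + (add_mset \<rho> R, G))"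
    by (intro deriv_core_step[OF core_refl[OF i, where w = u]]) simp_all
  then show ?thesis by simp
qed

lemma contract_rel_step:
  assumes IH_rel: "\<And>R G \<rho>. deriv m n h (R, G) \<Longrightarrow> count R \<rho> \<ge> 2 \<Longrightarrow> deriv m n h (R - {#\<rho>#}, G)"
    and d: "deriv m n (Suc h) (R, G)" and two: "count R \<rho> \<ge> 2"
  shows "deriv m n (Suc h) (R - {#\<rho>#}, G)"
proof (cases "initial (R, G)")
  case True
  then show ?thesis by (intro deriv_initial) (simp add: initial_def)
next
  case False
  obtain ps0 S0 E C where core: "core_rule m n ps0 S0 E" and E: "E \<inter> labels (R, G) = {}"
    and S: "(R, G) = S0 + C" and prems: "\<forall>P\<in>set ps0. deriv m n h (P + C)"
    using d False by (elim deriv_cases_core) auto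
  have count_R: "count R \<rho> = count (fst S0) \<rho> + count (fst C) \<rho>" using arg_cong[OF S, of fst] by simp
  show ?thesis
  proof (cases "\<rho> \<in># fst C")
    case True
    define C' where "C' = (fst C - {#\<rho>#}, snd C)"
    have C: "C = C' + ({#\<rho>#}, {#})" using True by (simp add: C'_def prod_eq_iff)
    have S': "S0 + C' = (R - {#\<rho>#}, G)" using S by (simp add: C prod_eq_iff add.assoc[symmetric])
    have E': "E \<inter> labels (S0 + C') = {}"
      using E labels_mono[of "R - {#\<rho>#}" R G G] unfolding S' by (auto dest: in_diffD)
    have "\<forall>P\<in>set ps0. deriv m n h (P + C')"
    proof
      fix P assume P: "P \<in> set ps0"
      have PC: "P + C = (add_mset \<rho> (fst (P + C')), snd (P + C'))" by (simp add: C prod_eq_iff add.assoc)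
      have "count (fst S0) \<rho> \<le> count (fst P) \<rho>" by (rule core_rule_count_fst_le[OF core P])
      then have "count (fst (P + C)) \<rho> \<ge> 2" using two count_R by simp
      then have "count (add_mset \<rho> (fst (P + C'))) \<rho> \<ge> 2" using arg_cong[OF PC, of fst] by simp
      moreover have "deriv m n h (add_mset \<rho> (fst (P + C')), snd (P + C'))"
        using prems P unfolding PC[symmetric] by blast
      ultimately have "deriv m n h (fst (P + C'), snd (P + C'))" using IH_rel by fastforce
      then show "deriv m n h (P + C')" by (simp only: prod.collapse)
    qed
    then show ?thesis using deriv_core_step[OF core E'] S' by simp
  next
    case False
    then have "count (fst S0) \<rho> \<ge> 2" using two count_R by (simp add: not_in_iff)
    with core obtain i w u where i: "i \<in> {1..m}" and \<rho>: "\<rho> = (i, w, u)"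
      and S0: "S0 = ({#\<rho>, \<rho>#}, {#})" and ps0: "ps0 = [({#\<rho>, \<rho>, (i, u, u)#}, {#})]"
      by (elim core_rule_repeated_atom) auto
    have "deriv m n h (add_mset \<rho> (add_mset \<rho> (add_mset (i, u, u) (fst C))), snd C)"
      using prems ps0 by (cases C) (simp add: add_mset_commute)
    then have "deriv m n (Suc h) (add_mset \<rho> (fst C), snd C)" using contract_eucl_loop[OF IH_rel i] by blast
    then show ?thesis using S S0 by (simp add: prod_eq_iff)
  qed
qed

theorem deriv_contract:
  "(deriv m n h (R, G) \<longrightarrow> count G \<phi> \<ge> 2 \<longrightarrow> deriv m n h (R, G - {#\<phi>#})) \<and>
   (deriv m n h (R, G) \<longrightarrow> count R \<rho> \<ge> 2 \<longrightarrow> deriv m n h (R - {#\<rho>#}, G))"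
proof (induction h arbitrary: R G \<phi> \<rho>)
  case 0
  have init: "initial (R, G)" if "deriv m n 0 (R, G)" using that by (elim deriv_cases_core) auto
  show ?case
  proof (intro conjI impI)
    assume "deriv m n 0 (R, G)" and "count G \<phi> \<ge> 2"
    then show "deriv m n 0 (R, G - {#\<phi>#})" using init by (blast intro: deriv_initial initial_remove_duplicate)
  next
    assume "deriv m n 0 (R, G)"
    then show "deriv m n 0 (R - {#\<rho>#}, G)" using init by (intro deriv_initial) (simp add: initial_def)
  qed
next
  case (Suc h)
  then show ?case using contract_fm_step[of m n h] contract_rel_step[of m n h] by blast
qed

corollary deriv_contract_fm: "deriv m n h (R, add_mset \<phi> (add_mset \<phi> G)) \<Longrightarrow> deriv m n h (R, add_mset \<phi> G)"
  using deriv_contract[of m n h R "add_mset \<phi> (add_mset \<phi> G)" \<phi>] by simp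

corollary deriv_contract_rel: "deriv m n h (add_mset \<rho> (add_mset \<rho> R), G) \<Longrightarrow> deriv m n h (add_mset \<rho> R, G)"
  using deriv_contract[of m n h "add_mset \<rho> (add_mset \<rho> R)" G _ \<rho>] by simp

lemma deriv_contract_fms: "deriv m n h (R, G' + G' + G) \<Longrightarrow> deriv m n h (R, G' + G)"
proof (induction G' arbitrary: G)
  case (add \<phi> G')
  then have "deriv m n h (R, G' + G' + add_mset \<phi> G)" by (auto dest: deriv_contract_fm)
  then have "deriv m n h (R, G' + add_mset \<phi> G)" by (rule add.IH)
  then show ?case by simp
qed simp

lemma deriv_contract_rels: "deriv m n h (R + R' + R', G) \<Longrightarrow> deriv m n h (R + R', G)"
proof (induction R' arbitrary: R)
  case (add \<rho> R')
  then have "deriv m n h (add_mset \<rho> R + R' + R', G)" by (auto dest: deriv_contract_rel)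
  then have "deriv m n h (add_mset \<rho> R + R', G)" by (rule add.IH)
  then show ?case by simp
qed simp

section \<open>Inversions that drop the principal formula\<close>

lemma deriv_replace_principal:
  assumes d: "deriv m n h (R, add_mset \<phi> G)"
    and initial_case: "\<And>R G. initial (R, add_mset \<phi> G) \<Longrightarrow> initial (R, X + G)"
    and principal_case: "\<And>h ps0 R0 E RC G. core_rule m n ps0 (R0, {#\<phi>#}) E \<Longrightarrow>
      E \<inter> (labels (R0 + RC, add_mset \<phi> G) \<union> labels ({#}, X)) = {} \<Longrightarrow>
      \<forall>P\<in>set ps0. deriv m n h (P + (RC, G)) \<Longrightarrow>
      (\<And>R G. deriv m n h (R, add_mset \<phi> G) \<Longrightarrow> deriv m n h (R, X + G)) \<Longrightarrow>
      deriv m n (Suc h) (R0 + RC, X + G)"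
  shows "deriv m n h (R, X + G)"
  using d
proof (induction h arbitrary: R G)
  case 0
  then have "initial (R, add_mset \<phi> G)" by (elim deriv_cases_core) auto
  then show ?case by (intro deriv_initial initial_case)
next
  case (Suc h)
  show ?case
  proof (cases "initial (R, add_mset \<phi> G)")
    case True
    then show ?thesis by (intro deriv_initial initial_case)
  next
    case False
    from Suc.prems False finite_labels[of "({#}, X)"] show ?thesis
    proof (cases rule: deriv_last_rule_on)
      case (principal ps0 R0 E RC)
      then show ?thesis using principal_case[of ps0 R0 E RC G h] Suc.IH by simp
    next
      case (side ps0 R0 G0 E RC G')
      have prems: "\<forall>P\<in>set ps0. deriv m n h (P + (RC, X + G'))"
      proof
        fix P assume P: "P \<in> set ps0"
        obtain RP GP where PP: "P = (RP, GP)" by fastforce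
        have "deriv m n h (RP + RC, add_mset \<phi> (GP + G'))" using side(5) P PP by auto
        then have "deriv m n h (RP + RC, X + (GP + G'))" by (rule Suc.IH)
        then show "deriv m n h (P + (RC, X + G'))" using PP by (simp add: add_ac)
      qed
      have "E \<inter> labels ((R0, G0) + (RC, X + G')) = {}"
        using side(2-4) labels_Pair_add[of "{#}" RC X G'] by auto
      then have "deriv m n (Suc h) ((R0, G0) + (RC, X + G'))" using deriv_core_step[OF side(1)] prems by blast
      then show ?thesis using side(3,4) by (simp add: add_ac)
    qed
  qed
qed

lemma deriv_conj_inv:
  assumes "deriv m n h (R, add_mset (x, Conj a b) G)" and c: "c \<in> {a, b}"
  shows "deriv m n h (R, add_mset (x, c) G)"
proof -
  have "deriv m n h (R, {#(x, c)#} + G)"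
  proof (rule deriv_replace_principal[OF assms(1)])
    fix h ps0 R0 E RC G
    assume core: "core_rule m n ps0 (R0, {#(x, Conj a b)#}) E"
      and prems: "\<forall>P\<in>set ps0. deriv m n h (P + (RC, G))"
      and IH: "\<And>R G. deriv m n h (R, add_mset (x, Conj a b) G) \<Longrightarrow> deriv m n h (R, {#(x, c)#} + G)"
    from core show "deriv m n (Suc h) (R0 + RC, {#(x, c)#} + G)"
    proof cases
      case core_conj
      then have "deriv m n h (RC, add_mset (x, Conj a b) (add_mset (x, c) G))" using prems c by auto
      then have "deriv m n h (RC, add_mset (x, c) (add_mset (x, c) G))" using IH by simp
      then show ?thesis using core_conj by (auto intro: deriv_mono dest: deriv_contract_fm)
    qed auto
  qed (auto simp: initial_def)
  then show ?thesis by simp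
qed

lemma deriv_disj_inv:
  assumes "deriv m n h (R, add_mset (x, Disj a b) G)"
  shows "deriv m n h (R, add_mset (x, a) (add_mset (x, b) G))"
proof -
  have "deriv m n h (R, {#(x, a), (x, b)#} + G)"
  proof (rule deriv_replace_principal[OF assms])
    fix h ps0 R0 E RC G
    assume core: "core_rule m n ps0 (R0, {#(x, Disj a b)#}) E"
      and prems: "\<forall>P\<in>set ps0. deriv m n h (P + (RC, G))"
      and IH: "\<And>R G. deriv m n h (R, add_mset (x, Disj a b) G) \<Longrightarrow> deriv m n h (R, {#(x, a), (x, b)#} + G)"
    from core show "deriv m n (Suc h) (R0 + RC, {#(x, a), (x, b)#} + G)"
    proof cases
      case core_disj
      then have "deriv m n h (RC, add_mset (x, Disj a b) (add_mset (x, a) (add_mset (x, b) G)))"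
        using prems by (simp add: add_mset_commute)
      then have "deriv m n h (RC, {#(x, a), (x, b)#} + add_mset (x, a) (add_mset (x, b) G))" by (rule IH)
      then have "deriv m n h (RC, add_mset (x, a) (add_mset (x, a) (add_mset (x, b) (add_mset (x, b) G))))"
        by (simp add: add_mset_commute)
      then have "deriv m n h (RC, add_mset (x, a) (add_mset (x, b) (add_mset (x, b) G)))"
        by (rule deriv_contract_fm)
      then have "deriv m n h (RC, add_mset (x, b) (add_mset (x, b) (add_mset (x, a) G)))"
        by (simp add: add_mset_commute)
      then have "deriv m n h (RC, add_mset (x, b) (add_mset (x, a) G))" by (rule deriv_contract_fm)
      then have "deriv m n h (RC, add_mset (x, a) (add_mset (x, b) G))" by (simp add: add_mset_commute)
      then show ?thesis using core_disj by (auto intro: deriv_mono)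
    qed auto
  qed (auto simp: initial_def)
  then show ?thesis by simp
qed

lemma deriv_box_inv:
  assumes "deriv m n h (R, add_mset (x, Box a) G)"
  shows "deriv m n h (R, add_mset (y, a) G)"
proof -
  have "deriv m n h (R, {#(y, a)#} + G)"
  proof (rule deriv_replace_principal[OF assms])
    fix h ps0 R0 E RC G
    assume core: "core_rule m n ps0 (R0, {#(x, Box a)#}) E"
      and E: "E \<inter> (labels (R0 + RC, add_mset (x, Box a) G) \<union> labels ({#}, {#(y, a)#})) = {}"
      and prems: "\<forall>P\<in>set ps0. deriv m n h (P + (RC, G))"
      and IH: "\<And>R G. deriv m n h (R, add_mset (x, Box a) G) \<Longrightarrow> deriv m n h (R, {#(y, a)#} + G)"
    from core show "deriv m n (Suc h) (R0 + RC, {#(y, a)#} + G)"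
    proof cases
      case (core_box v)
      then have "deriv m n h (RC, add_mset (x, Box a) (add_mset (v, a) G))" using prems by simp
      then have "deriv m n h (RC, {#(y, a)#} + add_mset (v, a) G)" by (rule IH)
      then have "deriv m n h ((RC, add_mset (y, a) G) + ({#}, {#(v, a)#}))" by (simp add: add_mset_commute)
      then have "deriv m n h ((RC, add_mset (y, a) G) + relabel (id(v := y)) ({#}, {#(v, a)#}))"
        by (rule deriv_rename_fresh) (use E core_box in auto)
      then have "deriv m n h (RC, add_mset (y, a) (add_mset (y, a) G))" by simp
      then show ?thesis using core_box by (auto intro: deriv_mono dest: deriv_contract_fm)
    qed auto
  qed (auto simp: initial_def)
  then show ?thesis by simp
qed

section \<open>Cut admissibility\<close>

lemma derivable_core_step:
  assumes "core_rule m n ps0 S0 E" and "E \<inter> labels (S0 + C) = {}" and "\<forall>P\<in>set ps0. derivable m n (P + C)"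
  shows "derivable m n (S0 + C)"
proof -
  have "\<exists>h. \<forall>P\<in>set (map (\<lambda>P. P + C) ps0). deriv m n h P"
    using assms(3) by (intro derivable_common_height) auto
  then obtain h where "\<forall>P\<in>set ps0. deriv m n h (P + C)" by auto
  then show ?thesis unfolding derivable_def using deriv_core_step[OF assms(1,2)] by blast
qed

lemma derivable_weaken_fm: "derivable m n (R, G) \<Longrightarrow> derivable m n (R, add_mset \<phi> G)"
  using derivable_weaken[of m n "(R, G)" "({#}, {#\<phi>#})"] by simp

lemma derivable_contract_fm: "derivable m n (R, add_mset \<phi> (add_mset \<phi> G)) \<Longrightarrow> derivable m n (R, add_mset \<phi> G)"
  unfolding derivable_def using deriv_contract_fm by blast

lemma derivable_stit_elim:
  assumes "derivable m n (R, add_mset (x, Stit i a) G)" and "(i, x, u) \<in># R"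
  shows "derivable m n (R, add_mset (u, a) G)"
proof -
  obtain R' where R: "R = add_mset (i, x, u) R'" using assms(2) by (metis multi_member_split)
  have "derivable m n (add_mset (i, x, u) R, add_mset (u, a) G)"
    using assms(1) deriv_stit_inv unfolding derivable_def by blast
  then show ?thesis unfolding derivable_def R by (auto dest: deriv_contract_rel)
qed

text \<open>A cut commutes with any rule whose principal part does not contain the cut formula, since
  the other cut premise can be inverted at the same rule.\<close>

lemma derivable_cut_through_rule:
  assumes core: "core_rule m n ps0 S0 E" and E: "E \<inter> labels (S0 + C) = {}" "fst \<psi> \<notin> E"
    and d: "derivable m n (S0 + C + ({#}, {#\<psi>#}))"
    and prems: "\<And>P. P \<in> set ps0 \<Longrightarrow> derivable m n (P + C + ({#}, {#\<psi>#})) \<Longrightarrow> derivable m n (P + C)"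
  shows "derivable m n (S0 + C)"
proof -
  obtain h where d': "deriv m n h (S0 + (C + ({#}, {#\<psi>#})))" using d by (auto simp: derivable_def add.assoc)
  have E': "E \<inter> labels (S0 + (C + ({#}, {#\<psi>#}))) = {}" using E by (auto simp: labels_add)
  have "derivable m n (P + C)" if P: "P \<in> set ps0" for P
  proof -
    have "deriv m n h (P + (C + ({#}, {#\<psi>#})))" by (rule deriv_core_inv[OF core E' d' P])
    then have "derivable m n (P + C + ({#}, {#\<psi>#}))" unfolding derivable_def by (auto simp: add.assoc)
    then show ?thesis by (rule prems[OF P])
  qed
  then show ?thesis using derivable_core_step[OF core E(1)] by blast
qed

lemma cut_by_height:
  assumes d: "deriv m n h (R, add_mset \<phi> G)" and e: "derivable m n (R, add_mset \<psi> G)"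
    and label: "fst \<psi> = fst \<phi>"
    and initial_case: "\<And>R G. initial (R, add_mset \<phi> G) \<Longrightarrow> derivable m n (R, add_mset \<psi> G) \<Longrightarrow>
      derivable m n (R, G)"
    and principal_case: "\<And>h ps0 R0 E RC G. core_rule m n ps0 (R0, {#\<phi>#}) E \<Longrightarrow>
      \<forall>P\<in>set ps0. deriv m n h (P + (RC, G)) \<Longrightarrow>
      (\<And>R G. deriv m n h (R, add_mset \<phi> G) \<Longrightarrow> derivable m n (R, add_mset \<psi> G) \<Longrightarrow> derivable m n (R, G)) \<Longrightarrow>
      derivable m n (R0 + RC, add_mset \<psi> G) \<Longrightarrow> derivable m n (R0 + RC, G)"
  shows "derivable m n (R, G)"
  using d e
proof (induction h arbitrary: R G)
  case 0
  then have "initial (R, add_mset \<phi> G)" by (elim deriv_cases_core) auto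
  then show ?case using "0.prems"(2) by (rule initial_case)
next
  case (Suc h)
  show ?case
  proof (cases "initial (R, add_mset \<phi> G)")
    case True
    then show ?thesis using Suc.prems(2) by (rule initial_case)
  next
    case False
    from Suc.prems(1) False finite.emptyI show ?thesis
    proof (cases rule: deriv_last_rule_on)
      case (principal ps0 R0 E RC)
      then show ?thesis using principal_case[of ps0 R0 E h RC G] Suc.IH Suc.prems(2) by simp
    next
      case (side ps0 R0 G0 E RC G')
      have "derivable m n ((R0, G0) + (RC, G'))"
      proof (rule derivable_cut_through_rule[OF side(1), where \<psi> = \<psi>])
        show "E \<inter> labels ((R0, G0) + (RC, G')) = {}" "fst \<psi> \<notin> E" using side(2-4) label by auto
        show "derivable m n ((R0, G0) + (RC, G') + ({#}, {#\<psi>#}))" using Suc.prems(2) side(3,4) by (simp add: add_ac)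
      next
        fix P assume P: "P \<in> set ps0" and e: "derivable m n (P + (RC, G') + ({#}, {#\<psi>#}))"
        obtain RP GP where PP: "P = (RP, GP)" by fastforce
        have "deriv m n h (RP + RC, add_mset \<phi> (GP + G'))" using side(5) P PP by auto
        moreover have "derivable m n (RP + RC, add_mset \<psi> (GP + G'))" using e PP by simp
        ultimately have "derivable m n (RP + RC, GP + G')" by (rule Suc.IH)
        then show "derivable m n (P + (RC, G'))" using PP by simp
      qed
      then show ?thesis using side(3,4) by simp
    qed
  qed
qed

definition cut_admissible :: "nat \<Rightarrow> nat \<Rightarrow> fm \<Rightarrow> bool" where
  "cut_admissible m n a \<longleftrightarrow> (\<forall>R G x. derivable m n (R, add_mset (x, a) G) \<longrightarrow>
     derivable m n (R, add_mset (x, neg a) G) \<longrightarrow> derivable m n (R, G))"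

lemma neg_neg [simp]: "neg (neg a) = a"
  by (induction a) auto

lemma cut_admissible_neg: "cut_admissible m n a \<Longrightarrow> cut_admissible m n (neg a)"
  unfolding cut_admissible_def by auto

lemma cut_admissible_At: "cut_admissible m n (At p)"
  unfolding cut_admissible_def
proof (intro allI impI)
  fix R G x
  assume "derivable m n (R, add_mset (x, At p) G)" and nat: "derivable m n (R, add_mset (x, neg (At p)) G)"
  then obtain h where d: "deriv m n h (R, add_mset (x, At p) G)" by (auto simp: derivable_def)
  show "derivable m n (R, G)"
  proof (rule cut_by_height[OF d, where \<psi> = "(x, NAt p)"])
    show "derivable m n (R, add_mset (x, NAt p) G)" using nat by simp
  next
    fix R G assume init: "initial (R, add_mset (x, At p) G)" and nat: "derivable m n (R, add_mset (x, NAt p) G)"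
    show "derivable m n (R, G)"
    proof (cases "(x, NAt p) \<in># G")
      case True
      then obtain G' where "G = add_mset (x, NAt p) G'" by (metis multi_member_split)
      then show ?thesis using nat by (simp add: derivable_contract_fm)
    next
      case False
      then have "initial (R, G)" using init by (auto simp: initial_def)
      then show ?thesis unfolding derivable_def using deriv_initial by blast
    qed
  next
    fix h ps0 R0 E RC G
    assume "core_rule m n ps0 (R0, {#(x, At p)#}) E"
    then show "derivable m n (R0 + RC, G)" by cases auto
  qed simp
qed

lemma cut_admissible_Conj:
  assumes cut_a: "cut_admissible m n a" and cut_b: "cut_admissible m n b"
  shows "cut_admissible m n (Conj a b)"
  unfolding cut_admissible_def
proof (intro allI impI)
  fix R G x
  assume conj: "derivable m n (R, add_mset (x, Conj a b) G)"
    and "derivable m n (R, add_mset (x, neg (Conj a b)) G)"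
  then obtain h where disj: "deriv m n h (R, add_mset (x, Disj (neg a) (neg b)) G)"
    by (auto simp: derivable_def)
  have a: "derivable m n (R, add_mset (x, a) G)" and b: "derivable m n (R, add_mset (x, b) G)"
    using conj deriv_conj_inv[of m n _ R x a b G] unfolding derivable_def by blast+
  have "derivable m n (R, add_mset (x, a) (add_mset (x, neg b) G))"
    using derivable_weaken_fm[OF a, of "(x, neg b)"] by (simp add: add_mset_commute)
  moreover have "derivable m n (R, add_mset (x, neg a) (add_mset (x, neg b) G))"
    using deriv_disj_inv[OF disj] unfolding derivable_def by blast
  ultimately have "derivable m n (R, add_mset (x, neg b) G)"
    using cut_a unfolding cut_admissible_def by blast
  then show "derivable m n (R, G)" using b cut_b unfolding cut_admissible_def by blast
qed

lemma cut_admissible_Box: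
  assumes cut_a: "cut_admissible m n a"
  shows "cut_admissible m n (Box a)"
  unfolding cut_admissible_def
proof (intro allI impI)
  fix R G x
  assume box: "derivable m n (R, add_mset (x, Box a) G)" and "derivable m n (R, add_mset (x, neg (Box a)) G)"
  then obtain h where d: "deriv m n h (R, add_mset (x, Dia (neg a)) G)" by (auto simp: derivable_def)
  show "derivable m n (R, G)"
  proof (rule cut_by_height[OF d box])
    fix R G assume "initial (R, add_mset (x, Dia (neg a)) G)"
    then have "initial (R, G)" by (auto simp: initial_def)
    then show "derivable m n (R, G)" unfolding derivable_def using deriv_initial by blast
  next
    fix h ps0 R0 E RC G
    assume core: "core_rule m n ps0 (R0, {#(x, Dia (neg a))#}) E"
      and prems: "\<forall>P\<in>set ps0. deriv m n h (P + (RC, G))"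
      and IH: "\<And>R G. deriv m n h (R, add_mset (x, Dia (neg a)) G) \<Longrightarrow>
        derivable m n (R, add_mset (x, Box a) G) \<Longrightarrow> derivable m n (R, G)"
      and box: "derivable m n (R0 + RC, add_mset (x, Box a) G)"
    from core show "derivable m n (R0 + RC, G)"
    proof cases
      case (core_dia w b u)
      have "deriv m n h (RC, add_mset (x, Dia (neg a)) (add_mset (u, neg a) G))" using prems core_dia by simp
      moreover have "derivable m n (RC, add_mset (x, Box a) (add_mset (u, neg a) G))"
        using derivable_weaken_fm[of m n RC "add_mset (x, Box a) G" "(u, neg a)"] box core_dia
        by (simp add: add_mset_commute)
      ultimately have "derivable m n (RC, add_mset (u, neg a) G)" by (rule IH)
      moreover have "derivable m n (RC, add_mset (u, a) G)"
        using box core_dia deriv_box_inv unfolding derivable_def by fastforce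
      ultimately show ?thesis using cut_a core_dia unfolding cut_admissible_def by auto
    qed auto
  qed simp
qed

lemma cut_admissible_Stit:
  assumes cut_a: "cut_admissible m n a"
  shows "cut_admissible m n (Stit i a)"
  unfolding cut_admissible_def
proof (intro allI impI)
  fix R G x
  assume stit: "derivable m n (R, add_mset (x, Stit i a) G)" and "derivable m n (R, add_mset (x, neg (Stit i a)) G)"
  then obtain h where d: "deriv m n h (R, add_mset (x, Cstit i (neg a)) G)" by (auto simp: derivable_def)
  show "derivable m n (R, G)"
  proof (rule cut_by_height[OF d stit])
    fix R G assume "initial (R, add_mset (x, Cstit i (neg a)) G)"
    then have "initial (R, G)" by (auto simp: initial_def)
    then show "derivable m n (R, G)" unfolding derivable_def using deriv_initial by blast
  next
    fix h ps0 R0 E RC G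
    assume core: "core_rule m n ps0 (R0, {#(x, Cstit i (neg a))#}) E"
      and prems: "\<forall>P\<in>set ps0. deriv m n h (P + (RC, G))"
      and IH: "\<And>R G. deriv m n h (R, add_mset (x, Cstit i (neg a)) G) \<Longrightarrow>
        derivable m n (R, add_mset (x, Stit i a) G) \<Longrightarrow> derivable m n (R, G)"
      and stit: "derivable m n (R0 + RC, add_mset (x, Stit i a) G)"
    from core show "derivable m n (R0 + RC, G)"
    proof cases
      case (core_cstit i' w u b)
      have "deriv m n h (R0 + RC, add_mset (x, Cstit i (neg a)) (add_mset (u, neg a) G))"
        using prems core_cstit by simp
      moreover have "derivable m n (R0 + RC, add_mset (x, Stit i a) (add_mset (u, neg a) G))"
        using derivable_weaken_fm[OF stit, of "(u, neg a)"] by (simp add: add_mset_commute)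
      ultimately have "derivable m n (R0 + RC, add_mset (u, neg a) G)" by (rule IH)
      moreover have "derivable m n (R0 + RC, add_mset (u, a) G)"
        using derivable_stit_elim[OF stit] core_cstit by simp
      ultimately show ?thesis using cut_a unfolding cut_admissible_def by blast
    qed auto
  qed simp
qed

lemma cut_admissible_fm: "cut_admissible m n a"
proof (induction a)
  case (NAt p)
  show ?case using cut_admissible_neg[OF cut_admissible_At[of m n p]] by simp
next
  case (Disj a b)
  show ?case using cut_admissible_neg[OF cut_admissible_Conj[OF cut_admissible_neg[OF Disj.IH(1)]
    cut_admissible_neg[OF Disj.IH(2)]]] by simp
next
  case (Dia a)
  show ?case using cut_admissible_neg[OF cut_admissible_Box[OF cut_admissible_neg[OF Dia.IH]]] by simp
next
  case (Cstit i a)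
  show ?case using cut_admissible_neg[OF cut_admissible_Stit[OF cut_admissible_neg[OF Cstit.IH]]] by simp
qed (simp_all add: cut_admissible_At cut_admissible_Conj cut_admissible_Box cut_admissible_Stit)

theorem derivable_cut:
  "derivable m n (R, add_mset (x, a) G) \<Longrightarrow> derivable m n (R, add_mset (x, neg a) G) \<Longrightarrow> derivable m n (R, G)"
  using cut_admissible_fm[of m n a] unfolding cut_admissible_def by blast

section \<open>Backward rule application and the axioms of Ldm\<close>

lemma derivable_absorb_rels: "set_mset R0 \<subseteq> set_mset R \<Longrightarrow> derivable m n (R0 + R, G) \<Longrightarrow> derivable m n (R, G)"
proof (induction R0)
  case (add \<rho> R0)
  then obtain R1 where R1: "R = add_mset \<rho> R1" by (metis insert_subset multi_member_split set_mset_add_mset_insert)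
  have "derivable m n (add_mset \<rho> (add_mset \<rho> (R0 + R1)), G)" using add.prems R1 by simp
  then have "derivable m n (R0 + R, G)" using R1 unfolding derivable_def by (auto dest: deriv_contract_rel)
  then show ?case using add.IH add.prems by auto
qed simp

lemma derivable_absorb_fms: "set_mset G0 \<subseteq> set_mset G \<Longrightarrow> derivable m n (R, G0 + G) \<Longrightarrow> derivable m n (R, G)"
proof (induction G0)
  case (add \<phi> G0)
  then obtain G1 where G1: "G = add_mset \<phi> G1" by (metis insert_subset multi_member_split set_mset_add_mset_insert)
  have "derivable m n (R, add_mset \<phi> (add_mset \<phi> (G0 + G1)))" using add.prems G1 by simp
  then have "derivable m n (R, G0 + G)" using G1 by (auto dest: derivable_contract_fm)
  then show ?case using add.IH add.prems by auto
qed simp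

lemma derivable_by_core:
  assumes core: "core_rule m n ps0 (R0, G0) E" and E: "E \<inter> labels (R, G) = {}"
    and R0: "set_mset R0 \<subseteq> set_mset R" and G0: "set_mset G0 \<subseteq> set_mset G"
    and prems: "\<forall>P\<in>set ps0. derivable m n (P + (R, G))"
  shows "derivable m n (R, G)"
proof -
  have "E \<inter> labels ((R0, G0) + (R, G)) = {}" using E labels_mono[OF R0 G0] by (auto simp: labels_add)
  then have "derivable m n (R0 + R, G0 + G)" using derivable_core_step[OF core] prems by fastforce
  then show ?thesis using derivable_absorb_rels[OF R0] derivable_absorb_fms[OF G0] by blast
qed

lemma derivable_by_conj:
  "(w, Conj a b) \<in># G \<Longrightarrow> derivable m n (R, add_mset (w, a) G) \<Longrightarrow> derivable m n (R, add_mset (w, b) G) \<Longrightarrow>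
    derivable m n (R, G)"
  by (rule derivable_by_core[OF core_conj]) (auto intro: derivable_weaken_fm)

lemma derivable_by_disj:
  "(w, Disj a b) \<in># G \<Longrightarrow> derivable m n (R, add_mset (w, a) (add_mset (w, b) G)) \<Longrightarrow> derivable m n (R, G)"
  by (rule derivable_by_core[OF core_disj]) (auto intro: derivable_weaken_fm)

lemma derivable_by_box:
  "(w, Box a) \<in># G \<Longrightarrow> v \<notin> labels (R, G) \<Longrightarrow> derivable m n (R, add_mset (v, a) G) \<Longrightarrow> derivable m n (R, G)"
  by (rule derivable_by_core[OF core_box[of v w]]) (auto intro: derivable_weaken_fm simp: labels_def)

lemma derivable_by_dia: "(w, Dia a) \<in># G \<Longrightarrow> derivable m n (R, add_mset (u, a) G) \<Longrightarrow> derivable m n (R, G)"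
  by (rule derivable_by_core[OF core_dia]) (auto intro: derivable_weaken_fm)

lemma derivable_by_stit:
  "(w, Stit i a) \<in># G \<Longrightarrow> i \<in> {1..m} \<Longrightarrow> v \<notin> labels (R, G) \<Longrightarrow>
    derivable m n (add_mset (i, w, v) R, add_mset (v, a) G) \<Longrightarrow> derivable m n (R, G)"
  by (rule derivable_by_core[OF core_stit[of i m v w]]) (auto simp: labels_def)

lemma derivable_by_cstit:
  "(w, Cstit i a) \<in># G \<Longrightarrow> (i, w, u) \<in># R \<Longrightarrow> i \<in> {1..m} \<Longrightarrow> derivable m n (R, add_mset (u, a) G) \<Longrightarrow>
    derivable m n (R, G)"
  using derivable_weaken[of m n "(R, add_mset (u, a) G)" "({#(i, w, u)#}, {#(w, Cstit i a)#})"]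
  by (intro derivable_by_core[OF core_cstit]) (auto simp: add_mset_commute)

lemma derivable_by_refl: "i \<in> {1..m} \<Longrightarrow> derivable m n (add_mset (i, w, w) R, G) \<Longrightarrow> derivable m n (R, G)"
  by (rule derivable_by_core[OF core_refl]) auto

lemma derivable_by_eucl:
  "(i, w, u) \<in># R \<Longrightarrow> (i, w, v) \<in># R \<Longrightarrow> i \<in> {1..m} \<Longrightarrow> derivable m n (add_mset (i, u, v) R, G) \<Longrightarrow>
    derivable m n (R, G)"
  using derivable_weaken[of m n "(add_mset (i, u, v) R, G)" "({#(i, w, u), (i, w, v)#}, {#})"]
  by (intro derivable_by_core[OF core_eucl]) (auto simp: add_mset_commute)

lemma derivable_by_ioa:
  "v \<notin> labels (R, G) \<Longrightarrow> derivable m n (R + image_mset (\<lambda>i. (i, u i, v)) (mset [1..<Suc m]), G) \<Longrightarrow>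
    derivable m n (R, G)"
  by (rule derivable_by_core[OF core_ioa]) (auto simp: add.commute simp del: mset_upt)

lemma derivable_by_apc:
  "n > 0 \<Longrightarrow> i \<in> {1..m} \<Longrightarrow>
    (\<And>k j. k < n \<Longrightarrow> k < j \<Longrightarrow> j \<le> n \<Longrightarrow> derivable m n (add_mset (i, ws k, ws j) R, G)) \<Longrightarrow>
    derivable m n (R, G)"
  by (rule derivable_by_core[OF core_apc[where ws = ws]]) (auto simp del: upt_Suc)

lemma derivable_by_Disjs:
  "(w, Disjs L) \<in># G \<Longrightarrow> derivable m n (R, mset (map (Pair w) L) + G) \<Longrightarrow> derivable m n (R, G)"
proof (induction L arbitrary: G rule: Disjs.induct)
  case (2 a)
  then show ?case using derivable_absorb_fms[of "{#(w, a)#}" G m n R] by simp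
next
  case (3 a b L)
  let ?D = "Disjs (b # L)"
  have "derivable m n (R, mset (map (Pair w) (b # L)) + add_mset (w, a) (add_mset (w, ?D) G))"
    using derivable_weaken_fm[OF "3.prems"(2), of "(w, ?D)"] by (simp add: add_mset_commute)
  then have "derivable m n (R, add_mset (w, a) (add_mset (w, ?D) G))" by (rule "3.IH"[rotated]) simp
  then show ?case using "3.prems"(1) by (auto intro: derivable_by_disj)
qed simp

lemma derivable_by_Conjs:
  "(w, Conjs L) \<in># G \<Longrightarrow> L \<noteq> [] \<Longrightarrow> \<forall>a\<in>set L. derivable m n (R, add_mset (w, a) G) \<Longrightarrow> derivable m n (R, G)"
proof (induction L arbitrary: G rule: Conjs.induct)
  case (2 a)
  then show ?case using derivable_absorb_fms[of "{#(w, a)#}" G m n R] by simp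
next
  case (3 a b L)
  let ?C = "Conjs (b # L)"
  have "\<forall>c\<in>set (b # L). derivable m n (R, add_mset (w, c) (add_mset (w, ?C) G))"
  proof
    fix c assume "c \<in> set (b # L)"
    then show "derivable m n (R, add_mset (w, c) (add_mset (w, ?C) G))"
      using derivable_weaken_fm[of m n R "add_mset (w, c) G" "(w, ?C)"] "3.prems"(3)
      by (simp add: add_mset_commute)
  qed
  then have "derivable m n (R, add_mset (w, ?C) G)" by (intro "3.IH") auto
  then show ?case using "3.prems" by (auto intro: derivable_by_conj)
qed simp

lemma derivable_by_Disjs_list:
  "\<forall>k\<in>set K. (u k, Disjs (L k)) \<in># G \<Longrightarrow>
    derivable m n (R, sum_list (map (\<lambda>k. mset (map (Pair (u k)) (L k))) K) + G) \<Longrightarrow> derivable m n (R, G)"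
proof (induction K arbitrary: G)
  case (Cons k K)
  have "derivable m n (R, mset (map (Pair (u k)) (L k)) + G)"
    by (rule Cons.IH) (use Cons.prems in \<open>auto simp: add_ac\<close>)
  then show ?case using derivable_by_Disjs Cons.prems(1) by fastforce
qed simp

lemma derivable_by_Box_list:
  "distinct (map v K) \<Longrightarrow> v ` set K \<inter> labels (R, G) = {} \<Longrightarrow> \<forall>k\<in>set K. (w, Box (b k)) \<in># G \<Longrightarrow>
    derivable m n (R, mset (map (\<lambda>k. (v k, b k)) K) + G) \<Longrightarrow> derivable m n (R, G)"
proof (induction K arbitrary: G)
  case (Cons k K)
  have "derivable m n (R, add_mset (v k, b k) G)" by (rule Cons.IH) (use Cons.prems in auto)
  then show ?case using Cons.prems by (auto intro: derivable_by_box)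
qed simp

lemma agents_neg [simp]: "agents (neg a) = agents a"
  by (induction a) auto

lemma wf_fm_simps [simp]:
  "wf_fm m (At p)" "wf_fm m (NAt p)" "wf_fm m (Conj a b) \<longleftrightarrow> wf_fm m a \<and> wf_fm m b"
  "wf_fm m (Disj a b) \<longleftrightarrow> wf_fm m a \<and> wf_fm m b" "wf_fm m (Box a) \<longleftrightarrow> wf_fm m a"
  "wf_fm m (Dia a) \<longleftrightarrow> wf_fm m a" "wf_fm m (Stit i a) \<longleftrightarrow> i \<in> {1..m} \<and> wf_fm m a"
  "wf_fm m (Cstit i a) \<longleftrightarrow> i \<in> {1..m} \<and> wf_fm m a" "wf_fm m (neg a) \<longleftrightarrow> wf_fm m a"
  by (auto simp: wf_fm_def)

lemma derivable_complementary: "wf_fm m a \<Longrightarrow> (w, a) \<in># G \<Longrightarrow> (w, neg a) \<in># G \<Longrightarrow> derivable m n (R, G)"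
proof (induction a arbitrary: R G w)
  case (At p)
  then have "initial (R, G)" by (auto simp: initial_def)
  then show ?case unfolding derivable_def using deriv_initial by blast
next
  case (NAt p)
  then have "initial (R, G)" by (auto simp: initial_def)
  then show ?case unfolding derivable_def using deriv_initial by blast
next
  case (Conj a b)
  show ?case
  proof (rule derivable_by_disj[where w=w and a="neg a" and b="neg b"])
    show "(w, Disj (neg a) (neg b)) \<in># G" using Conj by simp
    show "derivable m n (R, add_mset (w, neg a) (add_mset (w, neg b) G))"
      by (rule derivable_by_conj[where w=w and a=a and b=b]) (use Conj in \<open>auto intro: Conj.IH\<close>)
  qed
next
  case (Disj a b)
  show ?case
  proof (rule derivable_by_disj[where w=w and a=a and b=b])
    show "(w, Disj a b) \<in># G" using Disj by simp
    show "derivable m n (R, add_mset (w, a) (add_mset (w, b) G))"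
      by (rule derivable_by_conj[where w=w and a="neg a" and b="neg b"]) (use Disj in \<open>auto intro: Disj.IH\<close>)
  qed
next
  case (Box a)
  obtain v where v: "v \<notin> labels (R, G)" using ex_fresh_label by blast
  show ?case
  proof (rule derivable_by_box[where w=w and a=a and v=v])
    show "derivable m n (R, add_mset (v, a) G)"
      by (rule derivable_by_dia[where w=w and a="neg a" and u=v]) (use Box in \<open>auto intro: Box.IH\<close>)
  qed (use Box v in auto)
next
  case (Dia a)
  obtain v where v: "v \<notin> labels (R, G)" using ex_fresh_label by blast
  show ?case
  proof (rule derivable_by_box[where w=w and a="neg a" and v=v])
    show "derivable m n (R, add_mset (v, neg a) G)"
      by (rule derivable_by_dia[where w=w and a=a and u=v]) (use Dia in \<open>auto intro: Dia.IH\<close>)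
  qed (use Dia v in auto)
next
  case (Stit i a)
  obtain v where v: "v \<notin> labels (R, G)" using ex_fresh_label by blast
  show ?case
  proof (rule derivable_by_stit[where w=w and i=i and a=a and v=v])
    show "derivable m n (add_mset (i, w, v) R, add_mset (v, a) G)"
      by (rule derivable_by_cstit[where w=w and i=i and a="neg a" and u=v]) (use Stit in \<open>auto intro: Stit.IH\<close>)
  qed (use Stit v in auto)
next
  case (Cstit i a)
  obtain v where v: "v \<notin> labels (R, G)" using ex_fresh_label by blast
  show ?case
  proof (rule derivable_by_stit[where w=w and i=i and a="neg a" and v=v])
    show "derivable m n (add_mset (i, w, v) R, add_mset (v, neg a) G)"
      by (rule derivable_by_cstit[where w=w and i=i and a=a and u=v]) (use Cstit in \<open>auto intro: Cstit.IH\<close>)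
  qed (use Cstit v in auto)
qed

corollary derivable_identity: "wf_fm m a \<Longrightarrow> derivable m n (R, add_mset (w, a) (add_mset (w, neg a) G))"
  by (rule derivable_complementary) auto

lemma fresh_label_neq: "(w, a) \<in># G \<Longrightarrow> v \<notin> labels (R, G) \<Longrightarrow> v \<noteq> w"
  by (auto simp: labels_def)

lemma derivable_ax_A1: "(w, imp a (imp b a)) \<in># G \<Longrightarrow> wf_fm m a \<Longrightarrow> derivable m n (R,G)"
  unfolding imp_def
  apply (rule derivable_by_disj[where w=w and a="neg a" and b="Disj (neg b) a"], simp)
  apply (rule derivable_by_disj[where w=w and a="neg b" and b="a"], simp)
  apply (rule derivable_complementary[where a=a and w=w], auto)
  done

lemma derivable_ax_A2: "(w, imp (imp (neg b) (neg a)) (imp a b)) \<in># G \<Longrightarrow> wf_fm m a \<Longrightarrow> wf_fm m b \<Longrightarrow> derivable m n (R,G)"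
  unfolding imp_def
  apply (rule derivable_by_disj[where w=w and a="Conj (neg b) a" and b="Disj (neg a) b"], simp)
  apply (rule derivable_by_disj[where w=w and a="neg a" and b="b"], simp)
  apply (rule derivable_by_conj[where w=w and a="neg b" and b=a], simp)
   apply (rule derivable_complementary[where a=b and w=w], auto)
  apply (rule derivable_complementary[where a=a and w=w], auto)
  done

lemma derivable_ax_A3: "(w, imp (imp a (imp b c)) (imp (imp a b) (imp a c))) \<in># G \<Longrightarrow> wf_fm m a \<Longrightarrow> wf_fm m b \<Longrightarrow> wf_fm m c \<Longrightarrow>
  derivable m n (R,G)"
  unfolding imp_def
  apply (rule derivable_by_disj[where w=w and a="Conj a (Conj b (neg c))" and b="Disj (Conj a (neg b)) (Disj (neg a) c)"], simp)
  apply (rule derivable_by_disj[where w=w and a="Conj a (neg b)" and b="Disj (neg a) c"], simp)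
  apply (rule derivable_by_disj[where w=w and a="neg a" and b="c"], simp)
  apply (rule derivable_by_conj[where w=w and a=a and b="Conj b (neg c)"], simp)
   apply (rule derivable_complementary[where a=a and w=w], auto)
  apply (rule derivable_by_conj[where w=w and a=b and b="neg c"], simp)
   apply (rule derivable_by_conj[where w=w and a=a and b="neg b"], simp)
    apply (rule derivable_complementary[where a=a and w=w], auto)
   apply (rule derivable_complementary[where a=b and w=w], auto)
  apply (rule derivable_complementary[where a=c and w=w], auto)
  done

lemma derivable_ax_BoxK: "(w, imp (Box (imp a b)) (imp (Box a) (Box b))) \<in># G \<Longrightarrow> wf_fm m a \<Longrightarrow> wf_fm m b \<Longrightarrow> derivable m n (R,G)"
proof -
  assume h: "(w, imp (Box (imp a b)) (imp (Box a) (Box b))) \<in># G" and wa: "wf_fm m a" and wb: "wf_fm m b"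
  obtain v where v: "v \<notin> labels (R, G)" using ex_fresh_label by blast
  have vw: "v \<noteq> w" using fresh_label_neq[OF h v] .
  show ?thesis using h unfolding imp_def
    apply -
    apply (rule derivable_by_disj[where w=w and a="Dia (Conj a (neg b))" and b="Disj (Dia (neg a)) (Box b)"], simp)
    apply (rule derivable_by_disj[where w=w and a="Dia (neg a)" and b="Box b"], simp)
    apply (rule derivable_by_box[where w=w and a=b and v=v], simp)
     apply (use v vw in simp)
    apply (rule derivable_by_dia[where w=w and a="Conj a (neg b)" and u=v], simp)
    apply (rule derivable_by_dia[where w=w and a="neg a" and u=v], simp)
    apply (rule derivable_by_conj[where w=v and a=a and b="neg b"], simp)
     apply (rule derivable_complementary[where a=a and w=v], use wa in auto)
    apply (rule derivable_complementary[where a=b and w=v], use wb in auto)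
    done
qed

lemma derivable_ax_BoxT: "(w, imp (Box a) a) \<in># G \<Longrightarrow> wf_fm m a \<Longrightarrow> derivable m n (R,G)"
  unfolding imp_def
  apply (rule derivable_by_disj[where w=w and a="Dia (neg a)" and b="a"], simp)
  apply (rule derivable_by_dia[where w=w and a="neg a" and u=w], simp)
  apply (rule derivable_complementary[where a=a and w=w], auto)
  done

lemma derivable_ax_Box5: "(w, imp (Dia a) (Box (Dia a))) \<in># G \<Longrightarrow> wf_fm m a \<Longrightarrow> derivable m n (R,G)"
proof -
  assume h: "(w, imp (Dia a) (Box (Dia a))) \<in># G" and wa: "wf_fm m a"
  obtain v where v: "v \<notin> labels (R, G)" using ex_fresh_label by blast
  obtain u where u: "u \<notin> labels (R, G)" "u \<notin> {v}" using fresh_label_exists[of "{v}" "(R, G)"] by auto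
  have vw: "v \<noteq> w" "u \<noteq> w" using fresh_label_neq[OF h v] fresh_label_neq[OF h u(1)] by auto
  show ?thesis using h unfolding imp_def
    apply -
    apply (rule derivable_by_disj[where w=w and a="Box (neg a)" and b="Box (Dia a)"], simp)
    apply (rule derivable_by_box[where w=w and a="Dia a" and v=v], simp)
     apply (use v vw in simp)
    apply (rule derivable_by_box[where w=w and a="neg a" and v=u], simp)
     apply (use u vw in simp)
    apply (rule derivable_by_dia[where w=v and a="a" and u=u], simp)
    apply (rule derivable_complementary[where a=a and w=u], use wa in auto)
    done
qed

lemma derivable_ax_BoxD: "(w, Disj (Box a) (Dia (neg a))) \<in># G \<Longrightarrow> wf_fm m a \<Longrightarrow> derivable m n (R,G)"
  apply (rule derivable_by_disj[where w=w and a="Box a" and b="Dia (neg a)"], simp)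
  apply (rule derivable_complementary[where a="Box a" and w=w], auto)
  done

lemma derivable_ax_StitK: "(w, imp (Stit i (imp a b)) (imp (Stit i a) (Stit i b))) \<in># G \<Longrightarrow> i \<in> {1..m} \<Longrightarrow> wf_fm m a \<Longrightarrow> wf_fm m b \<Longrightarrow>
  derivable m n (R,G)"
proof -
  assume h: "(w, imp (Stit i (imp a b)) (imp (Stit i a) (Stit i b))) \<in># G" and i: "i \<in> {1..m}" and wa: "wf_fm m a" and wb: "wf_fm m b"
  obtain v where v: "v \<notin> labels (R, G)" using ex_fresh_label by blast
  have vw: "v \<noteq> w" using fresh_label_neq[OF h v] .
  show ?thesis using h unfolding imp_def
    apply -
    apply (rule derivable_by_disj[where w=w and a="Cstit i (Conj a (neg b))" and b="Disj (Cstit i (neg a)) (Stit i b)"], simp)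
    apply (rule derivable_by_disj[where w=w and a="Cstit i (neg a)" and b="Stit i b"], simp)
    apply (rule derivable_by_stit[where w=w and a=b and v=v and i=i], simp)
      apply (rule i)
     apply (use v vw in simp)
    apply (rule derivable_by_cstit[where w=w and a="Conj a (neg b)" and u=v and i=i], simp, simp, rule i)
    apply (rule derivable_by_cstit[where w=w and a="neg a" and u=v and i=i], simp, simp, rule i)
    apply (rule derivable_by_conj[where w=v and a=a and b="neg b"], simp)
     apply (rule derivable_complementary[where a=a and w=v], use wa in auto)
    apply (rule derivable_complementary[where a=b and w=v], use wb in auto)
    done
qed

lemma derivable_ax_StitT: "(w, imp (Stit i a) a) \<in># G \<Longrightarrow> i \<in> {1..m} \<Longrightarrow> wf_fm m a \<Longrightarrow> derivable m n (R,G)"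
  unfolding imp_def
  apply (rule derivable_by_disj[where w=w and a="Cstit i (neg a)" and b="a"], simp)
  apply (rule derivable_by_refl[where i=i and w=w], simp)
  apply (rule derivable_by_cstit[where w=w and a="neg a" and u=w and i=i], simp, simp, simp)
  apply (rule derivable_complementary[where a=a and w=w], auto)
  done

lemma derivable_ax_Stit5: "(w, imp (Cstit i a) (Stit i (Cstit i a))) \<in># G \<Longrightarrow> i \<in> {1..m} \<Longrightarrow> wf_fm m a \<Longrightarrow> derivable m n (R,G)"
proof -
  assume h: "(w, imp (Cstit i a) (Stit i (Cstit i a))) \<in># G" and i: "i \<in> {1..m}" and wa: "wf_fm m a"
  obtain v where v: "v \<notin> labels (R, G)" using ex_fresh_label by blast
  obtain u where u: "u \<notin> labels (R, G)" "u \<notin> {v}" using fresh_label_exists[of "{v}" "(R, G)"] by auto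
  have vw: "v \<noteq> w" "u \<noteq> w" using fresh_label_neq[OF h v] fresh_label_neq[OF h u(1)] by auto
  show ?thesis using h unfolding imp_def
    apply -
    apply (rule derivable_by_disj[where w=w and a="Stit i (neg a)" and b="Stit i (Cstit i a)"], simp)
    apply (rule derivable_by_stit[where w=w and a="Cstit i a" and v=v and i=i], simp)
      apply (rule i)
     apply (use v vw in simp)
    apply (rule derivable_by_stit[where w=w and a="neg a" and v=u and i=i], simp)
      apply (rule i)
     apply (use u v vw in simp)
    apply (rule derivable_by_eucl[where i=i and w=w and u=v and v=u], simp, simp, rule i)
    apply (rule derivable_by_cstit[where w=v and a="a" and u=u and i=i], simp, simp, rule i)
    apply (rule derivable_complementary[where a=a and w=u], use wa in auto)
    done
qed

lemma derivable_ax_StitD: "(w, Disj (Stit i a) (Cstit i (neg a))) \<in># G \<Longrightarrow> i \<in> {1..m} \<Longrightarrow> wf_fm m a \<Longrightarrow> derivable m n (R,G)"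
  apply (rule derivable_by_disj[where w=w and a="Stit i a" and b="Cstit i (neg a)"], simp)
  apply (rule derivable_complementary[where a="Stit i a" and w=w], auto)
  done

lemma derivable_ax_Bridge: "(w, imp (Box a) (Stit i a)) \<in># G \<Longrightarrow> i \<in> {1..m} \<Longrightarrow> wf_fm m a \<Longrightarrow> derivable m n (R,G)"
proof -
  assume h: "(w, imp (Box a) (Stit i a)) \<in># G" and i: "i \<in> {1..m}" and wa: "wf_fm m a"
  obtain v where v: "v \<notin> labels (R, G)" using ex_fresh_label by blast
  have vw: "v \<noteq> w" using fresh_label_neq[OF h v] .
  show ?thesis using h unfolding imp_def
    apply -
    apply (rule derivable_by_disj[where w=w and a="Dia (neg a)" and b="Stit i a"], simp)
    apply (rule derivable_by_stit[where w=w and a=a and v=v and i=i], simp)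
      apply (rule i)
     apply (use v vw in simp)
    apply (rule derivable_by_dia[where w=w and a="neg a" and u=v], simp)
    apply (rule derivable_complementary[where a=a and w=v], use wa in auto)
    done
qed


lemma neg_Conjs: "L \<noteq> [] \<Longrightarrow> neg (Conjs L) = Disjs (map neg L)"
  by (induction L rule: Conjs.induct) auto

lemma labels_less_Suc_Max: "z \<in> labels S \<Longrightarrow> z < Suc (Max (labels S))"
  by (simp add: le_imp_less_Suc)

lemma derivable_Stit_by_related_Cstit:
  assumes i: "i \<in> {1..m}" and wf: "wf_fm m a"
    and x: "(x, Cstit i (neg a)) \<in># G" and xv: "(i, x, v) \<in># R"
  shows "derivable m n (R, add_mset (v, Stit i a) G)"
proof -
  let ?G = "add_mset (v, Stit i a) G"
  obtain z where z: "z \<notin> labels (R, ?G)" using ex_fresh_label by blast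
  have d1: "derivable m n (add_mset (i, x, z) (add_mset (i, v, x) (add_mset (i, x, x) (add_mset (i, v, z) R))),
      add_mset (z, neg a) (add_mset (z, a) ?G))"
    by (rule derivable_complementary[where w = z and a = a]) (use wf in auto)
  have d2: "derivable m n (add_mset (i, x, z) (add_mset (i, v, x) (add_mset (i, x, x) (add_mset (i, v, z) R))),
      add_mset (z, a) ?G)"
    by (rule derivable_by_cstit[where w = x and u = z and i = i and a = "neg a"]) (use i x d1 in auto)
  have d3: "derivable m n (add_mset (i, v, x) (add_mset (i, x, x) (add_mset (i, v, z) R)), add_mset (z, a) ?G)"
    by (rule derivable_by_eucl[where w = v and u = x and v = z]) (use i d2 in auto)
  have d4: "derivable m n (add_mset (i, x, x) (add_mset (i, v, z) R), add_mset (z, a) ?G)"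
    by (rule derivable_by_eucl[where w = x and u = v and v = x]) (use i xv d3 in auto)
  have d5: "derivable m n (add_mset (i, v, z) R, add_mset (z, a) ?G)"
    by (rule derivable_by_refl[where w = x]) (use i d4 in auto)
  show ?thesis by (rule derivable_by_stit[where w = v and v = z]) (use i z d5 in auto)
qed

lemma derivable_ax_IOA:
  assumes m1: "1 \<le> m" and wf: "\<forall>i\<in>{1..m}. wf_fm m (as i)"
    and h: "(w, imp (Conjs (map (\<lambda>i. Dia (Stit i (as i))) [1..<Suc m]))
      (Dia (Conjs (map (\<lambda>i. Stit i (as i)) [1..<Suc m])))) \<in># G"
  shows "derivable m n (R, G)"
proof -
  define A where "A = [1..<Suc m]"
  define B where "B = map (\<lambda>i. Box (Cstit i (neg (as i)))) A"
  define C where "C = Conjs (map (\<lambda>i. Stit i (as i)) A)"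
  have h1: "(w, Disj (Disjs B) (Dia C)) \<in># G"
    using h m1 by (simp add: A_def B_def C_def imp_def neg_Conjs comp_def)
  define N where "N = Suc (Max (labels (R, G)))"
  define V where "V = N + Suc m"
  define G1 where "G1 = add_mset (w, Disjs B) (add_mset (w, Dia C) G)"
  define G2 where "G2 = mset (map (Pair w) B) + G1"
  define G3 where "G3 = mset (map (\<lambda>k. (N + k, Cstit k (neg (as k)))) A) + G2"
  define R' where "R' = R + image_mset (\<lambda>i. (i, N + i, V)) (mset A)"
  have w: "w \<in> labels (R, G)" using h1 by (auto simp: labels_def)
  have labels_G2: "labels (R, G2) = labels (R, G)"
    using w by (auto simp: G2_def G1_def labels_def)
  have below_N: "z < N" if "z \<in> labels (R, G2)" for z
    using that labels_less_Suc_Max unfolding labels_G2 N_def by blast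
  have Stit_i: "derivable m n (R', add_mset (V, Stit i (as i)) (add_mset (V, C) G3))" if i: "i \<in> set A" for i
  proof (rule derivable_Stit_by_related_Cstit)
    show "i \<in> {1..m}" "wf_fm m (as i)" using i wf by (auto simp: A_def)
    show "(N + i, Cstit i (neg (as i))) \<in># add_mset (V, C) G3" using i by (simp add: G3_def)
    show "(i, N + i, V) \<in># R'" using i by (simp add: R'_def)
  qed
  have d4: "derivable m n (R', add_mset (V, C) G3)"
    by (rule derivable_by_Conjs[where w = V and L = "map (\<lambda>i. Stit i (as i)) A"])
      (use Stit_i m1 in \<open>auto simp: A_def C_def\<close>)
  have d3: "derivable m n (R', G3)"
    by (rule derivable_by_dia[where w = w and a = C and u = V]) (use d4 in \<open>auto simp: G3_def G2_def G1_def\<close>)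
  have "labels (R, G3) \<subseteq> labels (R, G2) \<union> (\<lambda>k. N + k) ` set A" by (auto simp: G3_def labels_def)
  then have "V \<notin> labels (R, G3)" using below_N by (force simp: V_def A_def)
  then have d2: "derivable m n (R, G3)"
    by (rule derivable_by_ioa[where v = V and u = "\<lambda>i. N + i"]) (use d3 in \<open>simp add: R'_def A_def\<close>)
  have fresh: "(\<lambda>k. N + k) ` set A \<inter> labels (R, G2) = {}" using below_N by force
  have d1: "derivable m n (R, G2)"
  proof (rule derivable_by_Box_list[where K = A and v = "\<lambda>k. N + k" and w = w])
    show "distinct (map (\<lambda>k. N + k) A)" by (simp add: A_def distinct_map)
  qed (use fresh d2 in \<open>simp_all add: G3_def G2_def B_def\<close>)
  have "derivable m n (R, G1)"
    by (rule derivable_by_Disjs[where w = w and L = B]) (use d1 in \<open>auto simp: G2_def G1_def\<close>)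
  then show ?thesis unfolding G1_def by (rule derivable_by_disj[rotated -1]) (rule h1)
qed

lemma derivable_ax_APC:
  assumes n0: "n > 0" and i: "i \<in> {1..m}" and len: "length as = n" and wf: "\<forall>a\<in>set as. wf_fm m a"
    and h: "(w, imp (Conjs (map (\<lambda>k. Dia (Conjs (map neg (take k as) @ [Stit i (as ! k)]))) [0..<n]))
      (Disjs as)) \<in># G"
  shows "derivable m n (R, G)"
proof -
  define K where "K = [0..<n]"
  define L where "L = (\<lambda>k. take k as @ [Cstit i (neg (as ! k))])"
  define B where "B = map (\<lambda>k. Box (Disjs (L k))) K"
  have h1: "(w, Disj (Disjs B) (Disjs as)) \<in># G"
    using h n0 by (simp add: K_def L_def B_def imp_def neg_Conjs comp_def)
  define N where "N = Suc (Max (labels (R, G)))"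
  define G1 where "G1 = add_mset (w, Disjs B) (add_mset (w, Disjs as) G)"
  define G2 where "G2 = mset (map (Pair w) B) + G1"
  define G3 where "G3 = mset (map (Pair w) as) + G2"
  define G4 where "G4 = mset (map (\<lambda>k. (N + k, Disjs (L k))) K) + G3"
  define G5 where "G5 = sum_list (map (\<lambda>k. mset (map (Pair (N + k)) (L k))) K) + G4"
  define ws where "ws = (\<lambda>k. if k < n then N + k else w)"
  have in_G5: "(N + k, x) \<in># G5" if "k < n" "x \<in> set (L k)" for k x
    using that by (auto simp: G5_def K_def)
  have "derivable m n (add_mset (i, ws k, ws j) R, G5)" if kj: "k < j" "j \<le> n" for k j
  proof (rule derivable_by_cstit[where w = "N + k" and a = "neg (as ! k)" and u = "ws j" and i = i])
    show "(N + k, Cstit i (neg (as ! k))) \<in># G5" using kj by (intro in_G5) (auto simp: L_def)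
    show "(i, N + k, ws j) \<in># add_mset (i, ws k, ws j) R" using kj by (simp add: ws_def)
    have "(ws j, as ! k) \<in># G5"
    proof (cases "j < n")
      case True
      then have "as ! k \<in> set (L j)" using kj len by (simp add: L_def in_set_conv_nth) (metis nth_take)
      then show ?thesis using in_G5[OF True] True by (simp add: ws_def)
    next
      case False
      then show ?thesis using kj len by (simp add: ws_def G5_def G4_def G3_def)
    qed
    then show "derivable m n (add_mset (i, ws k, ws j) R, add_mset (ws j, neg (as ! k)) G5)"
      using wf kj len by (intro derivable_complementary[where w = "ws j" and a = "as ! k"]) auto
  qed (use i in simp)
  then have d4: "derivable m n (R, G5)" by (rule derivable_by_apc[OF n0 i]) simp
  have d3: "derivable m n (R, G4)"
    by (rule derivable_by_Disjs_list[where K = K and u = "\<lambda>k. N + k" and L = L])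
      (use d4 in \<open>auto simp: G4_def G5_def\<close>)
  have w: "w \<in> labels (R, G)" using h1 by (auto simp: labels_def)
  have "labels (R, G3) = labels (R, G)" using w by (auto simp: G3_def G2_def G1_def labels_def)
  then have fresh: "(\<lambda>k. N + k) ` set K \<inter> labels (R, G3) = {}"
    using labels_less_Suc_Max[of _ "(R, G)"] by (force simp: N_def)
  have d2: "derivable m n (R, G3)"
  proof (rule derivable_by_Box_list[where K = K and v = "\<lambda>k. N + k" and w = w])
    show "distinct (map (\<lambda>k. N + k) K)" by (simp add: K_def distinct_map)
  qed (use fresh d3 in \<open>simp_all add: G4_def G3_def G2_def B_def\<close>)
  have d1: "derivable m n (R, G2)"
    by (rule derivable_by_Disjs[where w = w and L = as]) (use d2 in \<open>auto simp: G3_def G2_def G1_def\<close>)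
  have "derivable m n (R, G1)"
    by (rule derivable_by_Disjs[where w = w and L = B]) (use d1 in \<open>auto simp: G2_def G1_def\<close>)
  then show ?thesis unfolding G1_def by (rule derivable_by_disj[rotated -1]) (rule h1)
qed

lemma derivable_of_Ldm: "Ldm m n a \<Longrightarrow> 1 \<le> m \<Longrightarrow> derivable m n (R, add_mset (w, a) G)"
proof (induction a arbitrary: R G w rule: Ldm.induct)
  case (IOA as)
  then show ?case by (intro derivable_ax_IOA[where w = w and as = as]) auto
next
  case (MP a b)
  have "derivable m n (R, add_mset (w, Disj (neg a) b) G)" using MP.IH(1)[OF MP.prems] by (simp add: imp_def)
  then have "derivable m n (R, add_mset (w, neg a) (add_mset (w, b) G))"
    unfolding derivable_def using deriv_disj_inv by blast
  with MP.IH(2)[OF MP.prems] show ?case by (rule derivable_cut)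
next
  case (Nec a)
  obtain v where v: "v \<notin> labels (R, add_mset (w, Box a) G)" using ex_fresh_label by blast
  show ?case by (rule derivable_by_box[where w = w and a = a and v = v]) (use v Nec in auto)
qed (auto intro: derivable_ax_A1 derivable_ax_A2 derivable_ax_A3 derivable_ax_BoxK derivable_ax_BoxT
    derivable_ax_Box5 derivable_ax_BoxD derivable_ax_StitK derivable_ax_StitT derivable_ax_Stit5
    derivable_ax_StitD derivable_ax_Bridge derivable_ax_APC)

section \<open>Soundness for Ldm frames\<close>

fun sat :: "'w set \<Rightarrow> (nat \<Rightarrow> 'w \<Rightarrow> 'w \<Rightarrow> bool) \<Rightarrow> (nat \<Rightarrow> 'w \<Rightarrow> bool) \<Rightarrow> 'w \<Rightarrow> fm \<Rightarrow> bool" where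
  "sat W Rl V x (At p) = V p x"
| "sat W Rl V x (NAt p) = (\<not> V p x)"
| "sat W Rl V x (Conj a b) = (sat W Rl V x a \<and> sat W Rl V x b)"
| "sat W Rl V x (Disj a b) = (sat W Rl V x a \<or> sat W Rl V x b)"
| "sat W Rl V x (Box a) = (\<forall>y\<in>W. sat W Rl V y a)"
| "sat W Rl V x (Dia a) = (\<exists>y\<in>W. sat W Rl V y a)"
| "sat W Rl V x (Stit i a) = (\<forall>y\<in>W. Rl i x y \<longrightarrow> sat W Rl V y a)"
| "sat W Rl V x (Cstit i a) = (\<exists>y\<in>W. Rl i x y \<and> sat W Rl V y a)"

lemma sat_neg [simp]: "sat W Rl V x (neg a) \<longleftrightarrow> \<not> sat W Rl V x a"
  by (induction a arbitrary: x) auto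

lemma sat_imp: "sat W Rl V x (imp a b) \<longleftrightarrow> (sat W Rl V x a \<longrightarrow> sat W Rl V x b)"
  by (simp add: imp_def)

lemma sat_Conjs: "L \<noteq> [] \<Longrightarrow> sat W Rl V x (Conjs L) \<longleftrightarrow> (\<forall>a\<in>set L. sat W Rl V x a)"
  by (induction L rule: Conjs.induct) auto

lemma sat_Disjs: "L \<noteq> [] \<Longrightarrow> sat W Rl V x (Disjs L) \<longleftrightarrow> (\<exists>a\<in>set L. sat W Rl V x a)"
  by (induction L rule: Disjs.induct) auto

text \<open>The whole of \<open>W\<close> is one moment. The last condition says that every agent has at most \<open>n\<close>
  choices: among any \<open>n + 1\<close> worlds two lie in the same \<open>R_i\<close>-class.\<close>

definition ldm_frame :: "nat \<Rightarrow> nat \<Rightarrow> 'w set \<Rightarrow> (nat \<Rightarrow> 'w \<Rightarrow> 'w \<Rightarrow> bool) \<Rightarrow> bool" where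
  "ldm_frame m n W Rl \<longleftrightarrow> (\<forall>i\<in>{1..m}. \<forall>x\<in>W. Rl i x x) \<and>
     (\<forall>i\<in>{1..m}. \<forall>x\<in>W. \<forall>y\<in>W. \<forall>z\<in>W. Rl i x y \<longrightarrow> Rl i x z \<longrightarrow> Rl i y z) \<and>
     (\<forall>f. (\<forall>i\<in>{1..m}. f i \<in> W) \<longrightarrow> (\<exists>v\<in>W. \<forall>i\<in>{1..m}. Rl i (f i) v)) \<and>
     (n > 0 \<longrightarrow> (\<forall>i\<in>{1..m}. \<forall>ws. (\<forall>k\<le>n. ws k \<in> W) \<longrightarrow> (\<exists>k<n. \<exists>j. k < j \<and> j \<le> n \<and> Rl i (ws k) (ws j))))"

definition sat_rels :: "(nat \<Rightarrow> 'w \<Rightarrow> 'w \<Rightarrow> bool) \<Rightarrow> (nat \<Rightarrow> 'w) \<Rightarrow> ratom multiset \<Rightarrow> bool" where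
  "sat_rels Rl \<rho> R \<longleftrightarrow> (\<forall>r\<in>#R. Rl (fst r) (\<rho> (fst (snd r))) (\<rho> (snd (snd r))))"

definition sat_some :: "'w set \<Rightarrow> (nat \<Rightarrow> 'w \<Rightarrow> 'w \<Rightarrow> bool) \<Rightarrow> (nat \<Rightarrow> 'w \<Rightarrow> bool) \<Rightarrow> (nat \<Rightarrow> 'w) \<Rightarrow>
    lfm multiset \<Rightarrow> bool" where
  "sat_some W Rl V \<rho> G \<longleftrightarrow> (\<exists>g\<in>#G. sat W Rl V (\<rho> (fst g)) (snd g))"

definition valid_seq :: "'w set \<Rightarrow> (nat \<Rightarrow> 'w \<Rightarrow> 'w \<Rightarrow> bool) \<Rightarrow> (nat \<Rightarrow> 'w \<Rightarrow> bool) \<Rightarrow> sequent \<Rightarrow> bool" where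
  "valid_seq W Rl V S \<longleftrightarrow> (\<forall>\<rho>. range \<rho> \<subseteq> W \<longrightarrow> sat_rels Rl \<rho> (fst S) \<longrightarrow> sat_some W Rl V \<rho> (snd S))"

lemma valid_seqD: "valid_seq W Rl V (R, G) \<Longrightarrow> range \<rho> \<subseteq> W \<Longrightarrow> sat_rels Rl \<rho> R \<Longrightarrow> sat_some W Rl V \<rho> G"
  by (simp add: valid_seq_def)

lemma ldm_frame_refl: "ldm_frame m n W Rl \<Longrightarrow> i \<in> {1..m} \<Longrightarrow> x \<in> W \<Longrightarrow> Rl i x x"
  unfolding ldm_frame_def by blast

lemma ldm_frame_eucl:
  "ldm_frame m n W Rl \<Longrightarrow> i \<in> {1..m} \<Longrightarrow> x \<in> W \<Longrightarrow> y \<in> W \<Longrightarrow> z \<in> W \<Longrightarrow> Rl i x y \<Longrightarrow> Rl i x z \<Longrightarrow> Rl i y z"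
  unfolding ldm_frame_def by blast

lemma ldm_frame_ioa:
  "ldm_frame m n W Rl \<Longrightarrow> \<forall>i\<in>{1..m}. f i \<in> W \<Longrightarrow> \<exists>v\<in>W. \<forall>i\<in>{1..m}. Rl i (f i) v"
  unfolding ldm_frame_def by blast

lemma ldm_frame_apc:
  "ldm_frame m n W Rl \<Longrightarrow> n > 0 \<Longrightarrow> i \<in> {1..m} \<Longrightarrow> \<forall>k\<le>n. ws k \<in> W \<Longrightarrow>
    \<exists>k<n. \<exists>j. k < j \<and> j \<le> n \<and> Rl i (ws k) (ws j)"
  unfolding ldm_frame_def by blast

lemma sat_rels_simps [simp]:
  "sat_rels Rl \<rho> {#}"
  "sat_rels Rl \<rho> (add_mset (i, x, y) R) \<longleftrightarrow> Rl i (\<rho> x) (\<rho> y) \<and> sat_rels Rl \<rho> R"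
  "sat_rels Rl \<rho> (R1 + R2) \<longleftrightarrow> sat_rels Rl \<rho> R1 \<and> sat_rels Rl \<rho> R2"
  by (auto simp: sat_rels_def)

lemma sat_some_simps [simp]:
  "\<not> sat_some W Rl V \<rho> {#}"
  "sat_some W Rl V \<rho> (add_mset (x, a) G) \<longleftrightarrow> sat W Rl V (\<rho> x) a \<or> sat_some W Rl V \<rho> G"
  "sat_some W Rl V \<rho> (G1 + G2) \<longleftrightarrow> sat_some W Rl V \<rho> G1 \<or> sat_some W Rl V \<rho> G2"
  by (auto simp: sat_some_def)

lemma label_of_rel_mem: "r \<in># R \<Longrightarrow> fst (snd r) \<in> labels (R, G) \<and> snd (snd r) \<in> labels (R, G)"
  by (cases r) (auto simp: labels_def)

lemma label_of_fm_mem: "g \<in># G \<Longrightarrow> fst g \<in> labels (R, G)"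
  by (cases g) (auto simp: labels_def)

lemma sat_rels_sat_some_update:
  assumes "v \<notin> labels (R, G)"
  shows "sat_rels Rl (\<rho>(v := y)) R \<longleftrightarrow> sat_rels Rl \<rho> R" and "sat_some W Rl V (\<rho>(v := y)) G \<longleftrightarrow> sat_some W Rl V \<rho> G"
proof -
  have "fst (snd r) \<noteq> v \<and> snd (snd r) \<noteq> v" if "r \<in># R" for r
    using assms label_of_rel_mem[OF that, of G] by auto
  then show "sat_rels Rl (\<rho>(v := y)) R \<longleftrightarrow> sat_rels Rl \<rho> R" unfolding sat_rels_def by auto
  have "fst g \<noteq> v" if "g \<in># G" for g
    using assms label_of_fm_mem[OF that, of R] by auto
  then show "sat_some W Rl V (\<rho>(v := y)) G \<longleftrightarrow> sat_some W Rl V \<rho> G" unfolding sat_some_def by auto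
qed

lemma valid_seq_stit:
  assumes v: "v \<notin> labels (R, add_mset (w, Stit i a) G)"
    and prem: "valid_seq W Rl V (add_mset (i, w, v) R, add_mset (v, a) G)"
  shows "valid_seq W Rl V (R, add_mset (w, Stit i a) G)"
  unfolding valid_seq_def
proof (intro allI impI)
  fix \<rho> assume W: "range \<rho> \<subseteq> W" and R: "sat_rels Rl \<rho> (fst (R, add_mset (w, Stit i a) G))"
  show "sat_some W Rl V \<rho> (snd (R, add_mset (w, Stit i a) G))"
  proof (rule ccontr)
    assume "\<not> ?thesis"
    then obtain y where y: "y \<in> W" "Rl i (\<rho> w) y" "\<not> sat W Rl V y a" and G: "\<not> sat_some W Rl V \<rho> G"
      by auto
    have v_fresh: "v \<notin> labels (R, G)" "v \<noteq> w" using v by auto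
    have "range (\<rho>(v := y)) \<subseteq> W" using W y by auto
    moreover have "sat_rels Rl (\<rho>(v := y)) (add_mset (i, w, v) R)"
      using R y v_fresh sat_rels_sat_some_update(1)[OF v_fresh(1), of Rl \<rho> y] by simp
    ultimately have "sat_some W Rl V (\<rho>(v := y)) (add_mset (v, a) G)" by (rule valid_seqD[OF prem])
    then show False using y G sat_rels_sat_some_update(2)[OF v_fresh(1), of W Rl V \<rho> y] by simp
  qed
qed

lemma valid_seq_box:
  assumes v: "v \<notin> labels (R, add_mset (w, Box a) G)"
    and prem: "valid_seq W Rl V (R, add_mset (w, Box a) (add_mset (v, a) G))"
  shows "valid_seq W Rl V (R, add_mset (w, Box a) G)"
  unfolding valid_seq_def
proof (intro allI impI)
  fix \<rho> assume W: "range \<rho> \<subseteq> W" and R: "sat_rels Rl \<rho> (fst (R, add_mset (w, Box a) G))"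
  show "sat_some W Rl V \<rho> (snd (R, add_mset (w, Box a) G))"
  proof (rule ccontr)
    assume "\<not> ?thesis"
    then obtain y where y: "y \<in> W" "\<not> sat W Rl V y a" and nbox: "\<not> sat W Rl V (\<rho> w) (Box a)"
      and G: "\<not> sat_some W Rl V \<rho> G" by auto
    have v_fresh: "v \<notin> labels (R, G)" "v \<noteq> w" using v by auto
    have "range (\<rho>(v := y)) \<subseteq> W" using W y by auto
    moreover have "sat_rels Rl (\<rho>(v := y)) R"
      using R sat_rels_sat_some_update(1)[OF v_fresh(1), of Rl \<rho> y] by simp
    ultimately have "sat_some W Rl V (\<rho>(v := y)) (add_mset (w, Box a) (add_mset (v, a) G))"
      by (rule valid_seqD[OF prem])
    then show False using y nbox G v_fresh sat_rels_sat_some_update(2)[OF v_fresh(1), of W Rl V \<rho> y] by simp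
  qed
qed

lemma valid_seq_ioa:
  assumes frame: "ldm_frame m n W Rl" and v: "v \<notin> labels (R, G)"
    and prem: "valid_seq W Rl V (R + image_mset (\<lambda>i. (i, u i, v)) (mset [1..<Suc m]), G)"
  shows "valid_seq W Rl V (R, G)"
  unfolding valid_seq_def
proof (intro allI impI)
  fix \<rho> assume W: "range \<rho> \<subseteq> W" and R: "sat_rels Rl \<rho> (fst (R, G))"
  have "\<forall>i\<in>{1..m}. \<rho> (u i) \<in> W" using W by auto
  then obtain y where y: "y \<in> W" "\<forall>i\<in>{1..m}. Rl i (\<rho> (u i)) y"
    using ldm_frame_ioa[OF frame, of "\<lambda>i. \<rho> (u i)"] by blast
  let ?\<rho>' = "\<rho>(v := y)"
  have "range ?\<rho>' \<subseteq> W" using W y by auto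
  moreover have "sat_rels Rl ?\<rho>' (image_mset (\<lambda>i. (i, u i, v)) (mset [1..<Suc m]))"
    unfolding sat_rels_def
  proof
    fix r assume "r \<in># image_mset (\<lambda>i. (i, u i, v)) (mset [1..<Suc m])"
    then obtain i where i: "i \<in> {1..m}" and r: "r = (i, u i, v)" by auto
    have "Rl i (?\<rho>' (u i)) y" using y i ldm_frame_refl[OF frame i] by (cases "u i = v") auto
    then show "Rl (fst r) (?\<rho>' (fst (snd r))) (?\<rho>' (snd (snd r)))" using r by simp
  qed
  moreover have "sat_rels Rl ?\<rho>' R" using R sat_rels_sat_some_update(1)[OF v, of Rl \<rho> y] by simp
  ultimately have "sat_some W Rl V ?\<rho>' G" using valid_seqD[OF prem] by simp
  then show "sat_some W Rl V \<rho> (snd (R, G))" using sat_rels_sat_some_update(2)[OF v, of W Rl V \<rho> y] by simp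
qed

lemma valid_seq_apc:
  assumes frame: "ldm_frame m n W Rl" and "n > 0" "i \<in> {1..m}"
    and prems: "\<And>k j. k < j \<Longrightarrow> j \<le> n \<Longrightarrow> valid_seq W Rl V (add_mset (i, ws k, ws j) R, G)"
  shows "valid_seq W Rl V (R, G)"
  unfolding valid_seq_def
proof (intro allI impI)
  fix \<rho> assume W: "range \<rho> \<subseteq> W" and R: "sat_rels Rl \<rho> (fst (R, G))"
  have "\<forall>k\<le>n. \<rho> (ws k) \<in> W" using W by auto
  then obtain k j where kj: "k < n" "k < j" "j \<le> n" "Rl i (\<rho> (ws k)) (\<rho> (ws j))"
    using ldm_frame_apc[OF frame assms(2,3), of "\<lambda>k. \<rho> (ws k)"] by blast
  then show "sat_some W Rl V \<rho> (snd (R, G))" using valid_seqD[OF prems[OF kj(2,3)] W] R by simp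
qed

lemma valid_seq_mono:
  assumes "valid_seq W Rl V (R', G')"
    and "\<And>\<rho>. range \<rho> \<subseteq> W \<Longrightarrow> sat_rels Rl \<rho> R \<Longrightarrow> sat_rels Rl \<rho> R'"
    and "\<And>\<rho>. range \<rho> \<subseteq> W \<Longrightarrow> sat_rels Rl \<rho> R \<Longrightarrow> sat_some W Rl V \<rho> G' \<Longrightarrow> sat_some W Rl V \<rho> G"
  shows "valid_seq W Rl V (R, G)"
  using assms unfolding valid_seq_def by simp

lemma apc_premise_mem:
  assumes "k < j" "j \<le> n"
  shows "(add_mset (i, ws k, ws j) R, G) \<in> set [(add_mset (i, ws k, ws j) R, G). k \<leftarrow> [0..<n], j \<leftarrow> [Suc k..<Suc n]]"
proof -
  have "(add_mset (i, ws k, ws j) R, G) \<in> set (map (\<lambda>j. (add_mset (i, ws k, ws j) R, G)) [Suc k..<Suc n])"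
    using assms by (auto simp del: upt_Suc)
  moreover have "k \<in> set [0..<n]" using assms by simp
  ultimately show ?thesis by (auto simp del: upt_Suc map_map)
qed

lemma rule_sound:
  assumes "rule m n ps S" and frame: "ldm_frame m n W Rl"
  shows "\<forall>P\<in>set ps. valid_seq W Rl V P \<Longrightarrow> valid_seq W Rl V S"
  using assms(1)
proof (induction rule: rule.induct)
  case (conj R w a b G)
  then have "valid_seq W Rl V (R, add_mset (w, Conj a b) (add_mset (w, a) G))"
    and "valid_seq W Rl V (R, add_mset (w, Conj a b) (add_mset (w, b) G))" by simp_all
  then show ?case unfolding valid_seq_def by auto
next
  case (disj R w a b G)
  then have "valid_seq W Rl V (R, add_mset (w, Disj a b) (add_mset (w, a) (add_mset (w, b) G)))" by simp
  then show ?case by (rule valid_seq_mono) auto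
next
  case (stit i v R w a G)
  show ?case by (rule valid_seq_stit) (use stit in auto)
next
  case (box v R w a G)
  show ?case by (rule valid_seq_box) (use box in auto)
next
  case (dia R w a u G)
  then have "valid_seq W Rl V (R, add_mset (w, Dia a) (add_mset (u, a) G))" by simp
  then show ?case by (rule valid_seq_mono) auto
next
  case (ioa v R G u)
  show ?case by (rule valid_seq_ioa[OF frame]) (use ioa in auto)
next
  case (cstit i w u R a G)
  then have "valid_seq W Rl V (add_mset (i, w, u) R, add_mset (w, Cstit i a) (add_mset (u, a) G))" by simp
  then show ?case by (rule valid_seq_mono) auto
next
  case (refl i w R G)
  then have "valid_seq W Rl V (add_mset (i, w, w) R, G)" by simp
  then show ?case by (rule valid_seq_mono) (use refl ldm_frame_refl[OF frame] in auto)
next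
  case (eucl i w u v R G)
  then have "valid_seq W Rl V (add_mset (i, w, u) (add_mset (i, w, v) (add_mset (i, u, v) R)), G)" by simp
  then show ?case
  proof (rule valid_seq_mono)
    fix \<rho> assume "range \<rho> \<subseteq> W" and "sat_rels Rl \<rho> (add_mset (i, w, u) (add_mset (i, w, v) R))"
    then show "sat_rels Rl \<rho> (add_mset (i, w, u) (add_mset (i, w, v) (add_mset (i, u, v) R)))"
      using ldm_frame_eucl[OF frame eucl.hyps, of "\<rho> w" "\<rho> u" "\<rho> v"] by auto
  qed auto
next
  case (apc i ws R G)
  have "valid_seq W Rl V (add_mset (i, ws k, ws j) R, G)" if "k < j" "j \<le> n" for k j
    using apc.prems apc_premise_mem[OF that, of i ws R G] by blast
  then show ?case by (rule valid_seq_apc[OF frame apc.hyps])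
qed

theorem deriv_sound: "deriv m n h S \<Longrightarrow> ldm_frame m n W Rl \<Longrightarrow> valid_seq W Rl V S"
proof (induction h S rule: deriv.induct)
  case (id h R w p G)
  then show ?case by (simp add: valid_seq_def)
next
  case (step ps S h)
  then show ?case using rule_sound[of m n ps S] by blast
qed

corollary derivable_sound: "derivable m n ({#}, {#(x, a)#}) \<Longrightarrow> ldm_frame m n W Rl \<Longrightarrow> y \<in> W \<Longrightarrow> sat W Rl V y a"
  unfolding derivable_def using deriv_sound valid_seqD[of W Rl V "{#}" "{#(x, a)#}" "\<lambda>_. y"] by fastforce

section \<open>Derived rules of the Hilbert calculus\<close>

abbreviation TT :: fm where "TT \<equiv> imp (At 0) (At 0)"
abbreviation FF :: fm where "FF \<equiv> neg TT"

lemma wf_imp[simp]: "wf_fm m (imp a b) \<longleftrightarrow> wf_fm m a \<and> wf_fm m b"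
  by (simp add: imp_def)

lemma wf_Conjs: "(\<forall>a\<in>set L. wf_fm m a) \<Longrightarrow> wf_fm m (Conjs L)"
  by (induction L rule: Conjs.induct) auto

lemma wf_Disjs: "(\<forall>a\<in>set L. wf_fm m a) \<Longrightarrow> wf_fm m (Disjs L)"
  by (induction L rule: Disjs.induct) auto

lemma Ldm_wf: "Ldm m n a \<Longrightarrow> wf_fm m a"
proof (induction rule: Ldm.induct)
  case (IOA as)
  then show ?case by (auto intro!: wf_Conjs)
next
  case (APC i as)
  have "\<forall>k<n. wf_fm m (as ! k)" using APC by (metis nth_mem)
  moreover have "\<forall>k. \<forall>x\<in>set (take k as). wf_fm m x" using APC by (meson in_set_takeD)
  ultimately show ?case using APC by (auto intro!: wf_Conjs wf_Disjs)
qed auto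

lemma Ldm_imp_refl: "wf_fm m a \<Longrightarrow> Ldm m n (imp a a)"
proof -
  assume wa: "wf_fm m a"
  have 1: "Ldm m n (imp (imp a (imp (imp a a) a)) (imp (imp a (imp a a)) (imp a a)))" using wa by (intro Ldm.A3) auto
  have 2: "Ldm m n (imp a (imp (imp a a) a))" using wa by (intro Ldm.A1) auto
  have 3: "Ldm m n (imp a (imp a a))" using wa by (intro Ldm.A1) auto
  show ?thesis using Ldm.MP[OF Ldm.MP[OF 1 2] 3] .
qed

lemma Ldm_imp_weaken: "Ldm m n b \<Longrightarrow> wf_fm m a \<Longrightarrow> Ldm m n (imp a b)"
  using Ldm.MP[OF Ldm.A1[of m b a n]] Ldm_wf by blast

lemma Ldm_imp_trans: "Ldm m n (imp a b) \<Longrightarrow> Ldm m n (imp b c) \<Longrightarrow> Ldm m n (imp a c)"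
proof -
  assume ab: "Ldm m n (imp a b)" and bc: "Ldm m n (imp b c)"
  have w: "wf_fm m a" "wf_fm m b" "wf_fm m c" using Ldm_wf[OF ab] Ldm_wf[OF bc] by auto
  have 1: "Ldm m n (imp a (imp b c))" using Ldm_imp_weaken[OF bc w(1)] .
  have 2: "Ldm m n (imp (imp a (imp b c)) (imp (imp a b) (imp a c)))" using w by (intro Ldm.A3)
  show ?thesis using Ldm.MP[OF Ldm.MP[OF 2 1] ab] .
qed

lemma Ldm_imp_mono: "Ldm m n (imp p q) \<Longrightarrow> wf_fm m r \<Longrightarrow> Ldm m n (imp (imp r p) (imp r q))"
proof -
  assume pq: "Ldm m n (imp p q)" and wr: "wf_fm m r"
  have w: "wf_fm m p" "wf_fm m q" using Ldm_wf[OF pq] by auto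
  have 1: "Ldm m n (imp r (imp p q))" using Ldm_imp_weaken[OF pq wr] .
  have 2: "Ldm m n (imp (imp r (imp p q)) (imp (imp r p) (imp r q)))" using w wr by (intro Ldm.A3)
  show ?thesis using Ldm.MP[OF 2 1] .
qed

lemma Ldm_contrapos: "Ldm m n (imp p q) \<Longrightarrow> Ldm m n (imp (neg q) (neg p))"
proof -
  assume pq: "Ldm m n (imp p q)"
  have w: "wf_fm m p" "wf_fm m q" using Ldm_wf[OF pq] by auto
  have "Ldm m n (imp (imp (neg (neg p)) (neg (neg q))) (imp (neg q) (neg p)))" using w by (intro Ldm.A2) auto
  then show ?thesis using Ldm.MP pq by simp
qed

lemma Ldm_ex_falso: "wf_fm m a \<Longrightarrow> wf_fm m b \<Longrightarrow> Ldm m n (imp (neg a) (imp a b))"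
proof -
  assume w: "wf_fm m a" "wf_fm m b"
  have 1: "Ldm m n (imp (neg a) (imp (neg b) (neg a)))" using w by (intro Ldm.A1) auto
  have 2: "Ldm m n (imp (imp (neg b) (neg a)) (imp a b))" using w by (intro Ldm.A2)
  show ?thesis by (rule Ldm_imp_trans[OF 1 2])
qed

lemma Ldm_TT: "Ldm m n TT"
  by (rule Ldm_imp_refl) simp

lemma Ldm_drop_TT: "Ldm m n (imp p (imp TT x)) \<Longrightarrow> Ldm m n (imp p x)"
proof -
  assume h: "Ldm m n (imp p (imp TT x))"
  have w: "wf_fm m p" "wf_fm m x" using Ldm_wf[OF h] by auto
  have 1: "Ldm m n (imp (imp p (imp TT x)) (imp (imp p TT) (imp p x)))" using w by (intro Ldm.A3) auto
  have 2: "Ldm m n (imp p TT)" by (rule Ldm_imp_weaken[OF Ldm_TT w(1)])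
  show ?thesis using Ldm.MP[OF Ldm.MP[OF 1 h] 2] .
qed

lemma Ldm_by_contradiction: "wf_fm m a \<Longrightarrow> Ldm m n (imp (imp (neg a) FF) a)"
proof -
  assume w: "wf_fm m a"
  have "Ldm m n (imp (imp (neg a) (neg TT)) (imp TT a))" using w by (intro Ldm.A2) auto
  then show ?thesis by (rule Ldm_drop_TT)
qed

lemma Ldm_negI: "wf_fm m a \<Longrightarrow> Ldm m n (imp (imp a FF) (neg a))"
  using Ldm_by_contradiction[of m "neg a" n] by simp

fun imps :: "fm list \<Rightarrow> fm \<Rightarrow> fm" where
  "imps [] b = b"
| "imps (x # L) b = imp x (imps L b)"

lemma imps_append: "imps (L1 @ L2) b = imps L1 (imps L2 b)"
  by (induction L1) auto

lemma wf_imps[simp]: "wf_fm m (imps L b) \<longleftrightarrow> (\<forall>x\<in>set L. wf_fm m x) \<and> wf_fm m b"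
  by (induction L) auto

lemma imps_const: "Ldm m n b \<Longrightarrow> \<forall>x\<in>set L. wf_fm m x \<Longrightarrow> Ldm m n (imps L b)"
  by (induction L) (auto intro: Ldm_imp_weaken)

lemma imps_K: "\<forall>x\<in>set L. wf_fm m x \<Longrightarrow> wf_fm m b \<Longrightarrow> wf_fm m c \<Longrightarrow>
  Ldm m n (imp (imps L (imp b c)) (imp (imps L b) (imps L c)))"
proof (induction L)
  case Nil
  then show ?case using Ldm_imp_refl[of m "imp b c" n] by simp
next
  case (Cons x L)
  let ?X = "imps L (imp b c)" and ?Y = "imps L b" and ?Z = "imps L c"
  have IH: "Ldm m n (imp ?X (imp ?Y ?Z))" using Cons by simp
  have wx: "wf_fm m x" and wXYZ: "wf_fm m ?X" "wf_fm m ?Y" "wf_fm m ?Z" using Cons.prems by auto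
  have 1: "Ldm m n (imp x (imp ?X (imp ?Y ?Z)))" by (rule Ldm_imp_weaken[OF IH wx])
  have 2: "Ldm m n (imp (imp x (imp ?X (imp ?Y ?Z))) (imp (imp x ?X) (imp x (imp ?Y ?Z))))"
    using wx wXYZ by (intro Ldm.A3) auto
  have 3: "Ldm m n (imp (imp x ?X) (imp x (imp ?Y ?Z)))" by (rule Ldm.MP[OF 2 1])
  have 4: "Ldm m n (imp (imp x (imp ?Y ?Z)) (imp (imp x ?Y) (imp x ?Z)))" using wx wXYZ by (intro Ldm.A3)
  show ?case using Ldm_imp_trans[OF 3 4] by simp
qed

lemma imps_mp: "Ldm m n (imps L (imp b c)) \<Longrightarrow> Ldm m n (imps L b) \<Longrightarrow> Ldm m n (imps L c)"
proof -
  assume h1: "Ldm m n (imps L (imp b c))" and h2: "Ldm m n (imps L b)"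
  have w: "\<forall>x\<in>set L. wf_fm m x" "wf_fm m b" "wf_fm m c" using Ldm_wf[OF h1] by auto
  show ?thesis using Ldm.MP[OF Ldm.MP[OF imps_K[OF w] h1] h2] .
qed

lemma imps_self: "\<forall>y\<in>set L. wf_fm m y \<Longrightarrow> wf_fm m x \<Longrightarrow> Ldm m n (imp x (imps L x))"
proof (induction L)
  case Nil
  then show ?case using Ldm_imp_refl by simp
next
  case (Cons y L)
  have 1: "Ldm m n (imp x (imps L x))" using Cons by simp
  have 2: "Ldm m n (imp (imps L x) (imp y (imps L x)))" using Cons.prems by (intro Ldm.A1) auto
  show ?case using Ldm_imp_trans[OF 1 2] by simp
qed

lemma imps_assm: "\<forall>y\<in>set L. wf_fm m y \<Longrightarrow> a \<in> set L \<Longrightarrow> Ldm m n (imps L a)"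
proof (induction L)
  case Nil
  then show ?case by simp
next
  case (Cons x L)
  show ?case
  proof (cases "a = x")
    case True
    then show ?thesis using imps_self[of L m x n] Cons.prems by simp
  next
    case False
    then have "Ldm m n (imps L a)" using Cons by simp
    then show ?thesis using Ldm_imp_weaken Cons.prems by simp
  qed
qed

lemma imps_trans0: "Ldm m n (imps L' (imps L b)) \<Longrightarrow> \<forall>a\<in>set L. Ldm m n (imps L' a) \<Longrightarrow> Ldm m n (imps L' b)"
proof (induction L)
  case Nil
  then show ?case by simp
next
  case (Cons x L)
  have "Ldm m n (imps L' (imps L b))" using imps_mp[of m n L' x "imps L b"] Cons.prems by simp
  then show ?case using Cons by simp
qed

lemma imps_trans: "\<forall>y\<in>set L'. wf_fm m y \<Longrightarrow> Ldm m n (imps L b) \<Longrightarrow> \<forall>a\<in>set L. Ldm m n (imps L' a) \<Longrightarrow> Ldm m n (imps L' b)"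
  using imps_trans0 imps_const by blast

section \<open>Maximal consistent sets of Ldm\<close>

definition Ldm_derives :: "nat \<Rightarrow> nat \<Rightarrow> fm set \<Rightarrow> fm \<Rightarrow> bool" where
  "Ldm_derives m n \<Gamma> b \<longleftrightarrow> (\<exists>L. set L \<subseteq> \<Gamma> \<and> Ldm m n (imps L b))"

definition consistent :: "nat \<Rightarrow> nat \<Rightarrow> fm set \<Rightarrow> bool" where
  "consistent m n \<Gamma> \<longleftrightarrow> \<not> Ldm_derives m n \<Gamma> FF"

definition wf_set :: "nat \<Rightarrow> fm set \<Rightarrow> bool" where
  "wf_set m \<Gamma> \<longleftrightarrow> (\<forall>a\<in>\<Gamma>. wf_fm m a)"

definition mcs :: "nat \<Rightarrow> nat \<Rightarrow> fm set \<Rightarrow> bool" where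
  "mcs m n \<Gamma> \<longleftrightarrow> wf_set m \<Gamma> \<and> consistent m n \<Gamma> \<and> (\<forall>a. wf_fm m a \<longrightarrow> a \<notin> \<Gamma> \<longrightarrow> \<not> consistent m n (insert a \<Gamma>))"

lemma Ldm_derives_mp: "wf_set m \<Gamma> \<Longrightarrow> Ldm_derives m n \<Gamma> (imp a b) \<Longrightarrow> Ldm_derives m n \<Gamma> a \<Longrightarrow> Ldm_derives m n \<Gamma> b"
proof -
  assume w: "wf_set m \<Gamma>" and h1: "Ldm_derives m n \<Gamma> (imp a b)" and h2: "Ldm_derives m n \<Gamma> a"
  obtain L1 where L1: "set L1 \<subseteq> \<Gamma>" "Ldm m n (imps L1 (imp a b))" using h1 unfolding Ldm_derives_def by blast
  obtain L2 where L2: "set L2 \<subseteq> \<Gamma>" "Ldm m n (imps L2 a)" using h2 unfolding Ldm_derives_def by blast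
  have wL: "\<forall>y\<in>set (L1 @ L2). wf_fm m y" using L1 L2 w unfolding wf_set_def by auto
  have as: "\<forall>x\<in>set L1. Ldm m n (imps (L1 @ L2) x)" "\<forall>x\<in>set L2. Ldm m n (imps (L1 @ L2) x)"
    using imps_assm[OF wL] by auto
  have "Ldm m n (imps (L1 @ L2) (imp a b))" by (rule imps_trans[OF wL L1(2) as(1)])
  moreover have "Ldm m n (imps (L1 @ L2) a)" by (rule imps_trans[OF wL L2(2) as(2)])
  ultimately have "Ldm m n (imps (L1 @ L2) b)" by (rule imps_mp)
  then show ?thesis unfolding Ldm_derives_def using L1 L2 by (intro exI[of _ "L1 @ L2"]) auto
qed

lemma Ldm_derives_theorem: "Ldm m n b \<Longrightarrow> Ldm_derives m n \<Gamma> b"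
  unfolding Ldm_derives_def by (intro exI[of _ "[]"]) auto

lemma Ldm_derives_mem: "wf_set m \<Gamma> \<Longrightarrow> a \<in> \<Gamma> \<Longrightarrow> Ldm_derives m n \<Gamma> a"
  unfolding Ldm_derives_def wf_set_def by (intro exI[of _ "[a]"]) (auto intro: Ldm_imp_refl)

lemma Ldm_derives_deduction: "wf_set m \<Gamma> \<Longrightarrow> wf_fm m a \<Longrightarrow> Ldm_derives m n (insert a \<Gamma>) b \<Longrightarrow> Ldm_derives m n \<Gamma> (imp a b)"
proof -
  assume w: "wf_set m \<Gamma>" and wa: "wf_fm m a" and h: "Ldm_derives m n (insert a \<Gamma>) b"
  obtain L where L: "set L \<subseteq> insert a \<Gamma>" "Ldm m n (imps L b)" using h unfolding Ldm_derives_def by blast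
  define L0 where "L0 = filter (\<lambda>x. x \<noteq> a) L"
  have L0G: "set L0 \<subseteq> \<Gamma>" using L unfolding L0_def by auto
  have wL: "\<forall>y\<in>set (L0 @ [a]). wf_fm m y" using L0G w wa unfolding wf_set_def by auto
  have "\<forall>x\<in>set L. Ldm m n (imps (L0 @ [a]) x)"
  proof
    fix x assume "x \<in> set L"
    then have "x \<in> set (L0 @ [a])" unfolding L0_def by auto
    then show "Ldm m n (imps (L0 @ [a]) x)" by (rule imps_assm[OF wL])
  qed
  then have "Ldm m n (imps (L0 @ [a]) b)" by (rule imps_trans[OF wL L(2)])
  then have "Ldm m n (imps L0 (imp a b))" by (simp add: imps_append)
  then show ?thesis unfolding Ldm_derives_def using L0G by blast
qed

lemma mcs_closed: "mcs m n \<Gamma> \<Longrightarrow> Ldm_derives m n \<Gamma> a \<Longrightarrow> wf_fm m a \<Longrightarrow> a \<in> \<Gamma>"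
proof (rule ccontr)
  assume M: "mcs m n \<Gamma>" and d: "Ldm_derives m n \<Gamma> a" and wa: "wf_fm m a" and na: "a \<notin> \<Gamma>"
  have w: "wf_set m \<Gamma>" and c: "consistent m n \<Gamma>" using M unfolding mcs_def by auto
  have "\<not> consistent m n (insert a \<Gamma>)" using M wa na unfolding mcs_def by blast
  then have "Ldm_derives m n \<Gamma> (imp a FF)" using Ldm_derives_deduction[OF w wa] unfolding consistent_def by blast
  then have "Ldm_derives m n \<Gamma> FF" using Ldm_derives_mp[OF w _ d] by blast
  then show False using c unfolding consistent_def by blast
qed

lemma mcs_theorem: "mcs m n \<Gamma> \<Longrightarrow> Ldm m n a \<Longrightarrow> a \<in> \<Gamma>"
  using mcs_closed Ldm_derives_theorem Ldm_wf by blast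

lemma mcs_mp: "mcs m n \<Gamma> \<Longrightarrow> imp a b \<in> \<Gamma> \<Longrightarrow> a \<in> \<Gamma> \<Longrightarrow> b \<in> \<Gamma>"
proof -
  assume M: "mcs m n \<Gamma>" and h1: "imp a b \<in> \<Gamma>" and h2: "a \<in> \<Gamma>"
  have w: "wf_set m \<Gamma>" using M unfolding mcs_def by auto
  have "wf_fm m b" using w h1 unfolding wf_set_def by auto
  then show ?thesis using mcs_closed[OF M Ldm_derives_mp[OF w Ldm_derives_mem[OF w h1] Ldm_derives_mem[OF w h2]]] by blast
qed

lemma mcs_theorem_mp: "mcs m n \<Gamma> \<Longrightarrow> Ldm m n (imp a b) \<Longrightarrow> a \<in> \<Gamma> \<Longrightarrow> b \<in> \<Gamma>"
  using mcs_mp mcs_theorem by blast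

lemma mcs_not_both: "mcs m n \<Gamma> \<Longrightarrow> a \<in> \<Gamma> \<Longrightarrow> neg a \<in> \<Gamma> \<Longrightarrow> False"
proof -
  assume M: "mcs m n \<Gamma>" and h1: "a \<in> \<Gamma>" and h2: "neg a \<in> \<Gamma>"
  have w: "wf_set m \<Gamma>" and c: "consistent m n \<Gamma>" using M unfolding mcs_def by auto
  have wa: "wf_fm m a" using w h1 unfolding wf_set_def by auto
  have "Ldm_derives m n \<Gamma> (imp (neg a) (imp a FF))" using Ldm_ex_falso[OF wa, of FF] Ldm_derives_theorem by simp
  then have "Ldm_derives m n \<Gamma> FF" using Ldm_derives_mp[OF w] Ldm_derives_mem[OF w h1] Ldm_derives_mem[OF w h2] by blast
  then show False using c unfolding consistent_def by blast
qed

lemma mcs_either: "mcs m n \<Gamma> \<Longrightarrow> wf_fm m a \<Longrightarrow> a \<in> \<Gamma> \<or> neg a \<in> \<Gamma>"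
proof (rule ccontr)
  assume M: "mcs m n \<Gamma>" and wa: "wf_fm m a" and nn: "\<not> (a \<in> \<Gamma> \<or> neg a \<in> \<Gamma>)"
  have w: "wf_set m \<Gamma>" and c: "consistent m n \<Gamma>" using M unfolding mcs_def by auto
  have "\<not> consistent m n (insert a \<Gamma>)" "\<not> consistent m n (insert (neg a) \<Gamma>)" using M wa nn unfolding mcs_def by auto
  then have d1: "Ldm_derives m n \<Gamma> (imp a FF)" and d2: "Ldm_derives m n \<Gamma> (imp (neg a) FF)"
    using Ldm_derives_deduction[OF w] wa unfolding consistent_def by auto
  have "Ldm_derives m n \<Gamma> a" using Ldm_derives_mp[OF w Ldm_derives_theorem[OF Ldm_by_contradiction[OF wa]] d2] .
  then have "Ldm_derives m n \<Gamma> FF" using Ldm_derives_mp[OF w d1] by blast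
  then show False using c unfolding consistent_def by blast
qed

lemma mcs_neg: "mcs m n \<Gamma> \<Longrightarrow> wf_fm m a \<Longrightarrow> neg a \<in> \<Gamma> \<longleftrightarrow> a \<notin> \<Gamma>"
  using mcs_either mcs_not_both by blast

lemma mcs_Disj: "mcs m n \<Gamma> \<Longrightarrow> wf_fm m a \<Longrightarrow> wf_fm m b \<Longrightarrow> Disj a b \<in> \<Gamma> \<longleftrightarrow> a \<in> \<Gamma> \<or> b \<in> \<Gamma>"
proof -
  assume M: "mcs m n \<Gamma>" and wa: "wf_fm m a" and wb: "wf_fm m b"
  have eq: "Disj a b = imp (neg a) b" by (simp add: imp_def)
  show ?thesis
  proof
    assume h: "Disj a b \<in> \<Gamma>"
    show "a \<in> \<Gamma> \<or> b \<in> \<Gamma>"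
    proof (cases "a \<in> \<Gamma>")
      case False
      then have "neg a \<in> \<Gamma>" using mcs_neg[OF M wa] by blast
      then show ?thesis using mcs_mp[OF M h[unfolded eq]] by blast
    qed blast
  next
    assume "a \<in> \<Gamma> \<or> b \<in> \<Gamma>"
    then show "Disj a b \<in> \<Gamma>"
    proof
      assume "a \<in> \<Gamma>"
      moreover have "Ldm m n (imp a (imp (neg a) b))" using Ldm_ex_falso[of m "neg a" b n] wa wb by simp
      ultimately show ?thesis using mcs_theorem_mp[OF M] eq by metis
    next
      assume "b \<in> \<Gamma>"
      moreover have "Ldm m n (imp b (imp (neg a) b))" using wa wb by (intro Ldm.A1) auto
      ultimately show ?thesis using mcs_theorem_mp[OF M] eq by metis
    qed
  qed
qed

lemma mcs_Conj: "mcs m n \<Gamma> \<Longrightarrow> wf_fm m a \<Longrightarrow> wf_fm m b \<Longrightarrow> Conj a b \<in> \<Gamma> \<longleftrightarrow> a \<in> \<Gamma> \<and> b \<in> \<Gamma>"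
proof -
  assume M: "mcs m n \<Gamma>" and wa: "wf_fm m a" and wb: "wf_fm m b"
  have "Conj a b = neg (Disj (neg a) (neg b))" by simp
  then have "Conj a b \<in> \<Gamma> \<longleftrightarrow> Disj (neg a) (neg b) \<notin> \<Gamma>" using mcs_neg[OF M, of "Disj (neg a) (neg b)"] wa wb by simp
  also have "\<dots> \<longleftrightarrow> neg a \<notin> \<Gamma> \<and> neg b \<notin> \<Gamma>" using mcs_Disj[OF M, of "neg a" "neg b"] wa wb by simp
  also have "\<dots> \<longleftrightarrow> a \<in> \<Gamma> \<and> b \<in> \<Gamma>" using mcs_neg[OF M] wa wb by blast
  finally show ?thesis .
qed

lemma consistent_Union_chain:
  assumes ch: "subset.chain A C" and "C \<noteq> {}" and cons: "\<forall>X\<in>C. consistent m n X"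
  shows "consistent m n (\<Union>C)"
  unfolding consistent_def
proof
  assume "Ldm_derives m n (\<Union>C) FF"
  then obtain L where L: "set L \<subseteq> \<Union>C" "Ldm m n (imps L FF)" unfolding Ldm_derives_def by blast
  obtain B where "B \<in> C" "set L \<subseteq> B" using finite_subset_Union_chain[OF _ L(1) assms(2) ch] by blast
  then show False using L cons unfolding Ldm_derives_def consistent_def by blast
qed

lemma lindenbaum: "wf_set m \<Gamma> \<Longrightarrow> consistent m n \<Gamma> \<Longrightarrow> \<exists>\<Delta>. mcs m n \<Delta> \<and> \<Gamma> \<subseteq> \<Delta>"
proof -
  assume w: "wf_set m \<Gamma>" and c: "consistent m n \<Gamma>"
  define A where "A = {\<Delta>. \<Gamma> \<subseteq> \<Delta> \<and> wf_set m \<Delta> \<and> consistent m n \<Delta>}"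
  have "\<forall>C\<in>chains A. \<exists>U\<in>A. \<forall>X\<in>C. X \<subseteq> U"
  proof
    fix C assume C: "C \<in> chains A"
    show "\<exists>U\<in>A. \<forall>X\<in>C. X \<subseteq> U"
    proof (cases "C = {}")
      case True
      then show ?thesis using w c unfolding A_def by blast
    next
      case False
      have CA: "C \<subseteq> A" using C unfolding chains_def by auto
      have ch: "subset.chain A C" using C unfolding chains_alt_def by auto
      have "consistent m n (\<Union>C)" using consistent_Union_chain[OF ch False] CA unfolding A_def by blast
      then have "\<Union>C \<in> A" using False CA unfolding A_def wf_set_def by blast
      then show ?thesis by blast
    qed
  qed
  then obtain M where M: "M \<in> A" and mx: "\<forall>X\<in>A. M \<subseteq> X \<longrightarrow> X = M" using Zorn_Lemma2[of A] by blast
  have "mcs m n M"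
    unfolding mcs_def
  proof (intro conjI allI impI)
    show "wf_set m M" "consistent m n M" using M unfolding A_def by auto
  next
    fix a assume wa: "wf_fm m a" and na: "a \<notin> M"
    show "\<not> consistent m n (insert a M)"
    proof
      assume "consistent m n (insert a M)"
      then have "insert a M \<in> A" using M wa unfolding A_def wf_set_def by auto
      then show False using mx na by blast
    qed
  qed
  then show ?thesis using M unfolding A_def by blast
qed

lemma Ldm_Stit_nec: "i \<in> {1..m} \<Longrightarrow> Ldm m n a \<Longrightarrow> Ldm m n (Stit i a)"
  using Ldm.MP[OF Ldm.Bridge Ldm.Nec] Ldm_wf by blast

lemma Ldm_Box_imps: "\<forall>x\<in>set L. wf_fm m x \<Longrightarrow> wf_fm m b \<Longrightarrow> Ldm m n (imp (Box (imps L b)) (imps (map Box L) (Box b)))"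
proof (induction L)
  case Nil
  then show ?case using Ldm_imp_refl[of m "Box b" n] by simp
next
  case (Cons x L)
  have IH: "Ldm m n (imp (Box (imps L b)) (imps (map Box L) (Box b)))" using Cons by simp
  have w: "wf_fm m x" "wf_fm m (imps L b)" using Cons.prems by auto
  have 1: "Ldm m n (imp (Box (imp x (imps L b))) (imp (Box x) (Box (imps L b))))" using w by (intro Ldm.BoxK)
  have 2: "Ldm m n (imp (imp (Box x) (Box (imps L b))) (imp (Box x) (imps (map Box L) (Box b))))"
    using Ldm_imp_mono[OF IH, of "Box x"] w by simp
  show ?case using Ldm_imp_trans[OF 1 2] by simp
qed

lemma Ldm_Stit_imps: "i \<in> {1..m} \<Longrightarrow> \<forall>x\<in>set L. wf_fm m x \<Longrightarrow> wf_fm m b \<Longrightarrow>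
  Ldm m n (imp (Stit i (imps L b)) (imps (map (Stit i) L) (Stit i b)))"
proof (induction L)
  case Nil
  then show ?case using Ldm_imp_refl[of m "Stit i b" n] by simp
next
  case (Cons x L)
  have IH: "Ldm m n (imp (Stit i (imps L b)) (imps (map (Stit i) L) (Stit i b)))" using Cons by simp
  have w: "wf_fm m x" "wf_fm m (imps L b)" using Cons.prems by auto
  have 1: "Ldm m n (imp (Stit i (imp x (imps L b))) (imp (Stit i x) (Stit i (imps L b))))" using w Cons.prems by (intro Ldm.StitK)
  have 2: "Ldm m n (imp (imp (Stit i x) (Stit i (imps L b))) (imp (Stit i x) (imps (map (Stit i) L) (Stit i b))))"
    using Ldm_imp_mono[OF IH, of "Stit i x"] w Cons.prems by simp
  show ?case using Ldm_imp_trans[OF 1 2] by simp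
qed

lemma Ldm_Box_lift: "Ldm m n (imps L b) \<Longrightarrow> Ldm m n (imps (map Box L) (Box b))"
  using Ldm.MP[OF Ldm_Box_imps Ldm.Nec] Ldm_wf by fastforce

lemma Ldm_Stit_lift: "i \<in> {1..m} \<Longrightarrow> Ldm m n (imps L b) \<Longrightarrow> Ldm m n (imps (map (Stit i) L) (Stit i b))"
  using Ldm.MP[OF Ldm_Stit_imps Ldm_Stit_nec] Ldm_wf by fastforce

lemma Ldm_Box_4: "wf_fm m b \<Longrightarrow> Ldm m n (imp (Box b) (Box (Box b)))"
proof -
  assume w: "wf_fm m b"
  have s1: "Ldm m n (imp (Box b) (Dia (Box b)))"
    using Ldm_contrapos[OF Ldm.BoxT[of m "Dia (neg b)" n]] w by simp
  have s2: "Ldm m n (imp (Dia (Box b)) (Box (Dia (Box b))))" using w by (intro Ldm.Box5) simp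
  have s3: "Ldm m n (imp (Dia (Box b)) (Box b))"
    using Ldm_contrapos[OF Ldm.Box5[of m "neg b" n]] w by simp
  have s4: "Ldm m n (imp (Box (Dia (Box b))) (Box (Box b)))"
    using Ldm.MP[OF Ldm.BoxK Ldm.Nec[OF s3]] w by simp
  show ?thesis using Ldm_imp_trans[OF Ldm_imp_trans[OF s1 s2] s4] .
qed

lemma mcs_wf: "mcs m n \<Gamma> \<Longrightarrow> a \<in> \<Gamma> \<Longrightarrow> wf_fm m a"
  unfolding mcs_def wf_set_def by blast

lemma mcs_Dia_witness: "mcs m n \<Delta> \<Longrightarrow> Dia a \<in> \<Delta> \<Longrightarrow> \<exists>\<Delta>'. mcs m n \<Delta>' \<and> {b. Box b \<in> \<Delta>} \<subseteq> \<Delta>' \<and> a \<in> \<Delta>'"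
proof -
  assume M: "mcs m n \<Delta>" and h: "Dia a \<in> \<Delta>"
  have wa: "wf_fm m a" using mcs_wf[OF M h] by simp
  have wB: "wf_set m {b. Box b \<in> \<Delta>}" using mcs_wf[OF M] unfolding wf_set_def by fastforce
  have wI: "wf_set m (insert a {b. Box b \<in> \<Delta>})" using wB wa unfolding wf_set_def by auto
  have "consistent m n (insert a {b. Box b \<in> \<Delta>})"
  proof (unfold consistent_def, rule notI)
    assume "Ldm_derives m n (insert a {b. Box b \<in> \<Delta>}) FF"
    then have "Ldm_derives m n {b. Box b \<in> \<Delta>} (imp a FF)" using Ldm_derives_deduction[OF wB wa] by blast
    then obtain L where L: "set L \<subseteq> {b. Box b \<in> \<Delta>}" "Ldm m n (imps L (imp a FF))" unfolding Ldm_derives_def by blast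
    have "Ldm m n (imps (map Box L) (Box (imp a FF)))" by (rule Ldm_Box_lift[OF L(2)])
    moreover have "set (map Box L) \<subseteq> \<Delta>" using L by auto
    ultimately have "Ldm_derives m n \<Delta> (Box (imp a FF))" unfolding Ldm_derives_def by blast
    then have b1: "Box (imp a FF) \<in> \<Delta>" using mcs_closed[OF M] wa by simp
    have "Ldm m n (imp (Box (imp a FF)) (Box (neg a)))"
      using Ldm.MP[OF Ldm.BoxK Ldm.Nec[OF Ldm_negI[OF wa]]] wa by simp
    then have "Box (neg a) \<in> \<Delta>" using mcs_theorem_mp[OF M _ b1] by blast
    then show False using mcs_not_both[OF M h] by simp
  qed
  then obtain \<Delta>' where "mcs m n \<Delta>'" "insert a {b. Box b \<in> \<Delta>} \<subseteq> \<Delta>'" using lindenbaum[OF wI] by blast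
  then show ?thesis by blast
qed

lemma mcs_Cstit_witness: "mcs m n \<Delta> \<Longrightarrow> Cstit i a \<in> \<Delta> \<Longrightarrow> \<exists>\<Delta>'. mcs m n \<Delta>' \<and> {b. Stit i b \<in> \<Delta>} \<subseteq> \<Delta>' \<and> a \<in> \<Delta>'"
proof -
  assume M: "mcs m n \<Delta>" and h: "Cstit i a \<in> \<Delta>"
  have wa: "wf_fm m a" and i: "i \<in> {1..m}" using mcs_wf[OF M h] by auto
  have wB: "wf_set m {b. Stit i b \<in> \<Delta>}" using mcs_wf[OF M] unfolding wf_set_def by fastforce
  have wI: "wf_set m (insert a {b. Stit i b \<in> \<Delta>})" using wB wa unfolding wf_set_def by auto
  have "consistent m n (insert a {b. Stit i b \<in> \<Delta>})"
  proof (unfold consistent_def, rule notI)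
    assume "Ldm_derives m n (insert a {b. Stit i b \<in> \<Delta>}) FF"
    then have "Ldm_derives m n {b. Stit i b \<in> \<Delta>} (imp a FF)" using Ldm_derives_deduction[OF wB wa] by blast
    then obtain L where L: "set L \<subseteq> {b. Stit i b \<in> \<Delta>}" "Ldm m n (imps L (imp a FF))" unfolding Ldm_derives_def by blast
    have "Ldm m n (imps (map (Stit i) L) (Stit i (imp a FF)))" by (rule Ldm_Stit_lift[OF i L(2)])
    moreover have "set (map (Stit i) L) \<subseteq> \<Delta>" using L by auto
    ultimately have "Ldm_derives m n \<Delta> (Stit i (imp a FF))" unfolding Ldm_derives_def by blast
    then have b1: "Stit i (imp a FF) \<in> \<Delta>" using mcs_closed[OF M] wa i by simp
    have "Ldm m n (imp (Stit i (imp a FF)) (Stit i (neg a)))"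
      using Ldm.MP[OF Ldm.StitK Ldm_Stit_nec[OF i Ldm_negI[OF wa]]] wa i by simp
    then have "Stit i (neg a) \<in> \<Delta>" using mcs_theorem_mp[OF M _ b1] by blast
    then show False using mcs_not_both[OF M h] by simp
  qed
  then obtain \<Delta>' where "mcs m n \<Delta>'" "insert a {b. Stit i b \<in> \<Delta>} \<subseteq> \<Delta>'" using lindenbaum[OF wI] by blast
  then show ?thesis by blast
qed

section \<open>The canonical model\<close>

definition canon_worlds :: "nat \<Rightarrow> nat \<Rightarrow> fm set \<Rightarrow> fm set set" where
  "canon_worlds m n G0 = {\<Delta>. mcs m n \<Delta> \<and> {b. Box b \<in> G0} \<subseteq> \<Delta>}"

definition canon_rel :: "nat \<Rightarrow> fm set \<Rightarrow> fm set \<Rightarrow> bool" where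
  "canon_rel i \<Delta> \<Delta>' \<longleftrightarrow> {b. Stit i b \<in> \<Delta>} \<subseteq> \<Delta>'"

definition canon_val :: "nat \<Rightarrow> fm set \<Rightarrow> bool" where
  "canon_val p \<Delta> \<longleftrightarrow> At p \<in> \<Delta>"

lemma canon_Box_down: "mcs m n G0 \<Longrightarrow> \<Delta> \<in> canon_worlds m n G0 \<Longrightarrow> Box b \<in> G0 \<Longrightarrow> Box b \<in> \<Delta>"
proof -
  assume M: "mcs m n G0" and D: "\<Delta> \<in> canon_worlds m n G0" and h: "Box b \<in> G0"
  have "wf_fm m b" using mcs_wf[OF M h] by simp
  then have "Box (Box b) \<in> G0" using mcs_theorem_mp[OF M Ldm_Box_4 h] by blast
  then show ?thesis using D unfolding canon_worlds_def by blast
qed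

lemma canon_Box_up: "mcs m n G0 \<Longrightarrow> \<Delta> \<in> canon_worlds m n G0 \<Longrightarrow> Box a \<in> \<Delta> \<Longrightarrow> Box a \<in> G0"
proof (rule ccontr)
  assume M: "mcs m n G0" and D: "\<Delta> \<in> canon_worlds m n G0" and h: "Box a \<in> \<Delta>" and n: "Box a \<notin> G0"
  have MD: "mcs m n \<Delta>" using D unfolding canon_worlds_def by blast
  have wa: "wf_fm m a" using mcs_wf[OF MD h] by simp
  have "Dia (neg a) \<in> G0" using mcs_neg[OF M, of "Box a"] n wa by simp
  then have "Box (Dia (neg a)) \<in> G0" using mcs_theorem_mp[OF M Ldm.Box5] wa by simp
  then have "Dia (neg a) \<in> \<Delta>" using D unfolding canon_worlds_def by blast
  then show False using mcs_not_both[OF MD h] by simp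
qed

lemma canon_root: "mcs m n G0 \<Longrightarrow> G0 \<in> canon_worlds m n G0"
proof -
  assume M: "mcs m n G0"
  have "{b. Box b \<in> G0} \<subseteq> G0"
  proof
    fix b assume "b \<in> {b. Box b \<in> G0}"
    then have h: "Box b \<in> G0" by simp
    then have "wf_fm m b" using mcs_wf[OF M h] by simp
    then show "b \<in> G0" using mcs_theorem_mp[OF M Ldm.BoxT h] by blast
  qed
  then show ?thesis using M unfolding canon_worlds_def by blast
qed

lemma canon_worlds_mcs: "\<Delta> \<in> canon_worlds m n G0 \<Longrightarrow> mcs m n \<Delta>"
  by (simp add: canon_worlds_def)

lemma canon_worlds_Box_successor:
  assumes "mcs m n G0" "\<Delta> \<in> canon_worlds m n G0" "mcs m n \<Delta>'" "{b. Box b \<in> \<Delta>} \<subseteq> \<Delta>'"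
  shows "\<Delta>' \<in> canon_worlds m n G0"
  using assms canon_Box_down unfolding canon_worlds_def by blast

lemma canon_worlds_Stit_successor:
  assumes M: "mcs m n G0" and D: "\<Delta> \<in> canon_worlds m n G0" and i: "i \<in> {1..m}"
    and "mcs m n \<Delta>'" and succ: "{b. Stit i b \<in> \<Delta>} \<subseteq> \<Delta>'"
  shows "\<Delta>' \<in> canon_worlds m n G0"
proof -
  have "b \<in> \<Delta>'" if "Box b \<in> G0" for b
  proof -
    have "Box b \<in> \<Delta>" using canon_Box_down[OF M D that] .
    moreover have "wf_fm m b" using mcs_wf[OF M that] by simp
    ultimately have "Stit i b \<in> \<Delta>" using mcs_theorem_mp[OF canon_worlds_mcs[OF D] Ldm.Bridge[OF i]] by blast
    then show ?thesis using succ by blast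
  qed
  then show ?thesis using assms(4) unfolding canon_worlds_def by blast
qed

lemma canon_Box_iff:
  assumes M: "mcs m n G0" and D: "\<Delta> \<in> canon_worlds m n G0" and wa: "wf_fm m a"
  shows "Box a \<in> \<Delta> \<longleftrightarrow> (\<forall>\<Delta>'\<in>canon_worlds m n G0. a \<in> \<Delta>')"
proof
  assume "Box a \<in> \<Delta>"
  then show "\<forall>\<Delta>'\<in>canon_worlds m n G0. a \<in> \<Delta>'" using canon_Box_up[OF M D] unfolding canon_worlds_def by blast
next
  assume all: "\<forall>\<Delta>'\<in>canon_worlds m n G0. a \<in> \<Delta>'"
  show "Box a \<in> \<Delta>"
  proof (rule ccontr)
    assume "Box a \<notin> \<Delta>"
    then have "Dia (neg a) \<in> \<Delta>" using mcs_neg[OF canon_worlds_mcs[OF D], of "Box a"] wa by simp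
    then obtain \<Delta>' where \<Delta>': "mcs m n \<Delta>'" "{b. Box b \<in> \<Delta>} \<subseteq> \<Delta>'" "neg a \<in> \<Delta>'"
      using mcs_Dia_witness[OF canon_worlds_mcs[OF D]] by blast
    then have "a \<in> \<Delta>'" using all canon_worlds_Box_successor[OF M D] by blast
    then show False using mcs_not_both[OF \<Delta>'(1) _ \<Delta>'(3)] by blast
  qed
qed

lemma canon_Stit_iff:
  assumes M: "mcs m n G0" and D: "\<Delta> \<in> canon_worlds m n G0" and wa: "wf_fm m a" and i: "i \<in> {1..m}"
  shows "Stit i a \<in> \<Delta> \<longleftrightarrow> (\<forall>\<Delta>'\<in>canon_worlds m n G0. canon_rel i \<Delta> \<Delta>' \<longrightarrow> a \<in> \<Delta>')"
proof
  assume "Stit i a \<in> \<Delta>"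
  then show "\<forall>\<Delta>'\<in>canon_worlds m n G0. canon_rel i \<Delta> \<Delta>' \<longrightarrow> a \<in> \<Delta>'" unfolding canon_rel_def by blast
next
  assume all: "\<forall>\<Delta>'\<in>canon_worlds m n G0. canon_rel i \<Delta> \<Delta>' \<longrightarrow> a \<in> \<Delta>'"
  show "Stit i a \<in> \<Delta>"
  proof (rule ccontr)
    assume "Stit i a \<notin> \<Delta>"
    then have "Cstit i (neg a) \<in> \<Delta>" using mcs_neg[OF canon_worlds_mcs[OF D], of "Stit i a"] wa i by simp
    then obtain \<Delta>' where \<Delta>': "mcs m n \<Delta>'" "{b. Stit i b \<in> \<Delta>} \<subseteq> \<Delta>'" "neg a \<in> \<Delta>'"
      using mcs_Cstit_witness[OF canon_worlds_mcs[OF D]] by blast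
    then have "a \<in> \<Delta>'" using all canon_worlds_Stit_successor[OF M D i] unfolding canon_rel_def by blast
    then show False using mcs_not_both[OF \<Delta>'(1) _ \<Delta>'(3)] by blast
  qed
qed

theorem canon_truth:
  "mcs m n G0 \<Longrightarrow> \<Delta> \<in> canon_worlds m n G0 \<Longrightarrow> wf_fm m a \<Longrightarrow>
    sat (canon_worlds m n G0) canon_rel canon_val \<Delta> a \<longleftrightarrow> a \<in> \<Delta>"
proof (induction a arbitrary: \<Delta>)
  case (NAt p)
  then show ?case using mcs_neg[OF canon_worlds_mcs[OF NAt(2)], of "At p"] by (simp add: canon_val_def)
next
  case (Conj a b)
  then show ?case using mcs_Conj[OF canon_worlds_mcs[OF Conj(4)], of a b] by simp
next
  case (Disj a b)
  then show ?case using mcs_Disj[OF canon_worlds_mcs[OF Disj(4)], of a b] by simp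
next
  case (Box a)
  then show ?case using canon_Box_iff[OF Box(2,3)] by simp
next
  case (Dia a)
  have "Dia a \<in> \<Delta> \<longleftrightarrow> Box (neg a) \<notin> \<Delta>"
    using Dia mcs_neg[OF canon_worlds_mcs[OF Dia(3)], of "Box (neg a)"] by simp
  also have "\<dots> \<longleftrightarrow> (\<exists>\<Delta>'\<in>canon_worlds m n G0. neg a \<notin> \<Delta>')"
    using canon_Box_iff[OF Dia(2,3), of "neg a"] Dia(4) by auto
  also have "\<dots> \<longleftrightarrow> (\<exists>\<Delta>'\<in>canon_worlds m n G0. a \<in> \<Delta>')"
    using mcs_neg[OF canon_worlds_mcs] Dia(4) by auto
  finally show ?case using Dia by simp
next
  case (Stit i a)
  then show ?case using canon_Stit_iff[OF Stit(2,3)] by simp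
next
  case (Cstit i a)
  have "Cstit i a \<in> \<Delta> \<longleftrightarrow> Stit i (neg a) \<notin> \<Delta>"
    using Cstit mcs_neg[OF canon_worlds_mcs[OF Cstit(3)], of "Stit i (neg a)"] by simp
  also have "\<dots> \<longleftrightarrow> (\<exists>\<Delta>'\<in>canon_worlds m n G0. canon_rel i \<Delta> \<Delta>' \<and> neg a \<notin> \<Delta>')"
    using canon_Stit_iff[OF Cstit(2,3), of "neg a" i] Cstit(4) by auto
  also have "\<dots> \<longleftrightarrow> (\<exists>\<Delta>'\<in>canon_worlds m n G0. canon_rel i \<Delta> \<Delta>' \<and> a \<in> \<Delta>')"
    using mcs_neg[OF canon_worlds_mcs] Cstit(4) by auto
  finally show ?case using Cstit by simp
qed (simp add: canon_val_def)

lemma canon_sat_theorem: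
  "mcs m n G0 \<Longrightarrow> \<Delta> \<in> canon_worlds m n G0 \<Longrightarrow> Ldm m n a \<Longrightarrow> sat (canon_worlds m n G0) canon_rel canon_val \<Delta> a"
  using canon_truth mcs_theorem canon_worlds_mcs Ldm_wf by blast

lemma canon_rel_refl: "mcs m n G0 \<Longrightarrow> i \<in> {1..m} \<Longrightarrow> \<Delta> \<in> canon_worlds m n G0 \<Longrightarrow> canon_rel i \<Delta> \<Delta>"
proof -
  assume M: "mcs m n G0" and i: "i \<in> {1..m}" and D: "\<Delta> \<in> canon_worlds m n G0"
  have MD: "mcs m n \<Delta>" using D unfolding canon_worlds_def by blast
  show ?thesis unfolding canon_rel_def
  proof
    fix b assume "b \<in> {b. Stit i b \<in> \<Delta>}"
    then have h: "Stit i b \<in> \<Delta>" by simp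
    then have "wf_fm m b" using mcs_wf[OF MD h] by simp
    then show "b \<in> \<Delta>" using mcs_theorem_mp[OF MD Ldm.StitT[OF i] h] by blast
  qed
qed

lemma canon_rel_eucl: "mcs m n G0 \<Longrightarrow> i \<in> {1..m} \<Longrightarrow> \<Delta> \<in> canon_worlds m n G0 \<Longrightarrow> D1 \<in> canon_worlds m n G0 \<Longrightarrow> D2 \<in> canon_worlds m n G0 \<Longrightarrow>
  canon_rel i \<Delta> D1 \<Longrightarrow> canon_rel i \<Delta> D2 \<Longrightarrow> canon_rel i D1 D2"
proof -
  assume M: "mcs m n G0" and i: "i \<in> {1..m}" and D: "\<Delta> \<in> canon_worlds m n G0" "D1 \<in> canon_worlds m n G0" "D2 \<in> canon_worlds m n G0"
    and r1: "canon_rel i \<Delta> D1" and r2: "canon_rel i \<Delta> D2"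
  have MD: "mcs m n \<Delta>" "mcs m n D1" using D unfolding canon_worlds_def by blast+
  show ?thesis unfolding canon_rel_def
  proof
    fix b assume "b \<in> {b. Stit i b \<in> D1}"
    then have h: "Stit i b \<in> D1" by simp
    have wb: "wf_fm m b" using mcs_wf[OF MD(2) h] by simp
    have "Stit i b \<in> \<Delta>"
    proof (rule ccontr)
      assume "Stit i b \<notin> \<Delta>"
      then have c: "Cstit i (neg b) \<in> \<Delta>" using mcs_neg[OF MD(1), of "Stit i b"] wb i by simp
      have "Stit i (Cstit i (neg b)) \<in> \<Delta>" using mcs_theorem_mp[OF MD(1) Ldm.Stit5[OF i] c] wb by simp
      then have "Cstit i (neg b) \<in> D1" using r1 unfolding canon_rel_def by blast
      then show False using mcs_not_both[OF MD(2) h] by simp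
    qed
    then show "b \<in> D2" using r2 unfolding canon_rel_def by blast
  qed
qed

lemma canon_rel_sym: "mcs m n G0 \<Longrightarrow> i \<in> {1..m} \<Longrightarrow> x \<in> canon_worlds m n G0 \<Longrightarrow> y \<in> canon_worlds m n G0 \<Longrightarrow> canon_rel i x y \<Longrightarrow> canon_rel i y x"
  using canon_rel_eucl canon_rel_refl by blast

lemma canon_sat_Stit_Conjs:
  assumes M: "mcs m n G0" and D: "\<Delta> \<in> canon_worlds m n G0" and xs: "\<forall>x\<in>set xs. Stit i x \<in> \<Delta>"
  shows "sat (canon_worlds m n G0) canon_rel canon_val \<Delta> (Stit i (Conjs (xs @ [TT])))"
proof -
  have "sat (canon_worlds m n G0) canon_rel canon_val \<Delta>' x"
    if "\<Delta>' \<in> canon_worlds m n G0" "canon_rel i \<Delta> \<Delta>'" "x \<in> set xs" for \<Delta>' x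
  proof -
    have "x \<in> \<Delta>'" using that xs unfolding canon_rel_def by blast
    moreover have "wf_fm m x" using mcs_wf[OF canon_worlds_mcs[OF D]] xs that(3) by fastforce
    ultimately show ?thesis using canon_truth[OF M that(1)] by blast
  qed
  then show ?thesis by (auto simp: sat_Conjs imp_def)
qed

text \<open>The axiom (IOA), valid at the root, joins choices of all agents at some world.\<close>

lemma canon_joint_choice:
  assumes m1: "1 \<le> m" and M: "mcs m n G0" and wf: "\<forall>i\<in>{1..m}. wf_fm m (C i)"
    and f: "\<forall>i\<in>{1..m}. f i \<in> canon_worlds m n G0 \<and> sat (canon_worlds m n G0) canon_rel canon_val (f i) (Stit i (C i))"
  shows "\<exists>D\<in>canon_worlds m n G0. \<forall>i\<in>{1..m}. sat (canon_worlds m n G0) canon_rel canon_val D (Stit i (C i))"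
proof -
  let ?sat = "sat (canon_worlds m n G0) canon_rel canon_val"
  let ?A = "[1..<Suc m]"
  have "Ldm m n (imp (Conjs (map (\<lambda>i. Dia (Stit i (C i))) ?A)) (Dia (Conjs (map (\<lambda>i. Stit i (C i)) ?A))))"
    by (rule Ldm.IOA) (use wf in auto)
  then have "?sat G0 (imp (Conjs (map (\<lambda>i. Dia (Stit i (C i))) ?A)) (Dia (Conjs (map (\<lambda>i. Stit i (C i)) ?A))))"
    by (rule canon_sat_theorem[OF M canon_root[OF M]])
  moreover have "?sat G0 (Dia (Stit i (C i)))" if "i \<in> {1..m}" for i
    using f that unfolding sat.simps(6) by blast
  then have "?sat G0 (Conjs (map (\<lambda>i. Dia (Stit i (C i))) ?A))" using m1 by (auto simp: sat_Conjs)
  ultimately have "?sat G0 (Dia (Conjs (map (\<lambda>i. Stit i (C i)) ?A)))" by (simp only: sat_imp)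
  then show ?thesis using m1 by (auto simp: sat_Conjs atLeastLessThanSuc_atLeastAtMost simp del: upt_Suc)
qed

lemma canon_choices_consistent:
  assumes m1: "1 \<le> m" and M: "mcs m n G0" and f: "\<forall>i\<in>{1..m}. f i \<in> canon_worlds m n G0"
  shows "consistent m n (\<Union>i\<in>{1..m}. {b. Stit i b \<in> f i})"
  unfolding consistent_def
proof
  let ?sat = "sat (canon_worlds m n G0) canon_rel canon_val"
  assume "Ldm_derives m n (\<Union>i\<in>{1..m}. {b. Stit i b \<in> f i}) FF"
  then obtain L where L: "set L \<subseteq> (\<Union>i\<in>{1..m}. {b. Stit i b \<in> f i})" "Ldm m n (imps L FF)"
    unfolding Ldm_derives_def by blast
  define ag where "ag = (\<lambda>x. SOME i. i \<in> {1..m} \<and> Stit i x \<in> f i)"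
  have ag: "ag x \<in> {1..m} \<and> Stit (ag x) x \<in> f (ag x)" if "x \<in> set L" for x
    unfolding ag_def by (rule someI_ex) (use that L(1) in blast)
  have wf_L: "wf_fm m x" if "x \<in> set L" for x
    using ag[OF that] mcs_wf[OF canon_worlds_mcs] f by fastforce
  define C where "C = (\<lambda>i. Conjs (filter (\<lambda>x. ag x = i) L @ [TT]))"
  have "?sat (f i) (Stit i (C i))" if "i \<in> {1..m}" for i
    unfolding C_def by (rule canon_sat_Stit_Conjs[OF M]) (use f that ag in auto)
  then have "\<forall>i\<in>{1..m}. f i \<in> canon_worlds m n G0 \<and> ?sat (f i) (Stit i (C i))" using f by blast
  moreover have "\<forall>i\<in>{1..m}. wf_fm m (C i)" using wf_L by (auto simp: C_def intro!: wf_Conjs)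
  ultimately obtain D where D: "D \<in> canon_worlds m n G0" "\<forall>i\<in>{1..m}. ?sat D (Stit i (C i))"
    using canon_joint_choice[OF m1 M] by blast
  have "x \<in> D" if x: "x \<in> set L" for x
  proof -
    have "?sat D (C (ag x))" using D ag[OF x] canon_rel_refl[OF M _ D(1)] by auto
    then have "?sat D x" using x by (auto simp: C_def sat_Conjs)
    then show ?thesis using canon_truth[OF M D(1) wf_L[OF x]] by blast
  qed
  then have "Ldm_derives m n D FF" using L(2) unfolding Ldm_derives_def by blast
  then show False using canon_worlds_mcs[OF D(1)] unfolding mcs_def consistent_def by blast
qed

lemma canon_ioa:
  assumes m1: "1 \<le> m" and M: "mcs m n G0" and f: "\<forall>i\<in>{1..m}. f i \<in> canon_worlds m n G0"
  shows "\<exists>v\<in>canon_worlds m n G0. \<forall>i\<in>{1..m}. canon_rel i (f i) v"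
proof -
  define U where "U = (\<Union>i\<in>{1..m}. {b. Stit i b \<in> f i})"
  have "wf_set m U" unfolding U_def wf_set_def using f mcs_wf[OF canon_worlds_mcs] by fastforce
  then obtain v where v: "mcs m n v" "U \<subseteq> v"
    using lindenbaum canon_choices_consistent[OF assms] unfolding U_def by blast
  have one: "1 \<in> {1..m}" using m1 by simp
  have "{b. Stit 1 b \<in> f 1} \<subseteq> v" using v(2) one unfolding U_def by blast
  then have "v \<in> canon_worlds m n G0" using canon_worlds_Stit_successor[OF M _ one v(1)] f one by blast
  moreover have "\<forall>i\<in>{1..m}. canon_rel i (f i) v" using v unfolding canon_rel_def U_def by blast
  ultimately show ?thesis by blast
qed

lemma canon_no_separating_choices:
  assumes n0: "n > 0" and M: "mcs m n G0" and i: "i \<in> {1..m}"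
    and ws: "\<forall>k\<le>n. ws k \<in> canon_worlds m n G0" and wf: "\<forall>k\<le>n. wf_fm m (\<phi> k)"
    and own: "\<forall>k\<le>n. sat (canon_worlds m n G0) canon_rel canon_val (ws k) (Stit i (\<phi> k))"
    and other: "\<forall>k\<le>n. \<forall>j\<le>n. j \<noteq> k \<longrightarrow> \<not> sat (canon_worlds m n G0) canon_rel canon_val (ws j) (\<phi> k)"
  shows False
proof -
  let ?sat = "sat (canon_worlds m n G0) canon_rel canon_val"
  define as where "as = map \<phi> [0..<n]"
  let ?F = "\<lambda>k. Dia (Conjs (map neg (take k as) @ [Stit i (as ! k)]))"
  have ax: "Ldm m n (imp (Conjs (map ?F [0..<n])) (Disjs as))"
    by (rule Ldm.APC[OF n0 i]) (use wf in \<open>auto simp: as_def\<close>)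
  have "?sat (ws n) (imp (Conjs (map ?F [0..<n])) (Disjs as))"
    by (rule canon_sat_theorem[OF M _ ax]) (use ws in simp)
  moreover have "?sat (ws n) (?F k)" if k: "k < n" for k
  proof -
    have "?sat (ws k) (Conjs (map neg (take k as) @ [Stit i (as ! k)]))"
      using k own other by (auto simp: sat_Conjs as_def take_map)
    then show ?thesis using ws k unfolding sat.simps(6) by auto
  qed
  ultimately have "?sat (ws n) (Disjs as)" using n0 by (simp add: sat_imp sat_Conjs)
  then obtain k where "k < n" "?sat (ws n) (\<phi> k)" using n0 by (auto simp: sat_Disjs as_def)
  then show False using other by auto
qed

lemma canon_apc:
  assumes n0: "n > 0" and M: "mcs m n G0" and i: "i \<in> {1..m}" and ws: "\<forall>k\<le>n. ws k \<in> canon_worlds m n G0"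
  shows "\<exists>k<n. \<exists>j. k < j \<and> j \<le> n \<and> canon_rel i (ws k) (ws j)"
proof (rule ccontr)
  assume H: "\<not> ?thesis"
  have unrelated: "\<exists>a. Stit i a \<in> ws k \<and> a \<notin> ws j" if "k \<le> n" "j \<le> n" "k \<noteq> j" for k j
  proof (cases "k < j")
    case True
    moreover have "k < n" using True that(2) by simp
    ultimately show ?thesis using H that(2) unfolding canon_rel_def by blast
  next
    case False
    then have "\<not> canon_rel i (ws j) (ws k)" using H that by auto
    then have "\<not> canon_rel i (ws k) (ws j)" using canon_rel_sym[OF M i] ws that by blast
    then show ?thesis unfolding canon_rel_def by auto
  qed
  define \<alpha> where "\<alpha> = (\<lambda>k j. SOME a. Stit i a \<in> ws k \<and> a \<notin> ws j)"
  have \<alpha>: "Stit i (\<alpha> k j) \<in> ws k \<and> \<alpha> k j \<notin> ws j" if "k \<le> n" "j \<le> n" "k \<noteq> j" for k j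
    unfolding \<alpha>_def by (rule someI_ex) (rule unrelated[OF that])
  define \<phi> where "\<phi> = (\<lambda>k. Conjs (map (\<alpha> k) (filter (\<lambda>j. j \<noteq> k) [0..<Suc n]) @ [TT]))"
  have wf_\<alpha>: "wf_fm m (\<alpha> k j)" if "k \<le> n" "j \<le> n" "k \<noteq> j" for k j
    using \<alpha>[OF that] mcs_wf[OF canon_worlds_mcs] ws that by fastforce
  show False
  proof (rule canon_no_separating_choices[OF n0 M i ws])
    show "\<forall>k\<le>n. wf_fm m (\<phi> k)" using wf_\<alpha> by (auto simp: \<phi>_def intro!: wf_Conjs simp del: upt_Suc)
    have "sat (canon_worlds m n G0) canon_rel canon_val (ws k) (Stit i (\<phi> k))" if "k \<le> n" for k
      unfolding \<phi>_def by (rule canon_sat_Stit_Conjs[OF M]) (use \<alpha> ws that in \<open>auto simp del: upt_Suc\<close>)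
    then show "\<forall>k\<le>n. sat (canon_worlds m n G0) canon_rel canon_val (ws k) (Stit i (\<phi> k))" by blast
    show "\<forall>k\<le>n. \<forall>j\<le>n. j \<noteq> k \<longrightarrow> \<not> sat (canon_worlds m n G0) canon_rel canon_val (ws j) (\<phi> k)"
    proof (intro allI impI notI)
      fix k j assume kj: "k \<le> n" "j \<le> n" "j \<noteq> k"
        and "sat (canon_worlds m n G0) canon_rel canon_val (ws j) (\<phi> k)"
      then have "sat (canon_worlds m n G0) canon_rel canon_val (ws j) (\<alpha> k j)"
        by (auto simp: \<phi>_def sat_Conjs simp del: upt_Suc)
      then have "\<alpha> k j \<in> ws j" using canon_truth[OF M] ws wf_\<alpha> kj by auto
      then show False using \<alpha> kj by auto
    qed
  qed
qed

lemma canon_frame: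
  assumes m1: "1 \<le> m" and M: "mcs m n G0"
  shows "ldm_frame m n (canon_worlds m n G0) canon_rel"
proof -
  have "\<forall>i\<in>{1..m}. \<forall>x\<in>canon_worlds m n G0. canon_rel i x x" using canon_rel_refl[OF M] by blast
  moreover have "\<forall>i\<in>{1..m}. \<forall>x\<in>canon_worlds m n G0. \<forall>y\<in>canon_worlds m n G0. \<forall>z\<in>canon_worlds m n G0.
      canon_rel i x y \<longrightarrow> canon_rel i x z \<longrightarrow> canon_rel i y z"
    using canon_rel_eucl[OF M] by blast
  moreover have "\<forall>f. (\<forall>i\<in>{1..m}. f i \<in> canon_worlds m n G0) \<longrightarrow>
      (\<exists>v\<in>canon_worlds m n G0. \<forall>i\<in>{1..m}. canon_rel i (f i) v)"
    using canon_ioa[OF m1 M] by blast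
  moreover have "n > 0 \<longrightarrow> (\<forall>i\<in>{1..m}. \<forall>ws. (\<forall>k\<le>n. ws k \<in> canon_worlds m n G0) \<longrightarrow>
      (\<exists>k<n. \<exists>j. k < j \<and> j \<le> n \<and> canon_rel i (ws k) (ws j)))"
    using canon_apc[OF _ M] by blast
  ultimately show ?thesis unfolding ldm_frame_def by blast
qed

lemma consistent_neg_of_not_Ldm: "wf_fm m a \<Longrightarrow> \<not> Ldm m n a \<Longrightarrow> consistent m n {neg a}"
  unfolding consistent_def
proof
  assume wa: "wf_fm m a" and nL: "\<not> Ldm m n a" and "Ldm_derives m n {neg a} FF"
  then obtain L where L: "set L \<subseteq> {neg a}" "Ldm m n (imps L FF)" unfolding Ldm_derives_def by blast
  have wL: "\<forall>y\<in>set [neg a]. wf_fm m y" using wa by simp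
  have "\<forall>x\<in>set L. Ldm m n (imps [neg a] x)" using L(1) imps_assm[OF wL] by auto
  then have "Ldm m n (imps [neg a] FF)" using imps_trans[OF wL L(2)] by blast
  then have "Ldm m n a" using Ldm.MP[OF Ldm_by_contradiction[OF wa]] by simp
  then show False using nL by blast
qed

theorem Ldm_of_derivable: "1 \<le> m \<Longrightarrow> wf_fm m a \<Longrightarrow> derivable m n ({#}, {#(w, a)#}) \<Longrightarrow> Ldm m n a"
proof (rule ccontr)
  assume m1: "1 \<le> m" and wa: "wf_fm m a" and d: "derivable m n ({#}, {#(w, a)#})" and nL: "\<not> Ldm m n a"
  obtain G0 where G0: "mcs m n G0" "neg a \<in> G0"
    using lindenbaum[OF _ consistent_neg_of_not_Ldm[OF wa nL]] wa unfolding wf_set_def by auto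
  have "sat (canon_worlds m n G0) canon_rel canon_val G0 a"
    by (rule derivable_sound[OF d canon_frame[OF m1 G0(1)] canon_root[OF G0(1)]])
  then have "a \<in> G0" using canon_truth[OF G0(1) canon_root[OF G0(1)] wa] by blast
  then show False using mcs_not_both[OF G0(1)] G0(2) by blast
qed

theorem theorem2:
  fixes m n :: nat
  assumes "m \<ge> 1"
  shows
   "(\<forall>R G w a. wf_seq m (R, G) \<longrightarrow> wf_fm m a \<longrightarrow>
        derivable m n (R, add_mset (w, a) (add_mset (w, neg a) G)))
  \<and> (\<forall>S h x y. wf_seq m S \<longrightarrow> deriv m n h S \<longrightarrow> deriv m n h (subst_seq y x S))
  \<and> (\<forall>ps S h. wf_seq m S \<longrightarrow> rule m n ps S \<longrightarrow> deriv m n h S \<longrightarrow>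
        (\<forall>P\<in>set ps. deriv m n h P))
  \<and> (\<forall>R G R' G' h. wf_seq m (R, G) \<longrightarrow> wf_seq m (R', G') \<longrightarrow> deriv m n h (R, G) \<longrightarrow>
        deriv m n h (R + R', G' + G))
  \<and> (\<forall>R R' G h. wf_seq m (R + R' + R', G) \<longrightarrow> deriv m n h (R + R' + R', G) \<longrightarrow>
        deriv m n h (R + R', G))
  \<and> (\<forall>R G G' h. wf_seq m (R, G' + G' + G) \<longrightarrow> deriv m n h (R, G' + G' + G) \<longrightarrow>
        deriv m n h (R, G' + G))
  \<and> (\<forall>R G x a. wf_seq m (R, G) \<longrightarrow> wf_fm m a \<longrightarrow>
        derivable m n (R, add_mset (x, a) G) \<longrightarrow> derivable m n (R, add_mset (x, neg a) G) \<longrightarrow>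
        derivable m n (R, G))
  \<and> (\<forall>a w. wf_fm m a \<longrightarrow> (derivable m n ({#}, {#(w, a)#}) \<longleftrightarrow> Ldm m n a))"
proof (intro conjI)
  show "\<forall>R G w a. wf_seq m (R, G) \<longrightarrow> wf_fm m a \<longrightarrow>
      derivable m n (R, add_mset (w, a) (add_mset (w, neg a) G))"
    using derivable_identity by blast
  show "\<forall>S h x y. wf_seq m S \<longrightarrow> deriv m n h S \<longrightarrow> deriv m n h (subst_seq y x S)"
    unfolding subst_seq_eq_relabel using deriv_relabel by blast
  show "\<forall>ps S h. wf_seq m S \<longrightarrow> rule m n ps S \<longrightarrow> deriv m n h S \<longrightarrow> (\<forall>P\<in>set ps. deriv m n h P)"
    using deriv_rule_inv by blast
  show "\<forall>R G R' G' h. wf_seq m (R, G) \<longrightarrow> wf_seq m (R', G') \<longrightarrow> deriv m n h (R, G) \<longrightarrow>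
      deriv m n h (R + R', G' + G)"
  proof (intro allI impI)
    fix R G R' G' h assume "deriv m n h (R, G)"
    from deriv_weaken[OF this, of "(R', G')"] show "deriv m n h (R + R', G' + G)" by (simp add: add.commute)
  qed
  show "\<forall>R R' G h. wf_seq m (R + R' + R', G) \<longrightarrow> deriv m n h (R + R' + R', G) \<longrightarrow> deriv m n h (R + R', G)"
    using deriv_contract_rels by blast
  show "\<forall>R G G' h. wf_seq m (R, G' + G' + G) \<longrightarrow> deriv m n h (R, G' + G' + G) \<longrightarrow> deriv m n h (R, G' + G)"
    using deriv_contract_fms by blast
  show "\<forall>R G x a. wf_seq m (R, G) \<longrightarrow> wf_fm m a \<longrightarrow> derivable m n (R, add_mset (x, a) G) \<longrightarrow>
      derivable m n (R, add_mset (x, neg a) G) \<longrightarrow> derivable m n (R, G)"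
    using derivable_cut by blast
  show "\<forall>a w. wf_fm m a \<longrightarrow> (derivable m n ({#}, {#(w, a)#}) \<longleftrightarrow> Ldm m n a)"
  proof (intro allI impI iffI)
    fix a w assume "wf_fm m a" and "derivable m n ({#}, {#(w, a)#})"
    then show "Ldm m n a" by (rule Ldm_of_derivable[OF assms])
  next
    fix a w assume "wf_fm m a" and "Ldm m n a"
    from derivable_of_Ldm[OF this(2) assms, where R = "{#}" and w = w and G = "{#}"]
    show "derivable m n ({#}, {#(w, a)#})" by simp
  qed
qed

end
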